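(* Let $\beta\in(0,1)$, $0<\varepsilon\le\pi/39$, and let $G=(V,E)$ be an $\varepsilon$-regular graph with $\max_{\gamma\in\Gamma(G)}\theta_{\rm ex}(\gamma)<\frac{\pi}{10}-\frac75\varepsilon$. Let $s_1\in\mathcal{S}$ and $s_2\in\mathcal{S}^\perp(s_1)$. Then (i) $F_{{\rm bond},\beta}(G)\ge 2(1-\beta)\max\{l(s_1),l(s_2)\}+2\min\{l(s_1),l(s_2)\}$; (ii) if $\mathrm{span}(s_1)\subsetneq V$ and $\mathrm{span}(s_2)\subsetneq V$, then $F_{{\rm bond},\beta}(G)\ge 2(1-\beta)\max\{l(s_1),l(s_2)\}+2\min\{l(s_1),l(s_2)\}+(4-2\beta)$.
   Context: Substrate $\mathcal{L}^-=\mathbb{Z}^2\cap\{x_2\le0\}$; fix $r_0\in(1,\sqrt2)$. $\theta_{x,y,z}\in[0,2\pi)$ is the clockwise angle between $x-y$ and $z-y$. For a graph $G=(V,E)$ with $V\subset\{x_2>0\}$ finite: $\mathcal{N}(x,E)=\{y\in V:\{x,y\}\in E\}$, $\mathcal{N}_{\mathcal{L}^-}(x)=\{y\in\mathcal{L}^-:|x-y|\le r_0\}$; $F_{{\rm bond},\beta}(G)=\sum_{x\in V}(4-\#\mathcal{N}(x,E)-2\beta\#\mathcal{N}_{\mathcal{L}^-}(x))$. Bonds: edges of $E$, pairs $\{x,z\}$ with $x\in V$, $z\in\mathcal{N}_{\mathcal{L}^-}(x)$, pairs $\{z,z'\}\subset\mathcal{L}^-$ with $|z-z'|=1$; bond angle: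 $\theta_{x,y,z}$, $x,y,z$ pairwise distinct in $V\cup\mathcal{L}^-$, $\{x,y\},\{y,z\}$ bonds. $G$ is $\varepsilon$-regular if $|x-y|\ge1-\varepsilon$ for distinct $x,y\in V\cup\mathcal{L}^-$ and all bond angles lie in $[\pi/2-\varepsilon,\pi/2+\varepsilon]\cup[\pi-\varepsilon,\pi+\varepsilon]\cup[3\pi/2-\varepsilon,3\pi/2+\varepsilon]$. Straight paths: $\gamma=(x_1,\dots,x_n)$, $n\ge2$, $x_i\in V$, $\{x_i,x_{i+1}\}\in E$, $\theta_{x_{i+1},x_i,x_{i-1}}\in[\pi-\varepsilon,\pi+\varepsilon]$ for $2\le i\le n-1$, edges pairwise distinct; $\Gamma(G)$ their set; $\theta_{\rm ex}(\gamma)=\sum_{i=2}^{n-1}|\theta_{x_{i+1},x_i,x_{i-1}}-\pi|$. $\mathcal{S}_\Gamma$: straight paths maximal under inclusion as consecutive subpaths (paths identified with reversals). $V_i=\{x:\#\mathcal{N}(x,E)=i\}$, $V_2^\pi=\{x\in V_2:\theta_{x_1,x,x_2}\in[\pi-\varepsilon,\pi+\varepsilon],\ \mathcal{N}(x,E)=\{x_1,x_2\}\}$. Strata $\mathcal{S}$: multiset of elements of $\mathcal{S}_\Gamma$, two copies of $(x)$ per $x\in V_0$, one copy of $(x)$ per $x\in V_1\cup V_2^\pi$. $s=(x_1,\dots,x_n)\in\mathcal{S}_\Gamma$ is interacting if some $z_0\in\mathcal{N}_{\mathcal{L}^-}(x_1)$ has $\theta_{z_0,x_1,x_2}\in[\pi-\varepsilon,\pi+\varepsilon]$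 or some $z_{n+1}\in\mathcal{N}_{\mathcal{L}^-}(x_n)$ has $\theta_{x_{n-1},x_n,z_{n+1}}\in[\pi-\varepsilon,\pi+\varepsilon]$. $\mathcal{S}_{\rm int}$: interacting elements of $\mathcal{S}_\Gamma$, one copy of $(x)$ per $x\in V_0\cup V_2^\pi$ with $\mathcal{N}_{\mathcal{L}^-}(x)\ne\emptyset$, and $(x)$ per $x\in V_1$ with $\mathcal{N}_{\mathcal{L}^-}(x)\ne\emptyset$ not on any interacting element of $\mathcal{S}_\Gamma$; $\mathcal{S}_{\rm no}=\mathcal{S}\setminus\mathcal{S}_{\rm int}$. $l((x_1,\dots,x_n))=n$. $\mathcal{S}^\perp(s)$: elements of $\mathcal{S}$ other than $s$ sharing a point with $s$. $\mathrm{span}(s)=\bigcup_{s'\in\mathcal{S}^\perp(s)}\{$points of $s'\}\subset V$. *)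

theory Defs
  imports "HOL-Analysis.Analysis" "HOL-Library.Multiset" "HOL-Library.Sublist"
begin

text \<open>Points of the plane are complex numbers; x_2 is the imaginary part.\<close>

definition substrate :: "complex set" where
  "substrate = {z. Re z \<in> \<int> \<and> Im z \<in> \<int> \<and> Im z \<le> 0}"

text \<open>Clockwise angle between x - y and z - y, in [0, 2 pi).\<close>
definition ang :: "complex \<Rightarrow> complex \<Rightarrow> complex \<Rightarrow> real" where
  "ang x y z = (let a = Arg ((x - y) / (z - y)) in if a < 0 then a + 2 * pi else a)"

definition inwin :: "real \<Rightarrow> real \<Rightarrow> real \<Rightarrow> bool" where
  "inwin \<epsilon> c t \<longleftrightarrow> c - \<epsilon> \<le> t \<and> t \<le> c + \<epsilon>"

definition admissible_graph :: "complex set \<Rightarrow> complex set set \<Rightarrow> bool" where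
  "admissible_graph V E \<longleftrightarrow> finite V \<and> (\<forall>x\<in>V. Im x > 0) \<and>
     E \<subseteq> {{x, y} | x y. x \<in> V \<and> y \<in> V \<and> x \<noteq> y}"

definition nbr :: "complex set \<Rightarrow> complex set set \<Rightarrow> complex \<Rightarrow> complex set" where
  "nbr V E x = {y \<in> V. {x, y} \<in> E}"

definition nbrL :: "real \<Rightarrow> complex \<Rightarrow> complex set" where
  "nbrL r0 x = {y \<in> substrate. cmod (x - y) \<le> r0}"

definition F_bond :: "real \<Rightarrow> real \<Rightarrow> complex set \<Rightarrow> complex set set \<Rightarrow> real" where
  "F_bond r0 \<beta> V E = (\<Sum>x\<in>V. 4 - real (card (nbr V E x)) - 2 * \<beta> * real (card (nbrL r0 x)))"

definition bond :: "real \<Rightarrow> complex set \<Rightarrow> complex set set \<Rightarrow> complex \<Rightarrow> complex \<Rightarrow> bool" where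
  "bond r0 V E p q \<longleftrightarrow> {p, q} \<in> E
     \<or> (p \<in> V \<and> q \<in> nbrL r0 p) \<or> (q \<in> V \<and> p \<in> nbrL r0 q)
     \<or> (p \<in> substrate \<and> q \<in> substrate \<and> cmod (p - q) = 1)"

definition eps_regular :: "real \<Rightarrow> real \<Rightarrow> complex set \<Rightarrow> complex set set \<Rightarrow> bool" where
  "eps_regular r0 \<epsilon> V E \<longleftrightarrow>
     (\<forall>x \<in> V \<union> substrate. \<forall>y \<in> V \<union> substrate. x \<noteq> y \<longrightarrow> cmod (x - y) \<ge> 1 - \<epsilon>) \<and>
     (\<forall>x \<in> V \<union> substrate. \<forall>y \<in> V \<union> substrate. \<forall>z \<in> V \<union> substrate.
        x \<noteq> y \<and> y \<noteq> z \<and> x \<noteq> z \<and> bond r0 V E x y \<and> bond r0 V E y z \<longrightarrow>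
        inwin \<epsilon> (pi/2) (ang x y z) \<or> inwin \<epsilon> pi (ang x y z) \<or> inwin \<epsilon> (3*pi/2) (ang x y z))"

text \<open>Straight paths, as lists (0-based indices).\<close>
definition straight :: "real \<Rightarrow> complex set \<Rightarrow> complex set set \<Rightarrow> complex list \<Rightarrow> bool" where
  "straight \<epsilon> V E \<gamma> \<longleftrightarrow> length \<gamma> \<ge> 2 \<and> set \<gamma> \<subseteq> V \<and>
     (\<forall>i. Suc i < length \<gamma> \<longrightarrow> {\<gamma> ! i, \<gamma> ! Suc i} \<in> E) \<and>
     (\<forall>i. 0 < i \<and> Suc i < length \<gamma> \<longrightarrow> inwin \<epsilon> pi (ang (\<gamma> ! Suc i) (\<gamma> ! i) (\<gamma> ! (i - 1)))) \<and>
     distinct (map (\<lambda>i. {\<gamma> ! i, \<gamma> ! Suc i}) [0..<length \<gamma> - 1])"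

definition theta_ex :: "complex list \<Rightarrow> real" where
  "theta_ex \<gamma> = (\<Sum>i\<in>{1..<length \<gamma> - 1}. \<bar>ang (\<gamma> ! Suc i) (\<gamma> ! i) (\<gamma> ! (i - 1)) - pi\<bar>)"

text \<open>A path up to reversal is represented by its class {gamma, rev gamma}.\<close>
definition pclass :: "complex list \<Rightarrow> complex list set" where
  "pclass \<gamma> = {\<gamma>, rev \<gamma>}"

definition maximal_straight :: "real \<Rightarrow> complex set \<Rightarrow> complex set set \<Rightarrow> complex list \<Rightarrow> bool" where
  "maximal_straight \<epsilon> V E \<gamma> \<longleftrightarrow> straight \<epsilon> V E \<gamma> \<and>
     (\<forall>\<gamma>'. straight \<epsilon> V E \<gamma>' \<and> (sublist \<gamma> \<gamma>' \<or> sublist (rev \<gamma>) \<gamma>') \<longrightarrow> length \<gamma>' = length \<gamma>)"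

definition S_Gamma :: "real \<Rightarrow> complex set \<Rightarrow> complex set set \<Rightarrow> complex list set set" where
  "S_Gamma \<epsilon> V E = pclass ` {\<gamma>. maximal_straight \<epsilon> V E \<gamma>}"

definition Vdeg :: "complex set \<Rightarrow> complex set set \<Rightarrow> nat \<Rightarrow> complex set" where
  "Vdeg V E i = {x \<in> V. card (nbr V E x) = i}"

definition V2pi :: "real \<Rightarrow> complex set \<Rightarrow> complex set set \<Rightarrow> complex set" where
  "V2pi \<epsilon> V E = {x \<in> Vdeg V E 2. \<exists>x1 x2. nbr V E x = {x1, x2} \<and> inwin \<epsilon> pi (ang x1 x x2)}"

definition strata :: "real \<Rightarrow> complex set \<Rightarrow> complex set set \<Rightarrow> complex list set multiset" where
  "strata \<epsilon> V E = mset_set (S_Gamma \<epsilon> V E)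
     + image_mset (\<lambda>x. pclass [x])
         (mset_set (Vdeg V E 0) + mset_set (Vdeg V E 0) + mset_set (Vdeg V E 1 \<union> V2pi \<epsilon> V E))"

definition spoints :: "complex list set \<Rightarrow> complex set" where
  "spoints s = \<Union> (set ` s)"

definition slen :: "complex list set \<Rightarrow> nat" where
  "slen s = length (SOME \<gamma>. \<gamma> \<in> s)"

definition sperp :: "complex list set multiset \<Rightarrow> complex list set \<Rightarrow> complex list set multiset" where
  "sperp S s = filter_mset (\<lambda>s'. spoints s' \<inter> spoints s \<noteq> {}) (S - {#s#})"

definition sspan :: "complex list set multiset \<Rightarrow> complex list set \<Rightarrow> complex set" where
  "sspan S s = \<Union> (spoints ` set_mset (sperp S s))"

end

theory Submission
  imports Defs
begin

text \<open>
  Every stratum, counted with its multiplicity, is a copy of a set of points carrying directions: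
  a maximal straight path has its edge directions, a singleton of degree one or two the direction
  perpendicular to its bonds, and the two copies of an isolated vertex the directions \<open>\<i>\<close> and \<open>1\<close>.
  By \<open>\<epsilon>\<close>-regularity two different copies through a common point have almost perpendicular
  directions, while along a single copy the direction drifts by less than
  \<open>\<delta> = \<pi>/10 - 7\<epsilon>/5\<close>, the bound on the bending \<open>\<theta>\<^sub>e\<^sub>x\<close>. Going around a chain of copies
  therefore turns a direction by a multiple of \<open>\<pi>/2\<close> up to a small error, which excludes
  triangles and pentagons of copies and short chains between two vertical copies (copies through
  vertices bonded to the substrate). Since moreover every vertex lies on two copies and two copies
  share at most one point, the copies crossing \<open>s\<^sub>1\<close> (one through each of its points) and those
  crossing \<open>s\<^sub>2\<close> form two disjoint families of sizes \<open>l(s\<^sub>1)\<close> and \<open>l(s\<^sub>2)\<close>, only one of which contains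
  vertical copies. A count of free valences shows \<open>F\<^sub>b\<^sub>o\<^sub>n\<^sub>d \<ge> 2|T| - 2\<beta>|T \<inter> vertical copies|\<close>
  for every family \<open>T\<close> of copies; this gives (i), and in case (ii) two more copies through
  vertices outside the spans can be added to the family.
\<close>

section \<open>Angles between vectors and between lines\<close>

definition vangle :: "complex \<Rightarrow> complex \<Rightarrow> real" where
  "vangle u v = \<bar>Arg (u / v)\<bar>"

definition langle :: "complex \<Rightarrow> complex \<Rightarrow> real" where
  "langle u v = min (vangle u v) (pi - vangle u v)"

lemma abs_Arg_le: "\<bar>Arg z\<bar> \<le> pi"
  using mpi_less_Arg[of z] Arg_le_pi[of z] by auto

lemma abs_Arg_mult_le: assumes "z \<noteq> 0" "w \<noteq> 0" shows "\<bar>Arg (z * w)\<bar> \<le> \<bar>Arg z\<bar> + \<bar>Arg w\<bar>"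
proof -
  have "-pi < Arg z" "Arg z \<le> pi" "-pi < Arg w" "Arg w \<le> pi" "-pi < Arg (z*w)" "Arg (z*w) \<le> pi"
    using mpi_less_Arg Arg_le_pi by auto
  then show ?thesis using Arg_times'[OF assms(1) assms(2)] by (auto split: if_splits)
qed

lemma abs_Arg_uminus: assumes "z \<noteq> 0" shows "\<bar>Arg (- z)\<bar> = pi - \<bar>Arg z\<bar>"
  using Arg_minus[OF assms] mpi_less_Arg[of z] Arg_le_pi[of z] by auto

lemma vangle_nonneg: "0 \<le> vangle u v" by (simp add: vangle_def)
lemma vangle_le_pi: "vangle u v \<le> pi" by (simp add: vangle_def abs_Arg_le)

lemma vangle_commute: "vangle u v = vangle v u"
  unfolding vangle_def using Arg_inverse[of "u / v"] inverse_divide[of u v] by (metis abs_minus_cancel)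

lemma vangle_triangle: assumes "u \<noteq> 0" "v \<noteq> 0" "w \<noteq> 0" shows "vangle u w \<le> vangle u v + vangle v w"
proof -
  have "u / w = (u / v) * (v / w)" using assms by (simp add: field_simps)
  then show ?thesis unfolding vangle_def using abs_Arg_mult_le[of "u/v" "v/w"] assms by simp
qed

lemma vangle_uminus_left: assumes "u \<noteq> 0" "v \<noteq> 0" shows "vangle (- u) v = pi - vangle u v"
proof -
  have "(- u) / v = - (u / v)" by simp
  then show ?thesis unfolding vangle_def using abs_Arg_uminus[of "u/v"] assms by simp
qed

lemma vangle_uminus_right: assumes "u \<noteq> 0" "v \<noteq> 0" shows "vangle u (- v) = pi - vangle u v"
  using vangle_uminus_left[OF assms(2,1)] vangle_commute by metis

lemma vangle_self: "vangle u u = 0"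
  by (cases "u = 0") (auto simp: vangle_def Arg_zero)

lemma vangle_mult_left: assumes "c \<noteq> 0" shows "vangle (c * u) (c * v) = vangle u v"
  using assms by (simp add: vangle_def)

lemma vangle_uminus_both: "vangle (- u) (- v) = vangle u v"
  using vangle_mult_left[of "-1" u v] by simp

lemma Re_eq_norm_cos_Arg: "Re z = cmod z * cos (Arg z)"
proof (cases "z = 0")
  case False
  have "z = of_real (cmod z) * exp (\<i> * of_real (Arg z))" using Arg_eq[OF False] by simp
  then have "Re z = Re (of_real (cmod z) * exp (\<i> * of_real (Arg z)))" by simp
  also have "\<dots> = cmod z * cos (Arg z)" by (simp add: Re_exp)
  finally show ?thesis .
qed simp

lemma abs_Arg_le_iff: assumes "z \<noteq> 0" "0 \<le> t" "t \<le> pi"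
  shows "\<bar>Arg z\<bar> \<le> t \<longleftrightarrow> cos t * cmod z \<le> Re z"
proof -
  have r: "Re z = cmod z * cos \<bar>Arg z\<bar>" using Re_eq_norm_cos_Arg by (simp add: abs_if)
  have p: "0 < cmod z" using assms by simp
  have "\<bar>Arg z\<bar> \<le> t \<longleftrightarrow> cos t \<le> cos \<bar>Arg z\<bar>"
    using cos_mono_le_eq[of t "\<bar>Arg z\<bar>"] abs_Arg_le[of z] assms by simp
  also have "\<dots> \<longleftrightarrow> cos t * cmod z \<le> cmod z * cos \<bar>Arg z\<bar>"
    using p by (simp add: mult.commute)
  finally show ?thesis using r by simp
qed

lemma vangle_add_le:
  assumes "u \<noteq> 0" "v \<noteq> 0" "w \<noteq> 0" "0 \<le> t" "t < pi / 2" "vangle u w \<le> t" "vangle v w \<le> t"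
  shows "u + v \<noteq> 0 \<and> vangle (u + v) w \<le> t"
proof -
  have tp: "t \<le> pi" using assms by simp
  have ct: "0 < cos t" using assms by (intro cos_gt_zero_pi) auto
  have 1: "cos t * cmod (u / w) \<le> Re (u / w)"
    using abs_Arg_le_iff[of "u/w" t] assms tp by (simp add: vangle_def)
  have 2: "cos t * cmod (v / w) \<le> Re (v / w)"
    using abs_Arg_le_iff[of "v/w" t] assms tp by (simp add: vangle_def)
  have "cmod ((u + v) / w) \<le> cmod (u / w) + cmod (v / w)"
    by (metis add_divide_distrib norm_triangle_ineq)
  then have "cos t * cmod ((u + v) / w) \<le> cos t * cmod (u / w) + cos t * cmod (v / w)"
    using ct by (metis distrib_left mult_left_mono order_less_imp_le)
  also have "\<dots> \<le> Re ((u + v) / w)" using 1 2 by (simp add: add_divide_distrib)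
  finally have 3: "cos t * cmod ((u + v) / w) \<le> Re ((u + v) / w)" .
  have "0 < cos t * cmod (u / w)" "0 \<le> cos t * cmod (v / w)" using ct assms by simp_all
  then have "0 < Re ((u + v) / w)" using 1 2 by (simp add: add_divide_distrib)
  then have nz: "u + v \<noteq> 0" by auto
  then show ?thesis using abs_Arg_le_iff[of "(u+v)/w" t] 3 assms tp by (simp add: vangle_def)
qed

lemma langle_le_vangle: "langle u v \<le> vangle u v" by (simp add: langle_def)
lemma langle_commute: "langle u v = langle v u" by (simp add: langle_def vangle_commute[of u v])

lemma langle_uminus_left: assumes "u \<noteq> 0" "v \<noteq> 0" shows "langle (- u) v = langle u v"
  using vangle_uminus_left[OF assms] by (simp add: langle_def)
lemma langle_uminus_right: assumes "u \<noteq> 0" "v \<noteq> 0" shows "langle u (- v) = langle u v"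
  using vangle_uminus_right[OF assms] by (simp add: langle_def)

lemma langle_uminus_cases: assumes "a \<noteq> 0" "b \<noteq> 0" "u = a \<or> u = - a" "u' = b \<or> u' = - b"
  shows "langle u u' = langle a b"
  using assms langle_uminus_left[of a b] langle_uminus_right[of a b] langle_uminus_left[of a "- b"] langle_uminus_right[of "- a" b] langle_uminus_right[of a b]
  by (elim disjE) auto

lemma langle_triangle: assumes "u \<noteq> 0" "v \<noteq> 0" "w \<noteq> 0" shows "langle u w \<le> langle u v + langle v w"
proof -
  obtain s where s: "s \<in> {1, -1::complex}" "langle u v = vangle (s * u) v"
    using vangle_uminus_left[OF assms(1,2)] unfolding langle_def
    by (metis insertCI min_def mult_1 mult_minus1)
  obtain r where r: "r \<in> {1, -1::complex}" "langle v w = vangle v (r * w)"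
    using vangle_uminus_right[OF assms(2,3)] unfolding langle_def
    by (metis insertCI min_def mult_1 mult_minus1)
  have "langle u w \<le> vangle (s * u) (r * w)"
    using s(1) r(1) vangle_uminus_left[of u w] vangle_uminus_right[of u w] vangle_uminus_both[of u w]
      assms by (auto simp: langle_def)
  also have "\<dots> \<le> vangle (s * u) v + vangle v (r * w)" using vangle_triangle s(1) r(1) assms by auto
  finally show ?thesis using s r by simp
qed

lemma Arg_mult_minus_ii: assumes "z \<noteq> 0"
  shows "Arg (z * (- \<i>)) = (if - pi / 2 < Arg z then Arg z - pi / 2 else Arg z + 3 * pi / 2)"
proof -
  have "Arg (- \<i>) = - pi / 2"
    using Arg_cnj[of "\<i>"] by (simp add: complex_is_Real_iff)
  then show ?thesis using Arg_times'[OF assms, of "- \<i>"] mpi_less_Arg[of z] Arg_le_pi[of z]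
    by (auto simp: algebra_simps)
qed

lemma langle_mult_ii_right: assumes "u \<noteq> 0" "v \<noteq> 0" shows "langle u (\<i> * v) = pi / 2 - langle u v"
proof -
  have "u / (\<i> * v) = (u / v) * (- \<i>)" by (simp add: divide_inverse mult_ac)
  then have "vangle u (\<i> * v) = \<bar>Arg ((u / v) * (- \<i>))\<bar>" by (simp add: vangle_def)
  also have "\<dots> = \<bar>(if - pi / 2 < Arg (u/v) then Arg (u/v) - pi / 2 else Arg (u/v) + 3 * pi / 2)\<bar>"
    using Arg_mult_minus_ii[of "u/v"] assms by simp
  finally show ?thesis using mpi_less_Arg[of "u/v"] Arg_le_pi[of "u/v"] pi_gt_zero
    by (auto simp: langle_def vangle_def min_def abs_if)
qed

lemma langle_mult_ii: "langle (\<i> * u) (\<i> * v) = langle u v"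
  using vangle_mult_left[of "\<i>"] by (simp add: langle_def)

lemma langle_self: "langle u u = 0" by (simp add: langle_def vangle_self)

lemma langle_ii_self: "u \<noteq> 0 \<Longrightarrow> langle u (\<i> * u) = pi / 2"
  using langle_mult_ii_right[of u u] langle_self by simp

lemma langle_1_ii: "langle 1 \<i> = pi / 2"
  using langle_ii_self[of 1] by simp

lemma langle_ii_le_of_perp: assumes "a \<noteq> 0" "b \<noteq> 0" "pi / 2 - e \<le> langle a b" shows "langle b (\<i> * a) \<le> e"
  using langle_mult_ii_right[of b a] assms langle_commute[of a b] by simp

lemma langle_ge_of_perp: assumes "\<bar>vangle u v - pi / 2\<bar> \<le> e" shows "pi / 2 - e \<le> langle u v"
  using assms by (auto simp: langle_def min_def abs_if split: if_splits)

lemma langle_le_of_opposite: assumes "pi - e \<le> vangle u v" shows "langle u v \<le> e"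
  using assms by (auto simp: langle_def min_def)

text \<open>The clockwise angle \<open>ang x y z \<in> [0, 2\<pi>)\<close> only enters through the windows around \<open>\<pi>/2\<close>, \<open>\<pi>\<close> and
  \<open>3\<pi>/2\<close>, which depend only on the unoriented angle \<open>vangle (x - y) (z - y)\<close>.\<close>

definition regular_angle :: "real \<Rightarrow> real \<Rightarrow> bool" where
  "regular_angle e a \<longleftrightarrow> \<bar>a - pi / 2\<bar> \<le> e \<or> pi - e \<le> a"

lemma inwin_pi_ang_iff: assumes "0 \<le> e"
  shows "inwin e pi (ang x y z) \<longleftrightarrow> pi - e \<le> vangle (x - y) (z - y)"
  using assms mpi_less_Arg[of "(x - y) / (z - y)"] Arg_le_pi[of "(x - y) / (z - y)"]
  by (auto simp: inwin_def ang_def vangle_def Let_def)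

lemma regular_angle_ang: assumes "0 \<le> e" "e < pi / 4"
  and "inwin e (pi/2) (ang x y z) \<or> inwin e pi (ang x y z) \<or> inwin e (3*pi/2) (ang x y z)"
  shows "regular_angle e (vangle (x - y) (z - y))"
  using assms mpi_less_Arg[of "(x - y) / (z - y)"] Arg_le_pi[of "(x - y) / (z - y)"]
  by (auto simp: inwin_def ang_def vangle_def Let_def regular_angle_def split: if_splits)

lemma abs_ang_minus_pi: "\<bar>ang x y z - pi\<bar> = pi - vangle (x - y) (z - y)"
  using mpi_less_Arg[of "(x - y) / (z - y)"] Arg_le_pi[of "(x - y) / (z - y)"]
  by (auto simp: ang_def vangle_def Let_def)

section \<open>Copies of the elements of a multiset\<close>

definition mcopies :: "'a multiset \<Rightarrow> ('a \<times> nat) set" where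
  "mcopies M = {(x, k). k < count M x}"

lemma finite_card_mcopies: "finite (mcopies M) \<and> card (mcopies M) = size M"
proof (induction M)
  case empty
  then show ?case by (simp add: mcopies_def)
next
  case (add a M)
  have "mcopies (add_mset a M) = insert (a, count M a) (mcopies M)"
    by (auto simp: mcopies_def less_Suc_eq split: if_splits)
  moreover have "(a, count M a) \<notin> mcopies M" by (simp add: mcopies_def)
  ultimately show ?case using add by simp
qed

lemma finite_mcopies: "finite (mcopies M)"
  using finite_card_mcopies by blast

lemma card_mcopies: "card (mcopies M) = size M"
  using finite_card_mcopies by blast

lemma mcopies_fst_in_diff: assumes "A \<in> mcopies M" "B \<in> mcopies M" "A \<noteq> B"
  shows "fst B \<in># M - {#fst A#}"
proof (cases "fst B = fst A")
  case True
  then have "snd A \<noteq> snd B" using assms(3) by (metis prod.expand)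
  then have "2 \<le> count M (fst A)" using assms(1,2) True by (auto simp: mcopies_def)
  then show ?thesis using True by (simp add: in_diff_count)
next
  case False
  then show ?thesis using assms(2) by (auto simp: mcopies_def in_diff_count intro: count_inI)
qed

lemma mcopies_obtain_other: assumes "A \<in> mcopies M" "x \<in># M - {#fst A#}"
  obtains B where "B \<in> mcopies M" "B \<noteq> A" "fst B = x"
proof (cases "x = fst A")
  case True
  let ?B = "(x, if snd A = 0 then 1 else 0::nat)"
  have "2 \<le> count M x" using assms(2) True by (simp add: in_diff_count)
  then have "?B \<in> mcopies M" by (auto simp: mcopies_def intro: count_inI)
  moreover have "?B \<noteq> A" using True by (cases A) auto
  ultimately show ?thesis using that by simp
next
  case False
  then show ?thesis using that[of "(x, 0)"] assms(2) by (cases A) (auto simp: mcopies_def in_diff_count)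
qed

section \<open>Regular graphs\<close>

locale regular_graph =
  fixes r0 \<epsilon> :: real and V :: "complex set" and E :: "complex set set"
  assumes eps_pos: "0 < \<epsilon>" and eps_le: "\<epsilon> \<le> pi / 39"
    and admissible: "admissible_graph V E" and regular: "eps_regular r0 \<epsilon> V E"
    and theta_ex_bound: "\<forall>\<gamma>. straight \<epsilon> V E \<gamma> \<longrightarrow> theta_ex \<gamma> < pi / 10 - 7 / 5 * \<epsilon>"
begin

abbreviation "\<delta> \<equiv> pi / 10 - 7 / 5 * \<epsilon>"
abbreviation "nb x \<equiv> nbr V E x"
abbreviation "spath \<gamma> \<equiv> straight \<epsilon> V E \<gamma>"
abbreviation "mpath \<gamma> \<equiv> maximal_straight \<epsilon> V E \<gamma>"
abbreviation "opposite x y z \<equiv> pi - \<epsilon> \<le> vangle (y - x) (z - x)"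

lemma eps_bounds: "\<epsilon> < pi / 24" "0 < \<delta>" "\<epsilon> < \<delta>" "4 * \<delta> + 7 * \<epsilon> < pi / 2" "5 * \<delta> + 5 * \<epsilon> < pi / 2"
  "3 * \<delta> + 3 * \<epsilon> < pi / 2" "2 * \<delta> + 5 * \<epsilon> < pi / 2"
  using eps_pos eps_le pi_gt_zero by auto

lemma finite_V: "finite V" using admissible by (simp add: admissible_graph_def)
lemma Im_V_pos: "x \<in> V \<Longrightarrow> 0 < Im x" using admissible by (simp add: admissible_graph_def)

lemma edgeD: assumes "{x, y} \<in> E" shows "x \<in> V" "y \<in> V" "x \<noteq> y"
proof -
  obtain a b where "{x, y} = {a, b}" "a \<in> V" "b \<in> V" "a \<noteq> b"
    using assms admissible by (auto simp: admissible_graph_def)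
  then show "x \<in> V" "y \<in> V" "x \<noteq> y" by (auto simp: doubleton_eq_iff)
qed

lemma finite_E: "finite E"
proof -
  have "E \<subseteq> Pow V" using admissible by (auto simp: admissible_graph_def)
  then show ?thesis using finite_V by (meson finite_Pow_iff finite_subset)
qed

lemma nbD: assumes "y \<in> nb x" shows "y \<in> V" "x \<in> V" "x \<noteq> y" "{x, y} \<in> E"
  using assms edgeD[of x y] by (auto simp: nbr_def)

lemma nb_iff: "y \<in> nb x \<longleftrightarrow> {x, y} \<in> E"
  using edgeD[of x y] by (auto simp: nbr_def)

lemma nb_sym: "y \<in> nb x \<Longrightarrow> x \<in> nb y"
  by (simp add: nb_iff insert_commute)

lemma finite_nb: "finite (nb x)" using finite_V by (simp add: nbr_def)

lemma Im_substrate_le: "z \<in> substrate \<Longrightarrow> Im z \<le> 0" by (simp add: substrate_def)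

lemma V_notin_substrate: "x \<in> V \<Longrightarrow> x \<notin> substrate" using Im_V_pos Im_substrate_le by force

lemma nbrL_substrate: "z \<in> nbrL r0 x \<Longrightarrow> z \<in> substrate" by (simp add: nbrL_def)

lemma regular_triple:
  assumes "x \<in> V \<union> substrate" "y \<in> V \<union> substrate" "z \<in> V \<union> substrate"
    "x \<noteq> y" "y \<noteq> z" "x \<noteq> z" "bond r0 V E x y" "bond r0 V E y z"
  shows "regular_angle \<epsilon> (vangle (x - y) (z - y))"
proof -
  have "inwin \<epsilon> (pi/2) (ang x y z) \<or> inwin \<epsilon> pi (ang x y z) \<or> inwin \<epsilon> (3*pi/2) (ang x y z)"
    using regular assms unfolding eps_regular_def by blast
  moreover have "0 \<le> \<epsilon>" "\<epsilon> < pi / 4" using eps_pos eps_bounds by auto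
  ultimately show ?thesis using regular_angle_ang by blast
qed

lemma regular_angle_nb: assumes "y \<in> nb x" "z \<in> nb x" "y \<noteq> z" shows "regular_angle \<epsilon> (vangle (y - x) (z - x))"
proof -
  have "bond r0 V E y x" using nbD(4)[OF assms(1)] by (simp add: bond_def insert_commute)
  moreover have "bond r0 V E x z" using nbD(4)[OF assms(2)] by (simp add: bond_def)
  ultimately show ?thesis using regular_triple[of y x z] nbD[OF assms(1)] nbD[OF assms(2)] assms(3) by auto
qed

lemma regular_angle_nbrL: assumes "y \<in> nb x" "z \<in> nbrL r0 x" shows "regular_angle \<epsilon> (vangle (y - x) (z - x))"
proof -
  have "bond r0 V E y x" using nbD(4)[OF assms(1)] by (simp add: bond_def insert_commute)
  moreover have "bond r0 V E x z" using assms nbD(2)[OF assms(1)] by (simp add: bond_def)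
  moreover have "y \<noteq> z" "x \<noteq> z"
    using V_notin_substrate nbD[OF assms(1)] nbrL_substrate[OF assms(2)] by auto
  ultimately show ?thesis using regular_triple[of y x z] nbD[OF assms(1)] nbrL_substrate[OF assms(2)] by auto
qed

text \<open>Bonds to the substrate are almost vertical: the substrate neighbours \<open>z \<plusminus> 1\<close> of \<open>z\<close> make \<open>x - z\<close>
  almost perpendicular to the real axis, and \<open>x\<close> lies above \<open>z\<close>.\<close>

lemma vangle_substrate_ii: assumes "x \<in> V" "z \<in> nbrL r0 x" shows "vangle (x - z) \<i> \<le> \<epsilon>"
proof -
  have zs: "z \<in> substrate" using assms nbrL_substrate by auto
  have z1: "z + 1 \<in> substrate" "z - 1 \<in> substrate" using zs by (auto simp: substrate_def)
  have xz: "x \<noteq> z" "x \<noteq> z + 1" "x \<noteq> z - 1" using assms zs z1 V_notin_substrate by auto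
  have b1: "bond r0 V E x z" using assms by (simp add: bond_def)
  have b2: "bond r0 V E z (z + 1)" "bond r0 V E z (z - 1)" using zs z1 by (auto simp: bond_def)
  have r1: "regular_angle \<epsilon> (vangle (x - z) ((z + 1) - z))"
    using regular_triple[of x z "z+1"] assms zs z1 xz b1 b2 by auto
  have r2: "regular_angle \<epsilon> (vangle (x - z) ((z - 1) - z))"
    using regular_triple[of x z "z-1"] assms zs z1 xz b1 b2 by auto
  have nz: "x - z \<noteq> 0" using xz by simp
  have "vangle (x - z) (-1) = pi - vangle (x - z) 1" using vangle_uminus_right[OF nz, of 1] by simp
  then have h: "\<bar>vangle (x - z) 1 - pi / 2\<bar> \<le> \<epsilon>"
    using r1 r2 eps_bounds vangle_nonneg[of "x - z" 1] vangle_le_pi[of "x-z" 1]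
      by (auto simp: regular_angle_def)
  then have "pi / 2 - \<epsilon> \<le> langle (x - z) 1" by (rule langle_ge_of_perp)
  then have p: "langle (x - z) \<i> \<le> \<epsilon>" using langle_mult_ii_right[OF nz, of 1] by simp
  show ?thesis
  proof (rule ccontr)
    assume "\<not> vangle (x - z) \<i> \<le> \<epsilon>"
    then have "pi - \<epsilon> \<le> vangle (x - z) \<i>" using p by (auto simp: langle_def min_def split: if_splits)
    then have "vangle (x - z) (- \<i>) \<le> \<epsilon>" using vangle_uminus_right[OF nz, of "\<i>"] by simp
    then have "cos \<epsilon> * cmod ((x - z) / (- \<i>)) \<le> Re ((x - z) / (- \<i>))"
      using abs_Arg_le_iff[of "(x - z) / (- \<i>)" \<epsilon>] nz eps_pos eps_bounds by (simp add: vangle_def)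
    moreover have "0 < cos \<epsilon> * cmod ((x - z) / (- \<i>))"
      using nz eps_bounds eps_pos by (intro mult_pos_pos cos_gt_zero_pi) auto
    moreover have "Re ((x - z) / (- \<i>)) = - Im (x - z)" by (simp add: complex_eq_iff)
    moreover have "Im (x - z) > 0" using Im_V_pos[OF assms(1)] Im_substrate_le[OF zs] by simp
    ultimately show False by linarith
  qed
qed

lemma card_nbrL_le_1: assumes "x \<in> V" shows "card (nbrL r0 x) \<le> 1"
proof -
  have "\<forall>a\<in>nbrL r0 x. \<forall>b\<in>nbrL r0 x. a = b"
  proof (intro ballI, rule ccontr)
    fix a b assume ab: "a \<in> nbrL r0 x" "b \<in> nbrL r0 x" "a \<noteq> b"
    have s: "a \<in> substrate" "b \<in> substrate" using ab nbrL_substrate by auto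
    have ne: "a \<noteq> x" "b \<noteq> x" using s assms V_notin_substrate by auto
    have "bond r0 V E a x" "bond r0 V E x b" using ab assms by (auto simp: bond_def)
    then have r: "regular_angle \<epsilon> (vangle (a - x) (b - x))"
      using regular_triple[of a x b] s assms ab ne by auto
    have "vangle (a - x) (b - x) \<le> vangle (a - x) (- \<i>) + vangle (- \<i>) (b - x)"
      using vangle_triangle[of "a - x" "- \<i>" "b - x"] ne by simp
    also have "vangle (a - x) (- \<i>) = vangle (x - a) \<i>" using vangle_uminus_both[of "x - a" "\<i>"] ne by simp
    also have "vangle (- \<i>) (b - x) = vangle (x - b) \<i>"
    proof -
      have "vangle (- \<i>) (b - x) = vangle (b - x) (- \<i>)" by (rule vangle_commute)
      also have "\<dots> = vangle (x - b) \<i>" using vangle_uminus_both[of "x - b" "\<i>"] ne by simp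
      finally show ?thesis .
    qed
    finally have "vangle (a - x) (b - x) \<le> 2 * \<epsilon>"
      using vangle_substrate_ii[OF assms ab(1)] vangle_substrate_ii[OF assms ab(2)] by simp
    then show False using r eps_bounds by (auto simp: regular_angle_def)
  qed
  then show ?thesis
  proof (cases "finite (nbrL r0 x)")
    case True then show ?thesis
      using card_le_Suc0_iff_eq[OF True] \<open>\<forall>a\<in>nbrL r0 x. \<forall>b\<in>nbrL r0 x. a = b\<close> by simp
  qed simp
qed

section \<open>Straight paths\<close>

definition edge_vec :: "complex list \<Rightarrow> nat \<Rightarrow> complex" where
  "edge_vec \<gamma> j = \<gamma> ! Suc j - \<gamma> ! j"

lemma distinct_map_upt_iff:
  "distinct (map f [0..<m]) \<longleftrightarrow> (\<forall>i j. i < j \<and> j < m \<longrightarrow> f i \<noteq> f j)"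
proof -
  have "distinct (map f [0..<m]) \<longleftrightarrow> inj_on f {0..<m}" by (simp add: distinct_map)
  also have "\<dots> \<longleftrightarrow> (\<forall>i j. i < j \<and> j < m \<longrightarrow> f i \<noteq> f j)"
    unfolding inj_on_def
  proof (intro iffI allI impI ballI)
    fix i j assume h: "\<forall>x\<in>{0..<m}. \<forall>y\<in>{0..<m}. f x = f y \<longrightarrow> x = y" and ij: "i < j \<and> j < m"
    have "i \<in> {0..<m}" "j \<in> {0..<m}" using ij by auto
    then show "f i \<noteq> f j" using h ij by fastforce
  next
    fix x y assume h: "\<forall>i j. i < j \<and> j < m \<longrightarrow> f i \<noteq> f j" and xy: "x \<in> {0..<m}" "y \<in> {0..<m}" "f x = f y"
    show "x = y"
    proof (rule ccontr)
      assume "x \<noteq> y"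
      then have "x < y \<or> y < x" by arith
      then show False using h[rule_format, of x y] h[rule_format, of y x] xy by auto
    qed
  qed
  finally show ?thesis .
qed

lemma spath_iff:
  "spath \<gamma> \<longleftrightarrow> 2 \<le> length \<gamma> \<and> set \<gamma> \<subseteq> V \<and> (\<forall>i. Suc i < length \<gamma> \<longrightarrow> {\<gamma>!i, \<gamma>!Suc i} \<in> E)
     \<and> (\<forall>i. 0 < i \<and> Suc i < length \<gamma> \<longrightarrow> opposite (\<gamma>!i) (\<gamma>!Suc i) (\<gamma>!(i-1)))
     \<and> (\<forall>i j. i < j \<and> Suc j < length \<gamma> \<longrightarrow> {\<gamma>!i, \<gamma>!Suc i} \<noteq> {\<gamma>!j, \<gamma>!Suc j})"
proof -
  have a: "(\<forall>i. 0 < i \<and> Suc i < length \<gamma> \<longrightarrow> inwin \<epsilon> pi (ang (\<gamma> ! Suc i) (\<gamma> ! i) (\<gamma> ! (i - 1))))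
     \<longleftrightarrow> (\<forall>i. 0 < i \<and> Suc i < length \<gamma> \<longrightarrow> opposite (\<gamma>!i) (\<gamma>!Suc i) (\<gamma>!(i-1)))"
    using inwin_pi_ang_iff[of \<epsilon>] eps_pos by simp
  have b: "distinct (map (\<lambda>i. {\<gamma> ! i, \<gamma> ! Suc i}) [0..<length \<gamma> - 1])
     \<longleftrightarrow> (\<forall>i j. i < j \<and> Suc j < length \<gamma> \<longrightarrow> {\<gamma>!i, \<gamma>!Suc i} \<noteq> {\<gamma>!j, \<gamma>!Suc j})"
    unfolding distinct_map_upt_iff by (simp add: less_diff_conv)
  show ?thesis unfolding straight_def a b by blast
qed

lemma spath_length: "spath \<gamma> \<Longrightarrow> 2 \<le> length \<gamma>" by (simp add: spath_iff)
lemma spath_set: "spath \<gamma> \<Longrightarrow> set \<gamma> \<subseteq> V" by (simp add: spath_iff)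
lemma spath_edge: "spath \<gamma> \<Longrightarrow> Suc i < length \<gamma> \<Longrightarrow> {\<gamma>!i, \<gamma>!Suc i} \<in> E" by (simp add: spath_iff)
lemma spath_nb_next: "spath \<gamma> \<Longrightarrow> Suc i < length \<gamma> \<Longrightarrow> \<gamma>!Suc i \<in> nb (\<gamma>!i)"
  using spath_edge nb_iff by blast
lemma spath_nb_prev: "spath \<gamma> \<Longrightarrow> Suc i < length \<gamma> \<Longrightarrow> \<gamma>!i \<in> nb (\<gamma>!Suc i)"
  using spath_nb_next nb_sym by blast
lemma spath_opposite: "spath \<gamma> \<Longrightarrow> 0 < i \<Longrightarrow> Suc i < length \<gamma> \<Longrightarrow> opposite (\<gamma>!i) (\<gamma>!Suc i) (\<gamma>!(i-1))"
  by (simp add: spath_iff)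
lemma edge_vec_nonzero: "spath \<gamma> \<Longrightarrow> Suc i < length \<gamma> \<Longrightarrow> edge_vec \<gamma> i \<noteq> 0"
  using edgeD(3)[OF spath_edge] by (force simp: edge_vec_def)

lemma opposite_commute: "opposite x y z \<Longrightarrow> opposite x z y" using vangle_commute by metis

lemma vangle_edge_vec_turn: assumes "spath \<gamma>" "0 < i" "Suc i < length \<gamma>"
  shows "vangle (edge_vec \<gamma> i) (edge_vec \<gamma> (i - 1)) = pi - vangle (\<gamma>!Suc i - \<gamma>!i) (\<gamma>!(i-1) - \<gamma>!i)"
proof -
  have e: "\<gamma>!(i-1) - \<gamma>!i = - edge_vec \<gamma> (i - 1)" using assms by (simp add: edge_vec_def)
  have e2: "\<gamma>!Suc i - \<gamma>!i = edge_vec \<gamma> i" by (simp add: edge_vec_def)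
  have n: "edge_vec \<gamma> i \<noteq> 0" "edge_vec \<gamma> (i - 1) \<noteq> 0"
    using edge_vec_nonzero[OF assms(1)] assms by auto
  show ?thesis unfolding e e2 using vangle_uminus_right[OF n] by simp
qed

lemma theta_ex_eq: assumes "spath \<gamma>"
  shows "theta_ex \<gamma> = (\<Sum>i\<in>{1..<length \<gamma> - 1}. vangle (edge_vec \<gamma> i) (edge_vec \<gamma> (i - 1)))"
  unfolding theta_ex_def
proof (rule sum.cong)
  fix i assume "i \<in> {1..<length \<gamma> - 1}"
  then have "0 < i" "Suc i < length \<gamma>" by auto
  then show "\<bar>ang (\<gamma> ! Suc i) (\<gamma> ! i) (\<gamma> ! (i - 1)) - pi\<bar> = vangle (edge_vec \<gamma> i) (edge_vec \<gamma> (i - 1))"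
    using vangle_edge_vec_turn[OF assms] abs_ang_minus_pi by simp
qed simp

lemma vangle_edge_vec_le_sum: assumes "spath \<gamma>" "a \<le> b" "Suc b < length \<gamma>"
  shows "vangle (edge_vec \<gamma> b) (edge_vec \<gamma> a) \<le> (\<Sum>i\<in>{Suc a..b}. vangle (edge_vec \<gamma> i) (edge_vec \<gamma> (i - 1)))"
  using assms(2,3)
proof (induction b)
  case 0 then show ?case by (simp add: vangle_self)
next
  case (Suc b)
  show ?case
  proof (cases "a = Suc b")
    case True then show ?thesis by (simp add: vangle_self)
  next
    case False
    then have ab: "a \<le> b" using Suc by simp
    have "vangle (edge_vec \<gamma> (Suc b)) (edge_vec \<gamma> a) \<le> vangle (edge_vec \<gamma> (Suc b)) (edge_vec \<gamma> b) + vangle (edge_vec \<gamma> b) (edge_vec \<gamma> a)"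
      using vangle_triangle[of "edge_vec \<gamma> (Suc b)" "edge_vec \<gamma> b" "edge_vec \<gamma> a"] edge_vec_nonzero[OF assms(1), of "Suc b"]
        edge_vec_nonzero[OF assms(1), of b] edge_vec_nonzero[OF assms(1), of a] Suc.prems ab by simp
    also have "\<dots> \<le> vangle (edge_vec \<gamma> (Suc b)) (edge_vec \<gamma> b) + (\<Sum>i\<in>{Suc a..b}. vangle (edge_vec \<gamma> i) (edge_vec \<gamma> (i - 1)))"
      using Suc.IH[OF ab] Suc.prems by simp
    also have "\<dots> = (\<Sum>i\<in>{Suc a..Suc b}. vangle (edge_vec \<gamma> i) (edge_vec \<gamma> (i - 1)))"
      using ab by (simp add: sum.atLeast_Suc_atMost_Suc_shift add.commute)
    finally show ?thesis .
  qed
qed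

lemma vangle_edge_vec_le_theta_ex: assumes "spath \<gamma>" "Suc a < length \<gamma>" "Suc b < length \<gamma>"
  shows "vangle (edge_vec \<gamma> a) (edge_vec \<gamma> b) \<le> theta_ex \<gamma>"
proof -
  have g: "\<And>a b. a \<le> b \<Longrightarrow> Suc b < length \<gamma> \<Longrightarrow> vangle (edge_vec \<gamma> b) (edge_vec \<gamma> a) \<le> theta_ex \<gamma>"
  proof -
    fix a b assume ab: "a \<le> b" "Suc b < length \<gamma>"
    have "(\<Sum>i\<in>{Suc a..b}. vangle (edge_vec \<gamma> i) (edge_vec \<gamma> (i - 1))) \<le> (\<Sum>i\<in>{1..<length \<gamma> - 1}. vangle (edge_vec \<gamma> i) (edge_vec \<gamma> (i - 1)))"
      by (rule sum_mono2) (use ab in \<open>auto simp: vangle_nonneg\<close>)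
    then show "vangle (edge_vec \<gamma> b) (edge_vec \<gamma> a) \<le> theta_ex \<gamma>"
      using vangle_edge_vec_le_sum[OF assms(1) ab] theta_ex_eq[OF assms(1)] by simp
  qed
  show ?thesis
  proof (cases "a \<le> b")
    case True then show ?thesis using g[OF True assms(3)] vangle_commute by metis
  next
    case False then show ?thesis using g[of b a] assms(2) by simp
  qed
qed

lemma theta_ex_less: "spath \<gamma> \<Longrightarrow> theta_ex \<gamma> < \<delta>" using theta_ex_bound by blast

lemma theta_ex_nonneg: "spath \<gamma> \<Longrightarrow> 0 \<le> theta_ex \<gamma>"
  using theta_ex_eq by (simp add: sum_nonneg vangle_nonneg)

lemma vangle_edge_vec_less: assumes "spath \<gamma>" "Suc a < length \<gamma>" "Suc b < length \<gamma>"
  shows "vangle (edge_vec \<gamma> a) (edge_vec \<gamma> b) < \<delta>"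
  using vangle_edge_vec_le_theta_ex[OF assms] theta_ex_less[OF assms(1)] by simp

text \<open>A chord \<open>\<gamma>\<^sub>k - \<gamma>\<^sub>j\<close> is a sum of edge vectors, all within \<open>\<theta>\<^sub>e\<^sub>x < \<pi>/2\<close> of a fixed edge vector,
  and such a cone is closed under addition (\<open>vangle_add_le\<close>).\<close>

lemma vangle_chord_le_theta_ex: assumes "spath \<gamma>" "j < k" "k < length \<gamma>" "Suc c < length \<gamma>"
  shows "\<gamma>!k - \<gamma>!j \<noteq> 0 \<and> vangle (\<gamma>!k - \<gamma>!j) (edge_vec \<gamma> c) \<le> theta_ex \<gamma>"
  using assms(2,3)
proof (induction k)
  case 0 then show ?case by simp
next
  case (Suc k)
  show ?case
  proof (cases "j = k")
    case True
    then have "\<gamma>!Suc k - \<gamma>!j = edge_vec \<gamma> k" by (simp add: edge_vec_def)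
    then show ?thesis
      using edge_vec_nonzero[OF assms(1)] Suc.prems vangle_edge_vec_le_theta_ex[OF assms(1) _ assms(4)] True by simp
  next
    case False
    then have jk: "j < k" using Suc by simp
    have IH: "\<gamma>!k - \<gamma>!j \<noteq> 0 \<and> vangle (\<gamma>!k - \<gamma>!j) (edge_vec \<gamma> c) \<le> theta_ex \<gamma>" using Suc jk by simp
    have eq: "\<gamma>!Suc k - \<gamma>!j = (\<gamma>!k - \<gamma>!j) + edge_vec \<gamma> k" by (simp add: edge_vec_def)
    have "theta_ex \<gamma> < pi / 2" using theta_ex_less[OF assms(1)] eps_bounds by simp
    then show ?thesis unfolding eq
      using vangle_add_le[of "\<gamma>!k - \<gamma>!j" "edge_vec \<gamma> k" "edge_vec \<gamma> c" "theta_ex \<gamma>"] IH edge_vec_nonzero[OF assms(1)] Suc.prems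
        assms(4) vangle_edge_vec_le_theta_ex[OF assms(1) _ assms(4)] theta_ex_nonneg[OF assms(1)] by simp
  qed
qed

lemma spath_distinct: assumes "spath \<gamma>" shows "distinct \<gamma>"
proof -
  have c: "Suc 0 < length \<gamma>" using spath_length[OF assms] by simp
  show ?thesis unfolding distinct_conv_nth
  proof (intro allI impI)
    fix i j assume h: "i < length \<gamma>" "j < length \<gamma>" "i \<noteq> j"
    show "\<gamma>!i \<noteq> \<gamma>!j"
    proof (cases "i < j")
      case True then show ?thesis using vangle_chord_le_theta_ex[OF assms True h(2) c] by auto
    next
      case False then have "j < i" using h by simp
      then show ?thesis using vangle_chord_le_theta_ex[OF assms _ h(1) c] by auto
    qed
  qed
qed

lemma distinct_nth_edges: assumes "distinct \<gamma>" "i < j" "Suc j < length \<gamma>"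
  shows "{\<gamma>!i, \<gamma>!Suc i} \<noteq> {\<gamma>!j, \<gamma>!Suc j}"
proof
  assume "{\<gamma>!i, \<gamma>!Suc i} = {\<gamma>!j, \<gamma>!Suc j}"
  then have "\<gamma>!i = \<gamma>!j \<or> \<gamma>!i = \<gamma>!Suc j" by auto
  moreover have "\<gamma>!i \<noteq> \<gamma>!j" using nth_eq_iff_index_eq[OF assms(1), of i j] assms by simp
  moreover have "\<gamma>!i \<noteq> \<gamma>!Suc j" using nth_eq_iff_index_eq[OF assms(1), of i "Suc j"] assms by simp
  ultimately show False by simp
qed

lemma opposite_unique: assumes "z \<in> nb x" "z' \<in> nb x" "z \<noteq> z'" "opposite x y z" "opposite x y z'"
  shows False
proof -
  have "y \<noteq> x" using assms(4) eps_bounds pi_gt_zero by (auto simp: vangle_def Arg_zero)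
  then have nz: "y - x \<noteq> 0" "z - x \<noteq> 0" "z' - x \<noteq> 0"
    using nbD(3)[OF assms(1)] nbD(3)[OF assms(2)] by auto
  have "vangle (z - x) (z' - x) \<le> vangle (z - x) (- (y - x)) + vangle (- (y - x)) (z' - x)"
    using vangle_triangle nz by simp
  also have "vangle (z - x) (- (y - x)) = pi - vangle (z - x) (y - x)"
    using vangle_uminus_right[of "z - x" "y - x"] nz by simp
  also have "vangle (- (y - x)) (z' - x) = pi - vangle (y - x) (z' - x)"
    using vangle_uminus_left[of "y - x" "z' - x"] nz by simp
  finally have "vangle (z - x) (z' - x) \<le> 2 * \<epsilon>"
    using assms(4,5) vangle_commute[of "z - x" "y - x"] by simp
  then show False using regular_angle_nb[OF assms(1,2,3)] eps_bounds by (auto simp: regular_angle_def)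
qed

lemma spath_rev: assumes "spath \<gamma>" shows "spath (rev \<gamma>)"
proof -
  let ?n = "length \<gamma>"
  have d: "distinct (rev \<gamma>)" using spath_distinct[OF assms] by simp
  have e: "\<forall>i. Suc i < length (rev \<gamma>) \<longrightarrow> {rev \<gamma>!i, rev \<gamma>!Suc i} \<in> E"
  proof (intro allI impI)
    fix i assume i: "Suc i < length (rev \<gamma>)"
    define k where "k = ?n - Suc (Suc i)"
    have k: "Suc k < ?n" "rev \<gamma>!i = \<gamma>!Suc k" "rev \<gamma>!Suc i = \<gamma>!k"
      using i by (auto simp: k_def rev_nth Suc_diff_Suc)
    show "{rev \<gamma>!i, rev \<gamma>!Suc i} \<in> E" using spath_edge[OF assms k(1)] k by (simp add: insert_commute)
  qed
  have a: "\<forall>i. 0 < i \<and> Suc i < length (rev \<gamma>) \<longrightarrow> opposite (rev \<gamma>!i) (rev \<gamma>!Suc i) (rev \<gamma>!(i-1))"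
  proof (intro allI impI)
    fix i assume i: "0 < i \<and> Suc i < length (rev \<gamma>)"
    define k where "k = ?n - Suc i"
    have k: "0 < k" "Suc k < ?n" "rev \<gamma>!i = \<gamma>!k" "rev \<gamma>!Suc i = \<gamma>!(k - 1)" "rev \<gamma>!(i - 1) = \<gamma>!Suc k"
      using i by (auto simp: k_def rev_nth Suc_diff_Suc)
    show "opposite (rev \<gamma>!i) (rev \<gamma>!Suc i) (rev \<gamma>!(i-1))"
      using spath_opposite[OF assms k(1,2)] k opposite_commute by simp
  qed
  show ?thesis unfolding spath_iff using assms e a d distinct_nth_edges[OF d] by (simp add: spath_iff)
qed

lemma edge_eq_hd_edge: assumes "distinct \<gamma>" "Suc j < length \<gamma>" "{z, \<gamma>!0} = {\<gamma>!j, \<gamma>!Suc j}"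
  shows "z = \<gamma>!1"
proof -
  have ne: "\<gamma>!0 \<noteq> \<gamma>!Suc j"
    using nth_eq_iff_index_eq[OF assms(1), of 0 "Suc j"] assms(2) by (cases \<gamma>) auto
  then have "\<gamma>!0 = \<gamma>!j" using assms(3) by auto
  then have "j = 0" using nth_eq_iff_index_eq[OF assms(1), of 0 j] assms(2) by (cases \<gamma>) auto
  then show ?thesis using assms(3) ne by (auto simp: doubleton_eq_iff)
qed

lemma spath_Cons: assumes "spath \<gamma>" "z \<in> nb (\<gamma>!0)" "opposite (\<gamma>!0) (\<gamma>!1) z" shows "spath (z # \<gamma>)"
proof -
  have n: "2 \<le> length \<gamma>" using spath_length[OF assms(1)] .
  have d: "distinct \<gamma>" using spath_distinct[OF assms(1)] .
  have zV: "z \<in> V" using nbD[OF assms(2)] by simp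
  have e: "\<forall>i. Suc i < length (z # \<gamma>) \<longrightarrow> {(z#\<gamma>)!i, (z#\<gamma>)!Suc i} \<in> E"
  proof (intro allI impI)
    fix i assume i: "Suc i < length (z # \<gamma>)"
    show "{(z#\<gamma>)!i, (z#\<gamma>)!Suc i} \<in> E"
    proof (cases i)
      case 0 then show ?thesis using nbD(4)[OF assms(2)] by (simp add: insert_commute)
    next
      case (Suc i') then show ?thesis using spath_edge[OF assms(1), of i'] i by simp
    qed
  qed
  have a: "\<forall>i. 0 < i \<and> Suc i < length (z#\<gamma>) \<longrightarrow> opposite ((z#\<gamma>)!i) ((z#\<gamma>)!Suc i) ((z#\<gamma>)!(i-1))"
  proof (intro allI impI)
    fix i assume i: "0 < i \<and> Suc i < length (z#\<gamma>)"
    then obtain i' where i': "i = Suc i'" by (cases i) auto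
    show "opposite ((z#\<gamma>)!i) ((z#\<gamma>)!Suc i) ((z#\<gamma>)!(i-1))"
    proof (cases i')
      case 0 then show ?thesis using assms(3) i' by simp
    next
      case (Suc i'') then show ?thesis using spath_opposite[OF assms(1), of i'] i i' by simp
    qed
  qed
  have dd: "\<forall>i j. i < j \<and> Suc j < length (z#\<gamma>) \<longrightarrow> {(z#\<gamma>)!i, (z#\<gamma>)!Suc i} \<noteq> {(z#\<gamma>)!j, (z#\<gamma>)!Suc j}"
  proof (intro allI impI)
    fix i j assume ij: "i < j \<and> Suc j < length (z#\<gamma>)"
    then obtain j' where j': "j = Suc j'" by (cases j) auto
    show "{(z#\<gamma>)!i, (z#\<gamma>)!Suc i} \<noteq> {(z#\<gamma>)!j, (z#\<gamma>)!Suc j}"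
    proof (cases i)
      case (Suc i') then show ?thesis using distinct_nth_edges[OF d, of i' j'] ij j' by simp
    next
      case 0
      then show ?thesis
        using edge_eq_hd_edge[OF d, of j' z] ij j' assms(3) vangle_self eps_bounds by auto
    qed
  qed
  show ?thesis unfolding spath_iff using e a dd n zV spath_set[OF assms(1)] by simp
qed

text \<open>A straight path can be continued through a vertex in at most one way (\<open>opposite_unique\<close>).\<close>

lemma spath_agree_forward:
  assumes "spath \<gamma>" "spath \<gamma>'" "\<gamma>!i = \<gamma>'!j" "\<gamma>!Suc i = \<gamma>'!Suc j" "i + k < length \<gamma>" "j + k < length \<gamma>'"
  shows "\<gamma>!(i+k) = \<gamma>'!(j+k)"
proof -
  let ?Q = "\<lambda>k. i + k < length \<gamma> \<and> j + k < length \<gamma>' \<longrightarrow> \<gamma>!(i+k) = \<gamma>'!(j+k)"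
  have "?Q k \<and> ?Q (Suc k)" for k
  proof (induction k)
    case 0 then show ?case using assms by simp
  next
    case (Suc k)
    have "?Q (Suc (Suc k))"
    proof
      assume r: "i + Suc (Suc k) < length \<gamma> \<and> j + Suc (Suc k) < length \<gamma>'"
      have e1: "\<gamma>!(i+k) = \<gamma>'!(j+k)" "\<gamma>!(i + Suc k) = \<gamma>'!(j + Suc k)" using Suc r by auto
      define x where "x = \<gamma>!(i + Suc k)"
      define w where "w = \<gamma>!(i + k)"
      have oa: "opposite x (\<gamma>!(i + Suc (Suc k))) w"
        using spath_opposite[OF assms(1), of "i + Suc k"] r by (simp add: x_def w_def)
      have ob: "opposite x (\<gamma>'!(j + Suc (Suc k))) w"
        using spath_opposite[OF assms(2), of "j + Suc k"] r e1 by (simp add: x_def w_def)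
      have na: "\<gamma>!(i + Suc (Suc k)) \<in> nb x"
        using spath_nb_next[OF assms(1), of "i + Suc k"] r by (simp add: x_def)
      have nb': "\<gamma>'!(j + Suc (Suc k)) \<in> nb x"
        using spath_nb_next[OF assms(2), of "j + Suc k"] r e1 by (simp add: x_def)
      show "\<gamma>!(i + Suc (Suc k)) = \<gamma>'!(j + Suc (Suc k))"
        using opposite_unique[OF na nb'] opposite_commute[OF oa] opposite_commute[OF ob] by blast
    qed
    then show ?case using Suc by simp
  qed
  then show ?thesis using assms(5,6) by blast
qed

lemma spath_agree_backward:
  assumes "spath \<gamma>" "spath \<gamma>'" "\<gamma>!i = \<gamma>'!j" "\<gamma>!Suc i = \<gamma>'!Suc j" "Suc i < length \<gamma>" "Suc j < length \<gamma>'"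
    "k \<le> i" "k \<le> j"
  shows "\<gamma>!(i - k) = \<gamma>'!(j - k)"
proof -
  let ?n = "length \<gamma>" and ?m = "length \<gamma>'"
  have "rev \<gamma>!(?n - Suc (Suc i)) = rev \<gamma>'!(?m - Suc (Suc j))"
    "rev \<gamma>!Suc (?n - Suc (Suc i)) = rev \<gamma>'!Suc (?m - Suc (Suc j))"
    using assms by (auto simp: rev_nth Suc_diff_Suc)
  then have "rev \<gamma>!((?n - Suc (Suc i)) + Suc k) = rev \<gamma>'!((?m - Suc (Suc j)) + Suc k)"
    by (rule spath_agree_forward[OF spath_rev[OF assms(1)] spath_rev[OF assms(2)]]) (use assms in auto)
  moreover have "rev \<gamma>!((?n - Suc (Suc i)) + Suc k) = \<gamma>!(?n - Suc ((?n - Suc (Suc i)) + Suc k))"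
    "rev \<gamma>'!((?m - Suc (Suc j)) + Suc k) = \<gamma>'!(?m - Suc ((?m - Suc (Suc j)) + Suc k))"
    using assms by (auto intro: rev_nth)
  moreover have "?n - Suc ((?n - Suc (Suc i)) + Suc k) = i - k" "?m - Suc ((?m - Suc (Suc j)) + Suc k) = j - k"
    using assms by arith+
  ultimately show ?thesis by simp
qed

lemma spath_length_le: assumes "spath \<gamma>" shows "length \<gamma> \<le> card E + 1"
proof -
  let ?f = "\<lambda>i. {\<gamma>!i, \<gamma>!Suc i}"
  have "inj_on ?f {0..<length \<gamma> - 1}"
    using assms unfolding straight_def by (simp add: distinct_map)
  moreover have "?f ` {0..<length \<gamma> - 1} \<subseteq> E" using spath_edge[OF assms] by auto
  ultimately have "card {0..<length \<gamma> - 1} \<le> card E" using card_inj_on_le finite_E by blast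
  then show ?thesis by simp
qed

section \<open>Maximal straight paths\<close>

lemma mpath_spath: "mpath \<gamma> \<Longrightarrow> spath \<gamma>" by (simp add: maximal_straight_def)

lemma mpath_maximal: assumes "mpath \<gamma>" "spath \<gamma>'" "sublist \<gamma> \<gamma>' \<or> sublist (rev \<gamma>) \<gamma>'"
  shows "length \<gamma>' = length \<gamma>"
proof -
  have "\<forall>\<gamma>'. spath \<gamma>' \<and> (sublist \<gamma> \<gamma>' \<or> sublist (rev \<gamma>) \<gamma>') \<longrightarrow> length \<gamma>' = length \<gamma>"
    using assms(1) unfolding maximal_straight_def by (elim conjE)
  then show ?thesis using assms(2,3) by blast
qed

lemma mpath_rev: assumes "mpath \<gamma>" shows "mpath (rev \<gamma>)"
proof -
  have "spath (rev \<gamma>)" using spath_rev[OF mpath_spath[OF assms]] .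
  moreover have "\<forall>\<gamma>'. spath \<gamma>' \<and> (sublist (rev \<gamma>) \<gamma>' \<or> sublist (rev (rev \<gamma>)) \<gamma>') \<longrightarrow> length \<gamma>' = length (rev \<gamma>)"
  proof (intro allI impI)
    fix \<gamma>' assume h: "spath \<gamma>' \<and> (sublist (rev \<gamma>) \<gamma>' \<or> sublist (rev (rev \<gamma>)) \<gamma>')"
    then have "sublist \<gamma> \<gamma>' \<or> sublist (rev \<gamma>) \<gamma>'" by auto
    then show "length \<gamma>' = length (rev \<gamma>)" using mpath_maximal[OF assms] h by simp
  qed
  ultimately show ?thesis unfolding maximal_straight_def by blast
qed

lemma mpath_no_extend_hd: assumes "mpath \<gamma>" "z \<in> nb (\<gamma>!0)" "opposite (\<gamma>!0) (\<gamma>!1) z" shows False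
proof -
  have "spath (z # \<gamma>)" using spath_Cons[OF mpath_spath[OF assms(1)] assms(2,3)] .
  moreover have "sublist \<gamma> (z # \<gamma>)" using sublist_append_leftI[of \<gamma> "[z]"] by simp
  ultimately have "length (z # \<gamma>) = length \<gamma>" using mpath_maximal[OF assms(1)] by blast
  then show False by simp
qed

lemma mpath_no_extend_last:
  assumes "mpath \<gamma>" "z \<in> nb (\<gamma>!(length \<gamma> - 1))" "opposite (\<gamma>!(length \<gamma> - 1)) (\<gamma>!(length \<gamma> - 2)) z"
  shows False
proof -
  have n: "2 \<le> length \<gamma>" using spath_length[OF mpath_spath[OF assms(1)]] .
  have r: "rev \<gamma>!0 = \<gamma>!(length \<gamma> - 1)" "rev \<gamma>!1 = \<gamma>!(length \<gamma> - 2)" proof -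
    have "\<gamma> \<noteq> []" using n by (cases \<gamma>) auto
    then show "rev \<gamma>!0 = \<gamma>!(length \<gamma> - 1)" "rev \<gamma>!1 = \<gamma>!(length \<gamma> - 2)"
      using n rev_nth[of 0 \<gamma>] rev_nth[of 1 \<gamma>] by (auto simp: numeral_2_eq_2)
  qed
  show False using mpath_no_extend_hd[OF mpath_rev[OF assms(1)]] assms r by simp
qed

lemma mpath_edge_index_le:
  assumes "mpath \<gamma>" "spath \<gamma>'" "Suc i < length \<gamma>" "Suc j < length \<gamma>'" "\<gamma>!i = \<gamma>'!j" "\<gamma>!Suc i = \<gamma>'!Suc j"
  shows "j \<le> i"
proof (rule ccontr)
  assume ij: "\<not> j \<le> i"
  note agree = spath_agree_backward[OF mpath_spath[OF assms(1)] assms(2,5,6,3,4)]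
  have a0: "\<gamma>!0 = \<gamma>'!(j - i)" using agree[of i] ij by simp
  have a1: "\<gamma>!1 = \<gamma>'!Suc (j - i)"
  proof (cases i)
    case 0 then show ?thesis using assms(6) by simp
  next
    case (Suc i') then have "\<gamma>!(i - i') = \<gamma>'!(j - i')" using agree[of i'] ij by simp
    then show ?thesis using Suc ij by (simp add: Suc_diff_Suc)
  qed
  have "opposite (\<gamma>'!(j - i)) (\<gamma>'!Suc (j - i)) (\<gamma>'!(j - i - 1))"
    using spath_opposite[OF assms(2), of "j - i"] assms(4) ij by simp
  moreover have "\<gamma>'!(j - i - 1) \<in> nb (\<gamma>'!(j - i))"
    using spath_nb_prev[OF assms(2), of "j - i - 1"] assms(4) ij by (simp add: Suc_diff_Suc)
  ultimately show False using mpath_no_extend_hd[OF assms(1)] a0 a1 by simp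
qed

lemma mpath_length_ge:
  assumes "mpath \<gamma>" "spath \<gamma>'" "Suc i < length \<gamma>" "Suc i < length \<gamma>'" "\<gamma>!i = \<gamma>'!i" "\<gamma>!Suc i = \<gamma>'!Suc i"
  shows "length \<gamma>' \<le> length \<gamma>"
proof (rule ccontr)
  assume long: "\<not> length \<gamma>' \<le> length \<gamma>"
  let ?n = "length \<gamma>"
  have f: "\<gamma>!(i+k) = \<gamma>'!(i+k)" if "i + k < ?n" for k
    using spath_agree_forward[OF mpath_spath[OF assms(1)] assms(2,5,6)] that long by simp
  have e1: "\<gamma>!(?n - 1) = \<gamma>'!(?n - 1)" using f[of "?n - 1 - i"] assms(3) by simp
  have e2: "\<gamma>!(?n - 2) = \<gamma>'!(?n - 2)" using f[of "?n - 2 - i"] assms(3) by simp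
  have "opposite (\<gamma>'!(?n - 1)) (\<gamma>'!Suc (?n - 1)) (\<gamma>'!(?n - 2))"
    using spath_opposite[OF assms(2), of "?n - 1"] assms(3) long by (simp add: numeral_2_eq_2)
  moreover have "\<gamma>'!Suc (?n - 1) \<in> nb (\<gamma>'!(?n - 1))"
    using spath_nb_next[OF assms(2), of "?n - 1"] assms(3) long by simp
  ultimately show False using mpath_no_extend_last[OF assms(1)] e1 e2 opposite_commute by metis
qed

lemma mpath_determined_by_edge:
  assumes "mpath \<gamma>" "mpath \<gamma>'" "Suc i < length \<gamma>" "Suc j < length \<gamma>'" "\<gamma>!i = \<gamma>'!j" "\<gamma>!Suc i = \<gamma>'!Suc j"
  shows "\<gamma> = \<gamma>' \<and> i = j"
proof -
  have s: "spath \<gamma>" "spath \<gamma>'" using assms mpath_spath by auto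
  have ij: "i = j"
    using mpath_edge_index_le[OF assms(1) s(2) assms(3-6)]
      mpath_edge_index_le[OF assms(2) s(1) assms(4,3) assms(5,6)[symmetric]] by simp
  have len: "length \<gamma> = length \<gamma>'"
    using mpath_length_ge[OF assms(1) s(2)] mpath_length_ge[OF assms(2) s(1)] assms ij by force
  have "\<gamma>!k = \<gamma>'!k" if "k < length \<gamma>" for k
  proof (cases "k \<le> i")
    case True then show ?thesis using spath_agree_backward[OF s assms(5,6,3,4), of "i - k"] ij by simp
  next
    case False
    then show ?thesis using spath_agree_forward[OF s assms(5,6), of "k - i"] ij len that by simp
  qed
  then show ?thesis using len ij by (simp add: nth_equalityI)
qed

lemma mpath_through_edge: assumes "{a, b} \<in> E"
  shows "\<exists>\<gamma> i. mpath \<gamma> \<and> Suc i < length \<gamma> \<and> \<gamma>!i = a \<and> \<gamma>!Suc i = b"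
proof -
  let ?P = "\<lambda>\<gamma>. spath \<gamma> \<and> (\<exists>i. Suc i < length \<gamma> \<and> \<gamma>!i = a \<and> \<gamma>!Suc i = b)"
  have ab: "a \<in> V" "b \<in> V" "a \<noteq> b" using edgeD[OF assms] by auto
  have "spath [a, b]" unfolding spath_iff using assms ab by auto
  moreover have "Suc 0 < length [a, b] \<and> [a, b]!0 = a \<and> [a, b]!Suc 0 = b" by simp
  ultimately have p0: "?P [a, b]" by blast
  have bd: "\<forall>\<gamma>. ?P \<gamma> \<longrightarrow> length \<gamma> < card E + 2"
  proof (intro allI impI)
    fix \<gamma> assume "?P \<gamma>" then show "length \<gamma> < card E + 2"
      using spath_length_le[of \<gamma>] by simp
  qed
  obtain \<gamma> where g: "?P \<gamma>" "\<forall>\<gamma>'. ?P \<gamma>' \<longrightarrow> length \<gamma>' \<le> length \<gamma>"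
    using ex_has_greatest_nat[of ?P "[a,b]" length "card E + 2"] p0 bd by blast
  then obtain i where i: "Suc i < length \<gamma>" "\<gamma>!i = a" "\<gamma>!Suc i = b" by blast
  have "mpath \<gamma>" unfolding maximal_straight_def
  proof (intro conjI allI impI)
    show "spath \<gamma>" using g by simp
    fix \<gamma>' assume h: "spath \<gamma>' \<and> (sublist \<gamma> \<gamma>' \<or> sublist (rev \<gamma>) \<gamma>')"
    show "length \<gamma>' = length \<gamma>"
    proof (cases "sublist \<gamma> \<gamma>'")
      case True
      then obtain ps ss where e: "\<gamma>' = ps @ \<gamma> @ ss" by (auto simp: sublist_def)
      have "\<gamma>'!(length ps + i) = a" "\<gamma>'!Suc (length ps + i) = b" "Suc (length ps + i) < length \<gamma>'"
        using i e by (auto simp: nth_append)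
      then have "?P \<gamma>'" using h by blast
      then have "length \<gamma>' \<le> length \<gamma>" using g(2) by blast
      then show ?thesis using sublist_length_le[OF True] by simp
    next
      case False
      then have "sublist (rev \<gamma>) \<gamma>'" using h by simp
      then have "sublist \<gamma> (rev \<gamma>')" by (simp add: sublist_rev_right)
      then obtain ps ss where e: "rev \<gamma>' = ps @ \<gamma> @ ss" by (auto simp: sublist_def)
      have "(rev \<gamma>')!(length ps + i) = a" "(rev \<gamma>')!Suc (length ps + i) = b" "Suc (length ps + i) < length (rev \<gamma>')"
        using i e by (auto simp: nth_append)
      then have "?P (rev \<gamma>')" using h spath_rev by blast
      then have "length (rev \<gamma>') \<le> length \<gamma>" using g(2) by blast
      then show ?thesis using sublist_length_le[OF \<open>sublist \<gamma> (rev \<gamma>')\<close>] by simp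
    qed
  qed
  then show ?thesis using i by blast
qed

section \<open>The neighbourhood of a vertex\<close>

text \<open>\<open>y \<in> starts x\<close> iff a maximal straight path may begin with the bond from \<open>x\<close> to \<open>y\<close>, and
  \<open>singletons x\<close> is the multiplicity of the stratum \<open>(x)\<close> (\<open>count_strata_singleton\<close>).\<close>

definition starts :: "complex \<Rightarrow> complex set" where
  "starts x = {y \<in> nb x. \<not> (\<exists>z \<in> nb x. opposite x y z)}"

definition singletons :: "complex \<Rightarrow> nat" where
  "singletons x = (if x \<in> Vdeg V E 0 then 2 else if x \<in> Vdeg V E 1 \<union> V2pi \<epsilon> V E then 1 else 0)"

lemma opposite_of_common_line:
  assumes "a \<in> nb x" "b \<in> nb x" "a \<noteq> b" "langle (a - x) w \<le> \<epsilon>" "langle (b - x) w \<le> \<epsilon>" "w \<noteq> 0"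
  shows "opposite x a b"
proof -
  have nz: "a - x \<noteq> 0" "b - x \<noteq> 0" using nbD(3) assms by force+
  have "langle (a - x) (b - x) \<le> langle (a - x) w + langle w (b - x)" using langle_triangle nz assms by simp
  then have p: "langle (a - x) (b - x) \<le> 2 * \<epsilon>" using assms langle_commute[of w "b - x"] by simp
  have "regular_angle \<epsilon> (vangle (a - x) (b - x))" using regular_angle_nb[OF assms(1-3)] .
  then show ?thesis
  proof (unfold regular_angle_def, elim disjE)
    assume "\<bar>vangle (a - x) (b - x) - pi / 2\<bar> \<le> \<epsilon>"
    then have "pi / 2 - \<epsilon> \<le> langle (a - x) (b - x)" by (rule langle_ge_of_perp)
    then show ?thesis using p eps_bounds by simp
  qed simp
qed

lemma langle_ge_of_not_opposite: assumes "y \<in> nb x" "z \<in> nb x" "y \<noteq> z" "\<not> opposite x y z"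
  shows "pi / 2 - \<epsilon> \<le> langle (y - x) (z - x)"
proof -
  have "regular_angle \<epsilon> (vangle (y - x) (z - x))" using regular_angle_nb[OF assms(1-3)] .
  then have "\<bar>vangle (y - x) (z - x) - pi / 2\<bar> \<le> \<epsilon>"
    using assms(4) by (simp add: regular_angle_def)
  then show ?thesis by (rule langle_ge_of_perp)
qed

lemma opposite_of_not_opposite:
  assumes "y \<in> nb x" "a \<in> nb x" "b \<in> nb x" "a \<noteq> b" "a \<noteq> y" "b \<noteq> y" "\<not> opposite x y a" "\<not> opposite x y b"
  shows "opposite x a b"
proof -
  have nz: "y - x \<noteq> 0" "a - x \<noteq> 0" "b - x \<noteq> 0" using nbD(3) assms by force+
  have "langle (a - x) (\<i> * (y - x)) \<le> \<epsilon>"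
    using langle_ii_le_of_perp[of "y - x" "a - x"] langle_ge_of_not_opposite[OF assms(1,2)] assms nz by simp
  moreover have "langle (b - x) (\<i> * (y - x)) \<le> \<epsilon>"
    using langle_ii_le_of_perp[of "y - x" "b - x"] langle_ge_of_not_opposite[OF assms(1,3)] assms nz by simp
  ultimately show ?thesis using opposite_of_common_line[OF assms(2,3,4)] nz by simp
qed

lemma card_opposite_le_1: "card {z \<in> nb x. opposite x y z} \<le> 1"
proof -
  have "a = b" if "a \<in> {z \<in> nb x. opposite x y z}" "b \<in> {z \<in> nb x. opposite x y z}" for a b
    using opposite_unique[of a x b y] that by blast
  then show ?thesis using card_le_Suc0_iff_eq[of "{z \<in> nb x. opposite x y z}"] finite_nb by auto
qed

lemma card_not_opposite_le_2: assumes "y \<in> nb x" shows "card {z \<in> nb x. z \<noteq> y \<and> \<not> opposite x y z} \<le> 2"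
proof (cases "{z \<in> nb x. z \<noteq> y \<and> \<not> opposite x y z} = {}")
  case True then show ?thesis by (simp only: True card.empty)
next
  case False
  then obtain a where a: "a \<in> nb x" "a \<noteq> y" "\<not> opposite x y a" by blast
  have "{z \<in> nb x. z \<noteq> y \<and> \<not> opposite x y z} \<subseteq> insert a {z \<in> nb x. opposite x a z}"
    using opposite_of_not_opposite[OF assms a(1)] a by auto
  then have "card {z \<in> nb x. z \<noteq> y \<and> \<not> opposite x y z} \<le> card (insert a {z \<in> nb x. opposite x a z})"
    using finite_nb by (intro card_mono) auto
  also have "\<dots> \<le> Suc (card {z \<in> nb x. opposite x a z})"
    by (rule card_insert_le_m1) (auto simp: card_insert_le)
  finally show ?thesis using card_opposite_le_1[of x a] by simp
qed

lemma nb_split: assumes "y \<in> nb x"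
  shows "nb x \<subseteq> insert y ({z \<in> nb x. opposite x y z} \<union> {z \<in> nb x. z \<noteq> y \<and> \<not> opposite x y z})"
  by auto

lemma card_nb_split: assumes "y \<in> nb x"
  shows "card (nb x) \<le> 1 + card {z \<in> nb x. opposite x y z} + card {z \<in> nb x. z \<noteq> y \<and> \<not> opposite x y z}"
proof -
  have "card (nb x) \<le> card (insert y ({z \<in> nb x. opposite x y z} \<union> {z \<in> nb x. z \<noteq> y \<and> \<not> opposite x y z}))"
    using finite_nb nb_split[OF assms] by (intro card_mono) auto
  also have "\<dots> \<le> Suc (card ({z \<in> nb x. opposite x y z} \<union> {z \<in> nb x. z \<noteq> y \<and> \<not> opposite x y z}))"
    by (rule card_insert_le_m1) (auto simp: card_insert_le)
  also have "\<dots> \<le> Suc (card {z \<in> nb x. opposite x y z} + card {z \<in> nb x. z \<noteq> y \<and> \<not> opposite x y z})"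
    using card_Un_le by simp
  finally show ?thesis by simp
qed

lemma card_nb_le_4: "card (nb x) \<le> 4"
proof (cases "nb x = {}")
  case True then show ?thesis by simp
next
  case False then obtain y where "y \<in> nb x" by blast
  then show ?thesis using card_nb_split[of y x] card_opposite_le_1[of x y] card_not_opposite_le_2[of y x]
    by linarith
qed

lemma starts_card_nb: assumes "y \<in> starts x"
  shows "card (nb x) \<le> 1 + card {z \<in> nb x. z \<noteq> y \<and> \<not> opposite x y z}"
proof -
  have y: "y \<in> nb x" and empty: "{z \<in> nb x. opposite x y z} = {}"
    using assms by (auto simp: starts_def)
  show ?thesis using card_nb_split[OF y, unfolded empty] by simp
qed

lemma card_nb_le_3_of_starts: "y \<in> starts x \<Longrightarrow> card (nb x) \<le> 3"
  using starts_card_nb card_not_opposite_le_2 by (fastforce simp: starts_def)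

lemma starts_unique_of_card_nb_3: assumes "card (nb x) = 3" "y \<in> starts x" "y' \<in> starts x"
  shows "y' = y"
proof (rule ccontr)
  assume "y' \<noteq> y"
  let ?P = "{z \<in> nb x. z \<noteq> y \<and> \<not> opposite x y z}"
  have y: "y \<in> nb x" using assms(2) by (simp add: starts_def)
  have "card ?P = 2" using starts_card_nb[OF assms(2)] card_not_opposite_le_2[OF y] assms(1) by simp
  moreover have yP: "y' \<in> ?P" using assms(2,3) \<open>y' \<noteq> y\<close> by (auto simp: starts_def)
  ultimately have "card (?P - {y'}) = 1" using finite_nb by (simp add: card_Diff_singleton)
  then obtain a where "?P - {y'} = {a}" using card_1_singletonE by blast
  then have "opposite x y' a" "a \<in> nb x" using opposite_of_not_opposite[OF y, of y' a] yP by auto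
  then show False using assms(3) by (auto simp: starts_def)
qed

lemma card_starts_le: "card (starts x) \<le> card (nb x)"
  using finite_nb by (intro card_mono) (auto simp: starts_def)

lemma V2pi_opposite: assumes "x \<in> V2pi \<epsilon> V E"
  obtains x1 x2 where "nb x = {x1, x2}" "x1 \<noteq> x2" "opposite x x1 x2"
proof -
  obtain x1 x2 where h: "nb x = {x1, x2}" "inwin \<epsilon> pi (ang x1 x x2)" "card (nb x) = 2"
    using assms by (auto simp: V2pi_def Vdeg_def)
  have "x1 \<noteq> x2" using h by auto
  moreover have "opposite x x1 x2" using h(2) inwin_pi_ang_iff[of \<epsilon> x1 x x2] eps_pos by simp
  ultimately show ?thesis using h that by blast
qed

lemma vertex_budget: assumes "x \<in> V" shows "2 * singletons x + card (starts x) + card (nb x) \<le> 4"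
proof -
  have d4: "card (nb x) \<le> 4" by (rule card_nb_le_4)
  consider "card (nb x) = 0" | "card (nb x) = 1" | "card (nb x) = 2" | "card (nb x) = 3" | "card (nb x) = 4"
    using d4 by linarith
  then show ?thesis
  proof cases
    case 1
    then have "singletons x = 2" using assms by (simp add: singletons_def Vdeg_def)
    moreover have "card (starts x) = 0" using card_starts_le[of x] 1 by simp
    ultimately show ?thesis using 1 by simp
  next
    case 2
    then have "singletons x = 1" using assms by (simp add: singletons_def Vdeg_def)
    then show ?thesis using card_starts_le[of x] 2 by simp
  next
    case 3
    show ?thesis
    proof (cases "x \<in> V2pi \<epsilon> V E")
      case True
      then obtain x1 x2 where h: "nb x = {x1, x2}" "x1 \<noteq> x2" "opposite x x1 x2" by (rule V2pi_opposite)
      have "starts x = {}" using h opposite_commute[OF h(3)] by (auto simp: starts_def)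
      moreover have "singletons x = 1" using True 3 by (simp add: singletons_def Vdeg_def)
      ultimately show ?thesis using 3 by simp
    next
      case False
      then have "singletons x = 0" using 3 by (simp add: singletons_def Vdeg_def)
      then show ?thesis using card_starts_le[of x] 3 by simp
    qed
  next
    case 4
    then have "singletons x = 0" by (auto simp: singletons_def Vdeg_def V2pi_def)
    moreover have "card (starts x) \<le> 1"
      using starts_unique_of_card_nb_3[OF 4] card_le_Suc0_iff_eq[of "starts x"] finite_nb
      by (auto simp: starts_def)
    ultimately show ?thesis using 4 by simp
  next
    case 5
    then have "singletons x = 0" by (auto simp: singletons_def Vdeg_def V2pi_def)
    moreover have "starts x = {}" using card_nb_le_3_of_starts 5 by fastforce
    ultimately show ?thesis using 5 by simp
  qed
qed

section \<open>The strata multiset\<close>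

abbreviation "S \<equiv> strata \<epsilon> V E"
abbreviation "SG \<equiv> S_Gamma \<epsilon> V E"
abbreviation "Mx \<equiv> {\<gamma>. mpath \<gamma>}"
abbreviation "V0 \<equiv> Vdeg V E 0"
abbreviation "V12 \<equiv> Vdeg V E 1 \<union> V2pi \<epsilon> V E"
abbreviation "Vsgl \<equiv> Vdeg V E 0 \<union> Vdeg V E 1 \<union> V2pi \<epsilon> V E"

lemma pclass_eq_iff: "pclass \<gamma> = pclass \<gamma>' \<longleftrightarrow> \<gamma>' = \<gamma> \<or> \<gamma>' = rev \<gamma>"
  by (auto simp: pclass_def doubleton_eq_iff)

lemma spoints_pclass: "spoints (pclass \<gamma>) = set \<gamma>" by (simp add: spoints_def pclass_def)

lemma slen_pclass: "slen (pclass \<gamma>) = length \<gamma>"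
proof -
  have "(SOME \<gamma>'. \<gamma>' \<in> pclass \<gamma>) \<in> pclass \<gamma>" by (rule someI[of _ \<gamma>]) (simp add: pclass_def)
  then show ?thesis by (auto simp: slen_def pclass_def)
qed

lemma pclass_neq_singleton: assumes "mpath \<gamma>" shows "pclass \<gamma> \<noteq> pclass [x]"
proof -
  have "2 \<le> length \<gamma>" using spath_length[OF mpath_spath[OF assms]] .
  then show ?thesis by (auto simp: pclass_eq_iff)
qed

lemma SG_iff: "c \<in> SG \<longleftrightarrow> (\<exists>\<gamma>. mpath \<gamma> \<and> c = pclass \<gamma>)"
  by (auto simp: S_Gamma_def)

lemma pclass_singleton_eq_iff: "pclass [x] = pclass [y] \<longleftrightarrow> x = y" by (simp add: pclass_def)

lemma V2pi_Vdeg: "x \<in> V2pi \<epsilon> V E \<Longrightarrow> x \<in> Vdeg V E 2" by (simp add: V2pi_def)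

lemma card_nb_Vdeg: "x \<in> Vdeg V E i \<Longrightarrow> card (nb x) = i" by (simp add: Vdeg_def)

lemma V0_notin_V12: "x \<in> V0 \<Longrightarrow> x \<notin> V12"
  by (auto simp: Vdeg_def V2pi_def)

lemma finite_Mx: "finite Mx"
proof -
  have "Mx \<subseteq> {xs. set xs \<subseteq> V \<and> length xs \<le> card E + 1}"
  proof
    fix \<gamma> assume "\<gamma> \<in> Mx"
    then have s: "spath \<gamma>" using mpath_spath by simp
    show "\<gamma> \<in> {xs. set xs \<subseteq> V \<and> length xs \<le> card E + 1}"
      using spath_set[OF s] spath_length_le[OF s] by simp
  qed
  then show ?thesis using finite_lists_length_le[OF finite_V] finite_subset by blast
qed

lemma finite_SG: "finite SG" unfolding S_Gamma_def using finite_Mx by simp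

lemma inj_on_pclass_singleton: "inj_on (\<lambda>x. pclass [x]) A"
  by (auto intro: inj_onI simp: pclass_singleton_eq_iff)

lemma strata_eq: "S = mset_set SG + mset_set ((\<lambda>x. pclass [x]) ` V0) + mset_set ((\<lambda>x. pclass [x]) ` V0)
   + mset_set ((\<lambda>x. pclass [x]) ` V12)"
  unfolding strata_def image_mset_union image_mset_mset_set[OF inj_on_pclass_singleton]
    by (simp add: add.assoc)

lemma finite_V0: "finite V0" "finite V12"
proof -
  have "V0 \<subseteq> V" "V12 \<subseteq> V" by (auto simp: Vdeg_def V2pi_def)
  then show "finite V0" "finite V12" using finite_subset finite_V by auto
qed

lemma SG_neq_singleton: assumes "c \<in> SG" shows "c \<noteq> pclass [x]"
proof -
  obtain \<gamma> where "mpath \<gamma>" "c = pclass \<gamma>" using assms SG_iff by blast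
  then show ?thesis using pclass_neq_singleton by simp
qed

lemma count_strata: "count S c = (if c \<in> SG then 1 else 0) + 2 * (if c \<in> (\<lambda>x. pclass [x]) ` V0 then 1 else 0)
   + (if c \<in> (\<lambda>x. pclass [x]) ` V12 then 1 else 0)"
  unfolding strata_eq using finite_SG finite_V0 by (simp add: count_mset_set')

lemma count_strata_SG: "c \<in> SG \<Longrightarrow> count S c = 1"
  using SG_neq_singleton unfolding count_strata by auto

lemma count_strata_singleton:
  "count S (pclass [x]) = (if x \<in> V0 then 2 else if x \<in> V12 then 1 else 0)"
  using SG_neq_singleton V0_notin_V12 unfolding count_strata by (auto simp: pclass_singleton_eq_iff)

lemma size_strata: "size S = card SG + 2 * card V0 + card V12"
  unfolding strata_def by (simp add: size_mset_set)

section \<open>Copies of strata and their directions\<close>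

abbreviation "copies \<equiv> mcopies S"

lemma copies_cases:
  assumes "A \<in> copies"
  obtains (path) \<gamma> where "mpath \<gamma>" "A = (pclass \<gamma>, 0)"
    | (sgl) x where "x \<in> Vsgl" "A = (pclass [x], 0)"
    | (sgl1) x where "x \<in> V0" "A = (pclass [x], 1)"
proof -
  obtain c k where A: "A = (c, k)" "k < count S c" using assms by (auto simp: mcopies_def)
  show thesis
  proof (cases "c \<in> SG")
    case True
    then obtain \<gamma> where "mpath \<gamma>" "c = pclass \<gamma>" using SG_iff by blast
    then show thesis using path A count_strata_SG[OF True] by simp
  next
    case False
    then obtain x where x: "c = pclass [x]" using A(2) unfolding count_strata by (auto split: if_splits)
    then show thesis using A count_strata_singleton[of x] sgl sgl1
      by (auto split: if_splits simp: less_2_cases_iff)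
  qed
qed

lemma path_in_copies: assumes "mpath \<gamma>" shows "(pclass \<gamma>, 0) \<in> copies"
proof -
  have "count S (pclass \<gamma>) = 1" using assms SG_iff count_strata_SG by blast
  then show ?thesis by (simp add: mcopies_def)
qed

lemma singleton_in_copies: "x \<in> Vsgl \<Longrightarrow> (pclass [x], 0) \<in> copies"
  using count_strata_singleton[of x] by (auto simp: mcopies_def)
lemma singleton_copy1_in_copies: "x \<in> V0 \<Longrightarrow> (pclass [x], 1) \<in> copies"
  using count_strata_singleton[of x] by (auto simp: mcopies_def)

definition cpts :: "complex list set \<times> nat \<Rightarrow> complex set" where
  "cpts A = spoints (fst A)"

definition dir :: "complex list set \<times> nat \<Rightarrow> complex \<Rightarrow> complex \<Rightarrow> bool" where
  "dir A v u \<longleftrightarrow>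
     (snd A = 0 \<and> (\<exists>\<gamma> j. mpath \<gamma> \<and> fst A = pclass \<gamma> \<and> Suc j < length \<gamma> \<and> (v = \<gamma>!j \<or> v = \<gamma>!Suc j)
        \<and> u = edge_vec \<gamma> j))
   \<or> (\<exists>x. fst A = pclass [x] \<and> v = x \<and>
        ((x \<in> V12 \<and> snd A = 0 \<and> (\<exists>y \<in> nb x. u = \<i> * (y - x)))
         \<or> (x \<in> V0 \<and> ((snd A = 0 \<and> u = \<i>) \<or> (snd A = 1 \<and> u = 1)))))"

lemma edge_vec_rev: assumes "Suc j < length \<gamma>"
  shows "edge_vec (rev \<gamma>) j = - edge_vec \<gamma> (length \<gamma> - 2 - j)"
    "rev \<gamma>!j = \<gamma>!Suc (length \<gamma> - 2 - j)" "rev \<gamma>!Suc j = \<gamma>!(length \<gamma> - 2 - j)"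
proof -
  define k where "k = length \<gamma> - 2 - j"
  have c1: "length \<gamma> - Suc j = Suc k" "length \<gamma> - Suc (Suc j) = k" using assms by (auto simp: k_def)
  have a: "rev \<gamma>!j = \<gamma>!Suc k" using assms c1 by (subst rev_nth) auto
  have b: "rev \<gamma>!Suc j = \<gamma>!k" using assms c1 by (subst rev_nth) auto
  show "rev \<gamma>!j = \<gamma>!Suc (length \<gamma> - 2 - j)" "rev \<gamma>!Suc j = \<gamma>!(length \<gamma> - 2 - j)"
    using a b by (simp_all add: k_def)
  then show "edge_vec (rev \<gamma>) j = - edge_vec \<gamma> (length \<gamma> - 2 - j)" by (simp add: edge_vec_def)
qed

lemma dir_path:
  assumes "dir A v u" "mpath \<gamma>0" "fst A = pclass \<gamma>0"
  shows "snd A = 0 \<and> (\<exists>j. Suc j < length \<gamma>0 \<and> (v = \<gamma>0!j \<or> v = \<gamma>0!Suc j) \<and> (u = edge_vec \<gamma>0 j \<or> u = - edge_vec \<gamma>0 j))"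
proof -
  have ns: "\<not> (\<exists>x. fst A = pclass [x])" using pclass_neq_singleton[OF assms(2)] assms(3) by auto
  then obtain \<gamma> j where h: "snd A = 0" "mpath \<gamma>" "fst A = pclass \<gamma>" "Suc j < length \<gamma>" "v = \<gamma>!j \<or> v = \<gamma>!Suc j" "u = edge_vec \<gamma> j"
    using assms(1) unfolding dir_def by blast
  have "\<gamma> = \<gamma>0 \<or> \<gamma> = rev \<gamma>0"
    using h(3) assms(3) pclass_eq_iff[of \<gamma>0 \<gamma>] by simp
  then show ?thesis
  proof
    assume "\<gamma> = \<gamma>0" then show ?thesis using h by blast
  next
    assume r: "\<gamma> = rev \<gamma>0"
    let ?j = "length \<gamma>0 - 2 - j"
    have l: "Suc j < length \<gamma>0" using h r by simp
    have "Suc ?j < length \<gamma>0" using l by auto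
    moreover have "v = \<gamma>0!?j \<or> v = \<gamma>0!Suc ?j" using h(5) edge_vec_rev[OF l] r by auto
    moreover have "u = - edge_vec \<gamma>0 ?j" using h(6) edge_vec_rev[OF l] r by simp
    ultimately show ?thesis using h(1) by blast
  qed
qed

lemma cpts_path: "cpts (pclass \<gamma>, k) = set \<gamma>" by (simp add: cpts_def spoints_pclass)
lemma cpts_singleton: "cpts (pclass [x], k) = {x}" by (simp add: cpts_def spoints_pclass)

lemma cpts_subset_V: assumes "A \<in> copies" shows "cpts A \<subseteq> V"
  using assms
proof (cases rule: copies_cases)
  case (path \<gamma>) then show ?thesis using spath_set[OF mpath_spath] cpts_path by simp
next
  case (sgl x) then show ?thesis using cpts_singleton by (auto simp: Vdeg_def V2pi_def)
next
  case (sgl1 x) then show ?thesis using cpts_singleton by (auto simp: Vdeg_def)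
qed

lemma slen_copies: assumes "A \<in> copies"
  shows "slen (fst A) = card (cpts A)" "1 \<le> card (cpts A)" "finite (cpts A)"
proof -
  have "slen (fst A) = card (cpts A) \<and> 1 \<le> card (cpts A) \<and> finite (cpts A)"
    using assms
  proof (cases rule: copies_cases)
    case (path \<gamma>)
    have s: "spath \<gamma>" using mpath_spath[OF path(1)] .
    have "card (set \<gamma>) = length \<gamma>" using distinct_card[OF spath_distinct[OF s]] .
    moreover have "2 \<le> length \<gamma>" using spath_length[OF s] .
    ultimately show ?thesis using path slen_pclass cpts_path by simp
  next
    case (sgl x) then show ?thesis using slen_pclass[of "[x]"] cpts_singleton by simp
  next
    case (sgl1 x) then show ?thesis using slen_pclass[of "[x]"] cpts_singleton by simp
  qed
  then show "slen (fst A) = card (cpts A)" "1 \<le> card (cpts A)" "finite (cpts A)" by auto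
qed

lemma in_sperp_iff: "c \<in># sperp S s \<longleftrightarrow> c \<in># S - {#s#} \<and> spoints c \<inter> spoints s \<noteq> {}"
  by (simp only: sperp_def set_mset_filter mem_Collect_eq)

lemma cpts_subset_sspan: assumes "A \<in> copies" "B \<in> copies" "B \<noteq> A" "cpts B \<inter> cpts A \<noteq> {}"
  shows "cpts B \<subseteq> sspan S (fst A)"
proof -
  have "fst B \<in># sperp S (fst A)"
    using mcopies_fst_in_diff[OF assms(1,2) assms(3)[symmetric]] assms(4) in_sperp_iff by (simp add: cpts_def)
  then show ?thesis unfolding sspan_def cpts_def by blast
qed

lemma sspan_obtain_copy: assumes "A \<in> copies" "w \<in> sspan S (fst A)"
  shows "\<exists>B \<in> copies. B \<noteq> A \<and> w \<in> cpts B \<and> cpts B \<inter> cpts A \<noteq> {}"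
proof -
  obtain c where c: "c \<in># sperp S (fst A)" "w \<in> spoints c" using assms(2) unfolding sspan_def by blast
  then have "c \<in># S - {#fst A#}" "spoints c \<inter> spoints (fst A) \<noteq> {}" using in_sperp_iff by auto
  moreover obtain B where "B \<in> copies" "B \<noteq> A" "fst B = c"
    using mcopies_obtain_other[OF assms(1) calculation(1)] by blast
  ultimately show ?thesis using c(2) by (auto simp: cpts_def)
qed

lemma dir_nonzero: "dir A v u \<Longrightarrow> u \<noteq> 0"
  unfolding dir_def using nbD(3) edge_vec_nonzero[OF mpath_spath] by fastforce

lemma dir_cpts: "dir A v u \<Longrightarrow> v \<in> cpts A"
  unfolding dir_def by (auto simp: cpts_def spoints_pclass)

lemma dir_exists: assumes "A \<in> copies" "v \<in> cpts A" shows "\<exists>u. dir A v u"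
  using assms(1)
proof (cases rule: copies_cases)
  case (path \<gamma>)
  then have v: "v \<in> set \<gamma>" using assms(2) cpts_path by simp
  then obtain m where m: "m < length \<gamma>" "v = \<gamma>!m" by (auto simp: in_set_conv_nth)
  have n: "2 \<le> length \<gamma>" using spath_length[OF mpath_spath[OF path(1)]] .
  show ?thesis
  proof (cases "Suc m < length \<gamma>")
    case True then show ?thesis using path m unfolding dir_def by auto
  next
    case False
    then have "Suc (m - 1) < length \<gamma>" "v = \<gamma>!Suc (m - 1)" using m n by auto
    then show ?thesis using path unfolding dir_def by auto
  qed
next
  case (sgl x)
  then have v: "v = x" using assms(2) cpts_singleton by simp
  show ?thesis
  proof (cases "x \<in> Vdeg V E 0")
    case True then show ?thesis using sgl v unfolding dir_def by auto
  next
    case False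
    then have x: "x \<in> Vdeg V E 1 \<union> V2pi \<epsilon> V E" using sgl by auto
    then have "card (nb x) \<noteq> 0" using card_nb_Vdeg V2pi_Vdeg by fastforce
    then obtain y where "y \<in> nb x" using card.empty by (metis ex_in_conv)
    then show ?thesis using sgl v x unfolding dir_def by auto
  qed
next
  case (sgl1 x)
  then show ?thesis using assms(2) cpts_singleton unfolding dir_def by auto
qed

definition path_nbr :: "complex list \<Rightarrow> nat \<Rightarrow> complex \<Rightarrow> bool" where
  "path_nbr \<gamma> m w \<longleftrightarrow> (Suc m < length \<gamma> \<and> w = \<gamma>!Suc m) \<or> (0 < m \<and> m < length \<gamma> \<and> w = \<gamma>!(m - 1))"

lemma path_nbr_nb: assumes "spath \<gamma>" "path_nbr \<gamma> m w" shows "w \<in> nb (\<gamma>!m)"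
proof -
  have "(Suc m < length \<gamma> \<and> w = \<gamma>!Suc m) \<or> (0 < m \<and> m < length \<gamma> \<and> w = \<gamma>!(m - 1))"
    using assms(2) by (simp add: path_nbr_def)
  then show ?thesis
  proof
    assume "Suc m < length \<gamma> \<and> w = \<gamma>!Suc m" then show ?thesis
      using spath_nb_next[OF assms(1)] by blast
  next
    assume h: "0 < m \<and> m < length \<gamma> \<and> w = \<gamma>!(m - 1)"
    then have "Suc (m - 1) = m" by simp
    then show ?thesis using spath_nb_prev[OF assms(1), of "m - 1"] h by simp
  qed
qed

lemma pclass_eq_of_common_edge:
  assumes "mpath \<gamma>" "mpath \<gamma>'" "Suc j < length \<gamma>" "Suc k < length \<gamma>'" "{\<gamma>!j, \<gamma>!Suc j} = {\<gamma>'!k, \<gamma>'!Suc k}"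
  shows "pclass \<gamma> = pclass \<gamma>'"
proof -
  have ne: "\<gamma>!j \<noteq> \<gamma>!Suc j" using edgeD(3)[OF spath_edge[OF mpath_spath[OF assms(1)] assms(3)]] .
  have "(\<gamma>!j = \<gamma>'!k \<and> \<gamma>!Suc j = \<gamma>'!Suc k) \<or> (\<gamma>!j = \<gamma>'!Suc k \<and> \<gamma>!Suc j = \<gamma>'!k)"
    using assms(5) ne by (auto simp: doubleton_eq_iff)
  then show ?thesis
  proof
    assume "\<gamma>!j = \<gamma>'!k \<and> \<gamma>!Suc j = \<gamma>'!Suc k"
    then have "\<gamma> = \<gamma>'" using mpath_determined_by_edge[OF assms(1-4)] by blast
    then show ?thesis by simp
  next
    assume h: "\<gamma>!j = \<gamma>'!Suc k \<and> \<gamma>!Suc j = \<gamma>'!k"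
    let ?k = "length \<gamma>' - 2 - k"
    have r: "rev \<gamma>'!?k = \<gamma>'!Suc k" "rev \<gamma>'!Suc ?k = \<gamma>'!k"
    proof -
      have "Suc ?k < length \<gamma>'" using assms(4) by auto
      have "rev \<gamma>'!?k = \<gamma>'!Suc (length \<gamma>' - 2 - ?k)" "rev \<gamma>'!Suc ?k = \<gamma>'!(length \<gamma>' - 2 - ?k)"
        using edge_vec_rev[OF \<open>Suc ?k < length \<gamma>'\<close>] by simp_all
      moreover have "length \<gamma>' - 2 - ?k = k" using assms(4) by auto
      ultimately show "rev \<gamma>'!?k = \<gamma>'!Suc k" "rev \<gamma>'!Suc ?k = \<gamma>'!k" by simp_all
    qed
    have "Suc ?k < length (rev \<gamma>')" using assms(4) by auto
    then have "\<gamma> = rev \<gamma>'"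
      using mpath_determined_by_edge[OF assms(1) mpath_rev[OF assms(2)] assms(3)] h r by auto
    then show ?thesis by (simp add: pclass_def insert_commute)
  qed
qed

lemma pclass_eq_of_path_nbr: assumes "mpath \<gamma>" "mpath \<gamma>'" "path_nbr \<gamma> m w" "path_nbr \<gamma>' m' w" "\<gamma>!m = \<gamma>'!m'"
  shows "pclass \<gamma> = pclass \<gamma>'"
proof -
  have e1: "\<exists>j. Suc j < length \<gamma> \<and> {\<gamma>!j, \<gamma>!Suc j} = {\<gamma>!m, w}"
  proof (cases "Suc m < length \<gamma> \<and> w = \<gamma>!Suc m")
    case True then show ?thesis by blast
  next
    case False
    then have h: "0 < m" "m < length \<gamma>" "w = \<gamma>!(m - 1)" using assms(3) by (auto simp: path_nbr_def)
    then have "Suc (m - 1) < length \<gamma>" "Suc (m - 1) = m" by auto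
    then show ?thesis using h by (intro exI[of _ "m - 1"]) auto
  qed
  have e2: "\<exists>j. Suc j < length \<gamma>' \<and> {\<gamma>'!j, \<gamma>'!Suc j} = {\<gamma>'!m', w}"
  proof (cases "Suc m' < length \<gamma>' \<and> w = \<gamma>'!Suc m'")
    case True then show ?thesis by blast
  next
    case False
    then have h: "0 < m'" "m' < length \<gamma>'" "w = \<gamma>'!(m' - 1)" using assms(4) by (auto simp: path_nbr_def)
    then have "Suc (m' - 1) < length \<gamma>'" "Suc (m' - 1) = m'" by auto
    then show ?thesis using h by (intro exI[of _ "m' - 1"]) auto
  qed
  obtain j j' where "Suc j < length \<gamma>" "{\<gamma>!j, \<gamma>!Suc j} = {\<gamma>!m, w}"
    "Suc j' < length \<gamma>'" "{\<gamma>'!j', \<gamma>'!Suc j'} = {\<gamma>'!m', w}" using e1 e2 by blast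
  then show ?thesis using pclass_eq_of_common_edge[OF assms(1,2)] assms(5) by metis
qed

lemma path_nbr_not_opposite:
  assumes "mpath \<gamma>" "m < length \<gamma>" "path_nbr \<gamma> m w" "w' \<in> nb (\<gamma>!m)" "\<not> path_nbr \<gamma> m w'"
  shows "\<not> opposite (\<gamma>!m) w w'"
proof
  assume o: "opposite (\<gamma>!m) w w'"
  have s: "spath \<gamma>" using mpath_spath[OF assms(1)] .
  have n: "2 \<le> length \<gamma>" using spath_length[OF s] .
  consider "m = 0" | "Suc m = length \<gamma>" | "0 < m \<and> Suc m < length \<gamma>" using assms(2) by linarith
  then show False
  proof cases
    case 1
    then have "w = \<gamma>!1" using assms(3) by (auto simp: path_nbr_def)
    then show False using mpath_no_extend_hd[OF assms(1)] o assms(4) 1 by simp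
  next
    case 2
    then have m: "m = length \<gamma> - 1" "m - 1 = length \<gamma> - 2" by auto
    have "w = \<gamma>!(m - 1)" using assms(3) 2 by (auto simp: path_nbr_def)
    then show False using mpath_no_extend_last[OF assms(1)] o assms(4) m by simp
  next
    case 3
    have o2: "opposite (\<gamma>!m) (\<gamma>!Suc m) (\<gamma>!(m - 1))" using spath_opposite[OF s] 3 by simp
    have nb1: "\<gamma>!Suc m \<in> nb (\<gamma>!m)" "\<gamma>!(m-1) \<in> nb (\<gamma>!m)"
      using path_nbr_nb[OF s] 3 by (auto simp: path_nbr_def)
    have "w = \<gamma>!Suc m \<or> w = \<gamma>!(m - 1)" using assms(3) by (auto simp: path_nbr_def)
    then show False
    proof
      assume w: "w = \<gamma>!Suc m"
      have "w' \<noteq> \<gamma>!(m - 1)" using assms(5) 3 by (auto simp: path_nbr_def)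
      then show False using opposite_unique[OF nb1(2) assms(4)] o2 o w by blast
    next
      assume w: "w = \<gamma>!(m - 1)"
      have "w' \<noteq> \<gamma>!Suc m" using assms(5) 3 by (auto simp: path_nbr_def)
      then show False using opposite_unique[OF nb1(1) assms(4)] opposite_commute[OF o2] o w by blast
    qed
  qed
qed

lemma dir_path_nbr: assumes "dir A v u" "mpath \<gamma>" "fst A = pclass \<gamma>" "m < length \<gamma>" "v = \<gamma>!m"
  shows "snd A = 0 \<and> (\<exists>w. path_nbr \<gamma> m w \<and> (u = w - v \<or> u = - (w - v)))"
proof -
  obtain j where j: "snd A = 0" "Suc j < length \<gamma>" "v = \<gamma>!j \<or> v = \<gamma>!Suc j" "u = edge_vec \<gamma> j \<or> u = - edge_vec \<gamma> j"
    using dir_path[OF assms(1-3)] by blast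
  have d: "distinct \<gamma>" using spath_distinct[OF mpath_spath[OF assms(2)]] .
  from j(3) show ?thesis
  proof
    assume "v = \<gamma>!j"
    then have "j = m" using nth_eq_iff_index_eq[OF d] assms(4,5) j(2) by simp
    then have "path_nbr \<gamma> m (\<gamma>!Suc j)" using j(2) by (simp add: path_nbr_def)
    moreover have "edge_vec \<gamma> j = \<gamma>!Suc j - v"
      using \<open>v = \<gamma>!j\<close> by (simp add: edge_vec_def)
    ultimately show ?thesis using j by auto
  next
    assume "v = \<gamma>!Suc j"
    then have "Suc j = m" using nth_eq_iff_index_eq[OF d] assms(4,5) j(2) by simp
    then have "path_nbr \<gamma> m (\<gamma>!j)" using j(2) by (auto simp: path_nbr_def)
    moreover have "edge_vec \<gamma> j = - (\<gamma>!j - v)"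
      using \<open>v = \<gamma>!Suc j\<close> by (simp add: edge_vec_def)
    ultimately show ?thesis using j by auto
  qed
qed

lemma dir_singleton: assumes "dir A v u" "fst A = pclass [x]"
  shows "v = x \<and> ((x \<in> V12 \<and> snd A = 0 \<and> (\<exists>y\<in>nb x. u = \<i> * (y - x)))
        \<or> (x \<in> V0 \<and> ((snd A = 0 \<and> u = \<i>) \<or> (snd A = 1 \<and> u = 1))))"
  using assms pclass_neq_singleton[of _ x] unfolding dir_def by (auto simp: pclass_singleton_eq_iff)

section \<open>Crossing copies are almost perpendicular\<close>

lemma nb_V0: "x \<in> Vdeg V E 0 \<Longrightarrow> nb x = {}" using finite_nb by (simp add: Vdeg_def)
lemma nb_V1_eq: assumes "x \<in> Vdeg V E 1" "y \<in> nb x" "y' \<in> nb x" shows "y = y'"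
proof -
  have "card (nb x) = 1" using assms(1) by (simp add: Vdeg_def)
  then obtain z where "nb x = {z}" using card_1_singletonE by blast
  then show ?thesis using assms by simp
qed

lemma V2pi_opposite_pair: assumes "x \<in> V2pi \<epsilon> V E" "y \<in> nb x" "y' \<in> nb x" "y \<noteq> y'" shows "opposite x y y'"
proof -
  obtain x1 x2 where h: "nb x = {x1, x2}" "x1 \<noteq> x2" "opposite x x1 x2" using V2pi_opposite[OF assms(1)]
    by blast
  have "(y = x1 \<and> y' = x2) \<or> (y = x2 \<and> y' = x1)" using h assms by auto
  then show ?thesis using h(3) opposite_commute by blast
qed

lemma obtain_index: assumes "v \<in> set \<gamma>" obtains m where "m < length \<gamma>" "v = \<gamma>!m"
  using assms by (auto simp: in_set_conv_nth)

lemma langle_dir_singleton_less: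
  assumes "dir A v u" "dir A v' u'" "fst A = pclass [x]"
  shows "langle u u' < \<delta>"
proof (cases "u = u'")
  case True then show ?thesis using langle_self eps_bounds by simp
next
  case False
  obtain y y' where y: "y \<in> nb x" "u = \<i> * (y - x)" "y' \<in> nb x" "u' = \<i> * (y' - x)" and x: "x \<in> V12"
    using dir_singleton[OF assms(1,3)] dir_singleton[OF assms(2,3)] False V0_notin_V12 by auto
  then have "y \<noteq> y'" using False by auto
  then have "x \<in> V2pi \<epsilon> V E" using x nb_V1_eq y by blast
  then have "opposite x y y'" using V2pi_opposite_pair y \<open>y \<noteq> y'\<close> by blast
  then have "langle (y - x) (y' - x) \<le> \<epsilon>" by (rule langle_le_of_opposite)
  then show ?thesis using y langle_mult_ii eps_bounds by simp
qed

lemma langle_dir_less: assumes "A \<in> copies" "dir A v u" "dir A v' u'" shows "langle u u' < \<delta>"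
  using assms(1)
proof (cases rule: copies_cases)
  case (path \<gamma>)
  obtain j where j: "Suc j < length \<gamma>" "u = edge_vec \<gamma> j \<or> u = - edge_vec \<gamma> j"
    using dir_path[OF assms(2) path(1)] path by auto
  obtain j' where j': "Suc j' < length \<gamma>" "u' = edge_vec \<gamma> j' \<or> u' = - edge_vec \<gamma> j'"
    using dir_path[OF assms(3) path(1)] path by auto
  have s: "spath \<gamma>" using mpath_spath[OF path(1)] .
  have "langle u u' = langle (edge_vec \<gamma> j) (edge_vec \<gamma> j')"
    using langle_uminus_cases edge_vec_nonzero[OF s j(1)] edge_vec_nonzero[OF s j'(1)] j j' by blast
  also have "\<dots> \<le> vangle (edge_vec \<gamma> j) (edge_vec \<gamma> j')" by (rule langle_le_vangle)
  also have "\<dots> < \<delta>" using vangle_edge_vec_less[OF s j(1) j'(1)] .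
  finally show ?thesis .
qed (use langle_dir_singleton_less assms(2,3) in auto)

lemma dir_perp_path_path:
  assumes "mpath \<gamma>" "mpath \<gamma>'" "pclass \<gamma> \<noteq> pclass \<gamma>'" "fst A = pclass \<gamma>" "fst B = pclass \<gamma>'"
  "dir A v u" "dir B v u'" shows "pi / 2 - \<epsilon> \<le> langle u u'"
proof -
  have v1: "v \<in> set \<gamma>" using dir_cpts[OF assms(6)] assms(4) by (simp add: cpts_def spoints_pclass)
  have v2: "v \<in> set \<gamma>'" using dir_cpts[OF assms(7)] assms(5) by (simp add: cpts_def spoints_pclass)
  obtain m where m: "m < length \<gamma>" "v = \<gamma>!m" using obtain_index[OF v1] by blast
  obtain m' where m': "m' < length \<gamma>'" "v = \<gamma>'!m'" using obtain_index[OF v2] by blast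
  obtain w where w: "path_nbr \<gamma> m w" "u = w - v \<or> u = - (w - v)"
    using dir_path_nbr[OF assms(6,1,4) m] by blast
  obtain w' where w': "path_nbr \<gamma>' m' w'" "u' = w' - v \<or> u' = - (w' - v)"
    using dir_path_nbr[OF assms(7,2,5) m'] by blast
  have npn: "\<not> path_nbr \<gamma> m w'" using pclass_eq_of_path_nbr[OF assms(1,2) _ w'(1)] m m' assms(3) by auto
  have wn: "w \<in> nb v" using path_nbr_nb[OF mpath_spath[OF assms(1)] w(1)] m by simp
  have wn': "w' \<in> nb v" using path_nbr_nb[OF mpath_spath[OF assms(2)] w'(1)] m' by simp
  have ne: "w \<noteq> w'" using npn w(1) by auto
  have "\<not> opposite v w w'" using path_nbr_not_opposite[OF assms(1) m(1) w(1)] wn' npn m by simp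
  then have p: "pi / 2 - \<epsilon> \<le> langle (w - v) (w' - v)" using langle_ge_of_not_opposite[OF wn wn' ne] by simp
  have "langle u u' = langle (w - v) (w' - v)"
    using langle_uminus_cases w(2) w'(2) nbD(3)[OF wn] nbD(3)[OF wn'] by force
  then show ?thesis using p by simp
qed

lemma dir_perp_path_singleton:
  assumes "mpath \<gamma>" "fst A = pclass \<gamma>" "fst B = pclass [x]" "dir A v u" "dir B v u'"
  shows "pi / 2 - \<epsilon> \<le> langle u u'"
proof -
  note s = dir_singleton[OF assms(5,3)]
  have v1: "v \<in> set \<gamma>" using dir_cpts[OF assms(4)] assms(2) by (simp add: cpts_def spoints_pclass)
  obtain m where m: "m < length \<gamma>" "v = \<gamma>!m" using obtain_index[OF v1] by blast
  obtain w where w: "path_nbr \<gamma> m w" "u = w - v \<or> u = - (w - v)"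
    using dir_path_nbr[OF assms(4,1,2) m] by blast
  have wn: "w \<in> nb x" using path_nbr_nb[OF mpath_spath[OF assms(1)] w(1)] m s by simp
  then have "x \<notin> Vdeg V E 0" using nb_V0 by auto
  then obtain y where y: "x \<in> Vdeg V E 1 \<union> V2pi \<epsilon> V E" "y \<in> nb x" "u' = \<i> * (y - x)"
    using s by blast
  have nz: "w - x \<noteq> 0" "y - x \<noteq> 0" using nbD(3)[OF wn] nbD(3)[OF y(2)] by auto
  have pu: "langle u u' = langle (w - x) (\<i> * (y - x))"
  proof -
    have "u = (w - x) \<or> u = - (w - x)" using w(2) s by simp
    moreover have "\<i> * (y - x) \<noteq> 0" using nz by simp
    ultimately show ?thesis using langle_uminus_cases[of "w - x" "\<i> * (y - x)" u u'] nz y(3) by blast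
  qed
  also have "\<dots> = pi / 2 - langle (w - x) (y - x)" using langle_mult_ii_right nz by simp
  finally have e: "langle u u' = pi / 2 - langle (w - x) (y - x)" .
  show ?thesis
  proof (cases "w = y")
    case True then show ?thesis using e langle_self[of "y - x"] eps_pos by simp
  next
    case False
    then have "x \<in> V2pi \<epsilon> V E" using y nb_V1_eq wn by blast
    then have "opposite x w y" using V2pi_opposite_pair wn y(2) False by blast
    then have "langle (w - x) (y - x) \<le> \<epsilon>" by (rule langle_le_of_opposite)
    then show ?thesis using e by simp
  qed
qed

lemma dir_perp_singletons:
  assumes "fst A = pclass [x]" "fst B = pclass [x']" "A \<noteq> B" "dir A v u" "dir B v u'"
  shows "pi / 2 - \<epsilon> \<le> langle u u'"
proof -
  note a = dir_singleton[OF assms(4,1)] and b = dir_singleton[OF assms(5,2)]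
  then have "x' = x" by simp
  then have "snd A \<noteq> snd B" using assms(1,2,3) by (metis prod.expand)
  then have "(u = \<i> \<and> u' = 1) \<or> (u = 1 \<and> u' = \<i>)" using a b \<open>x' = x\<close> V0_notin_V12 by auto
  then show ?thesis using langle_1_ii langle_commute[of 1 "\<i>"] eps_pos by auto
qed

lemma dir_perp: assumes "A \<in> copies" "B \<in> copies" "A \<noteq> B" "dir A v u" "dir B v u'"
  shows "pi / 2 - \<epsilon> \<le> langle u u'"
  using assms(1)
proof (cases rule: copies_cases)
  case (path \<gamma>)
  show ?thesis using assms(2)
  proof (cases rule: copies_cases)
    case (path \<gamma>')
    have "pclass \<gamma> \<noteq> pclass \<gamma>'"
      using assms(3) \<open>A = (pclass \<gamma>, 0)\<close> \<open>B = (pclass \<gamma>', 0)\<close> by auto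
    then show ?thesis
      using dir_perp_path_path[OF \<open>mpath \<gamma>\<close> \<open>mpath \<gamma>'\<close> _ _ _ assms(4,5)] \<open>A = (pclass \<gamma>, 0)\<close> \<open>B = (pclass \<gamma>', 0)\<close> by simp
  next
    case (sgl x) then show ?thesis
      using dir_perp_path_singleton[OF \<open>mpath \<gamma>\<close>, of A B x v u u'] path assms(4,5) by simp
  next
    case (sgl1 x) then show ?thesis
      using dir_perp_path_singleton[OF \<open>mpath \<gamma>\<close>, of A B x v u u'] path assms(4,5) by simp
  qed
next
  case (sgl x)
  show ?thesis using assms(2)
  proof (cases rule: copies_cases)
    case (path \<gamma>')
    then show ?thesis
      using dir_perp_path_singleton[OF \<open>mpath \<gamma>'\<close>, of B A x v u' u] sgl assms(4,5) langle_commute[of u u'] by simp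
  next
    case (sgl x') then show ?thesis
      using dir_perp_singletons[OF _ _ assms(3,4,5)] \<open>A = (pclass [x], 0)\<close> by simp
  next
    case (sgl1 x') then show ?thesis
      using dir_perp_singletons[OF _ _ assms(3,4,5)] \<open>A = (pclass [x], 0)\<close> by simp
  qed
next
  case (sgl1 x)
  show ?thesis using assms(2)
  proof (cases rule: copies_cases)
    case (path \<gamma>')
    then show ?thesis
      using dir_perp_path_singleton[OF \<open>mpath \<gamma>'\<close>, of B A x v u' u] sgl1 assms(4,5) langle_commute[of u u'] by simp
  next
    case (sgl x') then show ?thesis
      using dir_perp_singletons[OF _ _ assms(3,4,5)] \<open>A = (pclass [x], 1)\<close> by simp
  next
    case (sgl1 x') then show ?thesis
      using dir_perp_singletons[OF _ _ assms(3,4,5)] \<open>A = (pclass [x], 1)\<close> by simp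
  qed
qed

section \<open>Forbidden chains of copies\<close>

lemma langle_turn: assumes "a \<noteq> 0" "b \<noteq> 0" "c \<noteq> 0" "langle a c \<le> s" "pi / 2 - \<epsilon> \<le> langle a b"
  shows "langle b (\<i> * c) \<le> s + \<epsilon>"
proof -
  have "langle b (\<i> * c) \<le> langle b (\<i> * a) + langle (\<i> * a) (\<i> * c)"
    using langle_triangle assms by simp
  moreover have "langle b (\<i> * a) \<le> \<epsilon>" using langle_ii_le_of_perp[OF assms(1,2,5)] .
  moreover have "langle (\<i> * a) (\<i> * c) = langle a c" by (rule langle_mult_ii)
  ultimately show ?thesis using assms(4) by simp
qed

lemma langle_drift: assumes "a \<noteq> 0" "b \<noteq> 0" "c \<noteq> 0" "langle a c \<le> s" "langle a b < d"
  shows "langle b c \<le> s + d"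
proof -
  have "langle b c \<le> langle b a + langle a c" using langle_triangle assms by simp
  then show ?thesis using assms langle_commute[of a b] by simp
qed

lemma obtain_dir: assumes "A \<in> copies" "v \<in> cpts A" obtains u where "dir A v u" "u \<noteq> 0"
  using dir_exists[OF assms] dir_nonzero by blast

lemma dir_cross:
  assumes "A \<in> copies" "B \<in> copies" "A \<noteq> B" "dir A p u" "dir B p u'" "langle u c \<le> s" "c \<noteq> 0"
  shows "langle u' (\<i> * c) \<le> s + \<epsilon>"
  using langle_turn[OF dir_nonzero[OF assms(4)] dir_nonzero[OF assms(5)] assms(7,6)] dir_perp[OF assms(1-5)] .

lemma dir_cross_drift:
  assumes "A \<in> copies" "B \<in> copies" "A \<noteq> B" "dir A p u" "p \<in> cpts B" "dir B q w" "langle u c \<le> s" "c \<noteq> 0"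
  shows "langle w (\<i> * c) \<le> s + \<epsilon> + \<delta>"
proof -
  obtain u' where u': "dir B p u'" "u' \<noteq> 0" using obtain_dir[OF assms(2,5)] by blast
  have "langle u' (\<i> * c) \<le> s + \<epsilon>" by (rule dir_cross[OF assms(1-4) u'(1) assms(7,8)])
  moreover have "langle u' w < \<delta>" using langle_dir_less[OF assms(2) u'(1) assms(6)] .
  ultimately show ?thesis
    using langle_drift[of u' w "\<i> * c" "s + \<epsilon>" \<delta>] u'(2) dir_nonzero[OF assms(6)] assms(8) by simp
qed

lemma no_triangle: assumes "A \<in> copies" "B \<in> copies" "C \<in> copies" "A \<noteq> B" "B \<noteq> C" "C \<noteq> A"
  "a \<in> cpts A" "a \<in> cpts B" "b \<in> cpts B" "b \<in> cpts C" "c \<in> cpts C" "c \<in> cpts A"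
  shows False
proof -
  obtain u where u: "dir A a u" "u \<noteq> 0" using obtain_dir assms by blast
  obtain uB where uB: "dir B b uB" using obtain_dir assms by blast
  obtain uC where uC: "dir C c uC" using obtain_dir assms by blast
  have "langle u u \<le> 0" by (simp add: langle_self)
  then have "langle uB (\<i> * u) \<le> 0 + \<epsilon> + \<delta>"
    by (rule dir_cross_drift[OF assms(1,2,4) u(1) assms(8) uB]) (simp add: u(2))
  then have "langle uC (\<i> * (\<i> * u)) \<le> 0 + \<epsilon> + \<delta> + \<epsilon> + \<delta>"
    by (rule dir_cross_drift[OF assms(2,3,5) uB assms(10) uC]) (simp add: u(2))
  then have "langle u (\<i> * (\<i> * (\<i> * u))) \<le> 0 + \<epsilon> + \<delta> + \<epsilon> + \<delta> + \<epsilon> + \<delta>"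
    by (rule dir_cross_drift[OF assms(3,1,6) uC assms(12) u(1)]) (simp add: u(2))
  moreover have "langle u (\<i> * (\<i> * (\<i> * u))) = pi / 2"
    using langle_uminus_right[of u "\<i> * u"] langle_ii_self[OF u(2)] u(2) by (simp add: algebra_simps)
  ultimately show False using eps_bounds by simp
qed

lemma no_pentagon: assumes "X \<in> copies" "L \<in> copies" "A2 \<in> copies" "A1 \<in> copies" "L' \<in> copies"
  "X \<noteq> L" "L \<noteq> A2" "A2 \<noteq> A1" "A1 \<noteq> L'" "L' \<noteq> X"
  "w1 \<in> cpts X" "w1 \<in> cpts L" "y \<in> cpts L" "y \<in> cpts A2" "p \<in> cpts A2" "p \<in> cpts A1"
  "x \<in> cpts A1" "x \<in> cpts L'" "w2 \<in> cpts L'" "w2 \<in> cpts X"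
  shows False
proof -
  obtain u where u: "dir X w1 u" "u \<noteq> 0" using obtain_dir assms by blast
  obtain u1 where u1: "dir L y u1" using obtain_dir assms by blast
  obtain u2 where u2: "dir A2 p u2" using obtain_dir assms by blast
  obtain u3 where u3: "dir A1 x u3" using obtain_dir assms by blast
  obtain u4 where u4: "dir L' w2 u4" using obtain_dir assms by blast
  have "langle u u \<le> 0" by (simp add: langle_self)
  then have "langle u1 (\<i> * u) \<le> 0 + \<epsilon> + \<delta>"
    by (rule dir_cross_drift[OF assms(1,2,6) u(1) assms(12) u1]) (simp add: u(2))
  then have "langle u2 (\<i> * (\<i> * u)) \<le> 0 + \<epsilon> + \<delta> + \<epsilon> + \<delta>"
    by (rule dir_cross_drift[OF assms(2,3,7) u1 assms(14) u2]) (simp add: u(2))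
  then have "langle u3 (\<i> * (\<i> * (\<i> * u))) \<le> 0 + \<epsilon> + \<delta> + \<epsilon> + \<delta> + \<epsilon> + \<delta>"
    by (rule dir_cross_drift[OF assms(3,4,8) u2 assms(16) u3]) (simp add: u(2))
  then have "langle u4 (\<i> * (\<i> * (\<i> * (\<i> * u)))) \<le> 0 + \<epsilon> + \<delta> + \<epsilon> + \<delta> + \<epsilon> + \<delta> + \<epsilon> + \<delta>"
    by (rule dir_cross_drift[OF assms(4,5,9) u3 assms(18) u4]) (simp add: u(2))
  then have "langle u (\<i> * (\<i> * (\<i> * (\<i> * (\<i> * u))))) \<le> 0 + \<epsilon> + \<delta> + \<epsilon> + \<delta> + \<epsilon> + \<delta> + \<epsilon> + \<delta> + \<epsilon> + \<delta>"
    by (rule dir_cross_drift[OF assms(5,1,10) u4 assms(20) u(1)]) (simp add: u(2))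
  moreover have "langle u (\<i> * (\<i> * (\<i> * (\<i> * (\<i> * u))))) = pi / 2"
    using langle_ii_self[OF u(2)] by (simp add: algebra_simps)
  ultimately show False using eps_bounds by simp
qed

section \<open>Covering vertices by copies\<close>

lemma mpath_through_nb: assumes "y \<in> nb v"
  shows "\<exists>\<gamma> m. mpath \<gamma> \<and> m < length \<gamma> \<and> \<gamma>!m = v \<and> path_nbr \<gamma> m y"
proof -
  obtain \<gamma> i where "mpath \<gamma>" "Suc i < length \<gamma>" "\<gamma>!i = v" "\<gamma>!Suc i = y"
    using mpath_through_edge nbD(4)[OF assms] by blast
  then show ?thesis by (intro exI[of _ \<gamma>] exI[of _ i]) (auto simp: path_nbr_def)
qed

lemma path_nbr_opposite: assumes "spath \<gamma>" "path_nbr \<gamma> m w" "path_nbr \<gamma> m w'" "w \<noteq> w'"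
  shows "opposite (\<gamma>!m) w w'"
proof -
  have c: "(Suc m < length \<gamma> \<and> w = \<gamma>!Suc m \<and> 0 < m \<and> w' = \<gamma>!(m - 1)) \<or> (Suc m < length \<gamma> \<and> w' = \<gamma>!Suc m \<and> 0 < m \<and> w = \<gamma>!(m - 1))"
    using assms(2,3,4) unfolding path_nbr_def by auto
  then show ?thesis
  proof
    assume h: "Suc m < length \<gamma> \<and> w = \<gamma>!Suc m \<and> 0 < m \<and> w' = \<gamma>!(m - 1)"
    then show ?thesis using spath_opposite[OF assms(1), of m] by simp
  next
    assume h: "Suc m < length \<gamma> \<and> w' = \<gamma>!Suc m \<and> 0 < m \<and> w = \<gamma>!(m - 1)"
    then show ?thesis using spath_opposite[OF assms(1), of m] opposite_commute by simp
  qed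
qed

lemma path_nbr_rev: assumes "path_nbr (rev \<gamma>) k y" "k < length \<gamma>"
  shows "path_nbr \<gamma> (length \<gamma> - 1 - k) y"
proof -
  define n where "n = length \<gamma>"
  define m where "m = n - 1 - k"
  have kn: "k < n" using assms(2) n_def by simp
  have "(Suc k < n \<and> y = rev \<gamma>!Suc k) \<or> (0 < k \<and> y = rev \<gamma>!(k - 1))"
    using assms by (simp add: path_nbr_def n_def)
  then have "path_nbr \<gamma> m y"
  proof
    assume h: "Suc k < n \<and> y = rev \<gamma>!Suc k"
    have "rev \<gamma>!Suc k = \<gamma>!(n - Suc (Suc k))" using h by (simp add: rev_nth n_def)
    moreover have "n - Suc (Suc k) = m - 1" "0 < m" "m < n" using h by (auto simp: m_def)
    ultimately have "y = \<gamma>!(m - 1)" "0 < m" "m < length \<gamma>" using h by (auto simp: n_def)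
    then show ?thesis by (simp add: path_nbr_def)
  next
    assume h: "0 < k \<and> y = rev \<gamma>!(k - 1)"
    have "rev \<gamma>!(k - 1) = \<gamma>!(n - Suc (k - 1))" using h kn by (simp add: rev_nth n_def)
    moreover have "n - Suc (k - 1) = Suc m" "Suc m < n" using h kn by (auto simp: m_def)
    ultimately have "y = \<gamma>!Suc m" "Suc m < length \<gamma>" using h by (auto simp: n_def)
    then show ?thesis by (simp add: path_nbr_def)
  qed
  then show ?thesis by (simp add: m_def n_def)
qed

lemma path_nbr_pclass: assumes "mpath \<gamma>1" "mpath \<gamma>2" "pclass \<gamma>1 = pclass \<gamma>2" "m1 < length \<gamma>1" "m2 < length \<gamma>2"
  "\<gamma>1!m1 = v" "\<gamma>2!m2 = v" "path_nbr \<gamma>2 m2 y" shows "path_nbr \<gamma>1 m1 y"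
proof -
  have d: "distinct \<gamma>1" using spath_distinct[OF mpath_spath[OF assms(1)]] .
  have "\<gamma>2 = \<gamma>1 \<or> \<gamma>2 = rev \<gamma>1" using assms(3) pclass_eq_iff by blast
  then show ?thesis
  proof
    assume e: "\<gamma>2 = \<gamma>1"
    then have "m2 = m1" using nth_eq_iff_index_eq[OF d, of m2 m1] assms by simp
    then show ?thesis using assms e by simp
  next
    assume e: "\<gamma>2 = rev \<gamma>1"
    have l: "m2 < length \<gamma>1" using assms(5) e by simp
    have p: "path_nbr \<gamma>1 (length \<gamma>1 - 1 - m2) y"
      using path_nbr_rev[of \<gamma>1 m2 y] assms(8) e l by simp
    have "rev \<gamma>1!m2 = \<gamma>1!(length \<gamma>1 - Suc m2)" using l by (intro rev_nth) simp
    then have "\<gamma>1!(length \<gamma>1 - 1 - m2) = v" using assms(7) e by simp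
    then have "length \<gamma>1 - 1 - m2 = m1"
      using nth_eq_iff_index_eq[OF d, of "length \<gamma>1 - 1 - m2" m1] assms(4,6) l by simp
    then show ?thesis using p by simp
  qed
qed

lemma nb_not_opposite_pair:
  assumes "v \<in> V" "v \<notin> Vsgl"
  obtains y1 y2 where "y1 \<in> nb v" "y2 \<in> nb v" "y1 \<noteq> y2" "\<not> opposite v y1 y2"
proof -
  have c2: "2 \<le> card (nb v)" using assms by (auto simp: Vdeg_def)
  show ?thesis
  proof (cases "card (nb v) = 2")
    case True
    then obtain a b where ab: "nb v = {a, b}" "a \<noteq> b" by (meson card_2_iff)
    have "\<not> opposite v a b"
    proof
      assume "opposite v a b"
      then have "inwin \<epsilon> pi (ang a v b)" using inwin_pi_ang_iff[of \<epsilon> a v b] eps_pos by simp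
      then have "v \<in> V2pi \<epsilon> V E" using True ab assms(1) by (auto simp: V2pi_def Vdeg_def)
      then show False using assms(2) by simp
    qed
    then show ?thesis using that ab by blast
  next
    case False
    obtain y1 where y1: "y1 \<in> nb v" using c2 by (metis card.empty ex_in_conv not_numeral_le_zero)
    have "card {z \<in> nb v. z \<noteq> y1 \<and> \<not> opposite v y1 z} \<noteq> 0"
      using card_nb_split[OF y1] card_opposite_le_1[of v y1] c2 False by linarith
    then obtain y2 where "y2 \<in> {z \<in> nb v. z \<noteq> y1 \<and> \<not> opposite v y1 z}" by (metis card.empty ex_in_conv)
    then show ?thesis using that y1 by blast
  qed
qed

lemma path_copy_through_nb:
  assumes "y \<in> nb v"
  obtains \<gamma> m where "mpath \<gamma>" "(pclass \<gamma>, 0) \<in> copies" "v \<in> cpts (pclass \<gamma>, 0)" "m < length \<gamma>" "\<gamma>!m = v"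
    "path_nbr \<gamma> m y"
  using mpath_through_nb[OF assms] path_in_copies cpts_path by (metis nth_mem)

lemma two_copies_through: assumes "v \<in> V"
  shows "\<exists>A B. A \<in> copies \<and> B \<in> copies \<and> A \<noteq> B \<and> v \<in> cpts A \<and> v \<in> cpts B"
proof (cases "v \<in> Vsgl")
  case sgl: True
  show ?thesis
  proof (cases "v \<in> V0")
    case True
    then show ?thesis using singleton_in_copies[of v] singleton_copy1_in_copies[of v] cpts_singleton
      by (intro exI[of _ "(pclass [v], 0)"] exI[of _ "(pclass [v], 1)"]) auto
  next
    case False
    then have "card (nb v) \<noteq> 0" using sgl card_nb_Vdeg V2pi_Vdeg by fastforce
    then obtain y where "y \<in> nb v" by (metis card.empty ex_in_conv)
    then obtain \<gamma> where g: "mpath \<gamma>" "(pclass \<gamma>, 0) \<in> copies" "v \<in> cpts (pclass \<gamma>, 0)"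
      using path_copy_through_nb by metis
    have "(pclass [v], 0) \<noteq> (pclass \<gamma>, 0::nat)" using pclass_neq_singleton[OF g(1), of v] by auto
    then show ?thesis using g singleton_in_copies[OF sgl] cpts_singleton by blast
  qed
next
  case False
  obtain y1 y2 where y: "y1 \<in> nb v" "y2 \<in> nb v" "y1 \<noteq> y2" "\<not> opposite v y1 y2"
    using nb_not_opposite_pair[OF assms False] by blast
  obtain \<gamma>1 m1 where g1: "mpath \<gamma>1" "(pclass \<gamma>1, 0) \<in> copies" "v \<in> cpts (pclass \<gamma>1, 0)" "m1 < length \<gamma>1"
    "\<gamma>1!m1 = v" "path_nbr \<gamma>1 m1 y1"
    using path_copy_through_nb[OF y(1)] by blast
  obtain \<gamma>2 m2 where g2: "mpath \<gamma>2" "(pclass \<gamma>2, 0) \<in> copies" "v \<in> cpts (pclass \<gamma>2, 0)" "m2 < length \<gamma>2"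
    "\<gamma>2!m2 = v" "path_nbr \<gamma>2 m2 y2"
    using path_copy_through_nb[OF y(2)] by blast
  have "pclass \<gamma>1 \<noteq> pclass \<gamma>2"
  proof
    assume e: "pclass \<gamma>1 = pclass \<gamma>2"
    have "path_nbr \<gamma>1 m1 y2" using path_nbr_pclass[OF g1(1) g2(1) e g1(4) g2(4) g1(5) g2(5) g2(6)] .
    then have "opposite (\<gamma>1!m1) y1 y2" using path_nbr_opposite[OF mpath_spath[OF g1(1)] g1(6)] y(3) by simp
    then show False using y(4) g1(5) by simp
  qed
  then show ?thesis using g1 g2 by blast
qed

lemma langle_chord_dir: assumes "mpath \<gamma>" "dir A v u" "fst A = pclass \<gamma>" "v' \<in> set \<gamma>" "v' \<noteq> v"
  shows "langle (v' - v) u < \<delta>"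
proof -
  have s: "spath \<gamma>" using mpath_spath[OF assms(1)] .
  obtain j where j: "Suc j < length \<gamma>" "u = edge_vec \<gamma> j \<or> u = - edge_vec \<gamma> j"
    using dir_path[OF assms(2,1,3)] by blast
  have v: "v \<in> set \<gamma>" using dir_cpts[OF assms(2)] assms(3) by (simp add: cpts_def spoints_pclass)
  obtain p where p: "p < length \<gamma>" "v = \<gamma>!p" using obtain_index[OF v] by blast
  obtain q where q: "q < length \<gamma>" "v' = \<gamma>!q" using obtain_index[OF assms(4)] by blast
  have ne: "edge_vec \<gamma> j \<noteq> 0" using edge_vec_nonzero[OF s j(1)] .
  have "p \<noteq> q" using p q assms(5) by auto
  then consider "p < q" | "q < p" by linarith
  then show ?thesis
  proof cases
    case 1
    have c: "\<gamma>!q - \<gamma>!p \<noteq> 0 \<and> vangle (\<gamma>!q - \<gamma>!p) (edge_vec \<gamma> j) \<le> theta_ex \<gamma>"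
      using vangle_chord_le_theta_ex[OF s 1 q(1) j(1)] .
    have "langle (v' - v) u = langle (\<gamma>!q - \<gamma>!p) (edge_vec \<gamma> j)"
      using langle_uminus_cases[of "\<gamma>!q - \<gamma>!p" "edge_vec \<gamma> j" "v' - v" u] c ne j p q by simp
    also have "\<dots> \<le> theta_ex \<gamma>" using c langle_le_vangle order_trans by blast
    finally show ?thesis using theta_ex_less[OF s] by simp
  next
    case 2
    have c: "\<gamma>!p - \<gamma>!q \<noteq> 0 \<and> vangle (\<gamma>!p - \<gamma>!q) (edge_vec \<gamma> j) \<le> theta_ex \<gamma>"
      using vangle_chord_le_theta_ex[OF s 2 p(1) j(1)] .
    have "v' - v = - (\<gamma>!p - \<gamma>!q)" using p q by simp
    then have "langle (v' - v) u = langle (\<gamma>!p - \<gamma>!q) (edge_vec \<gamma> j)"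
      using langle_uminus_cases[of "\<gamma>!p - \<gamma>!q" "edge_vec \<gamma> j" "v' - v" u] c ne j by simp
    also have "\<dots> \<le> theta_ex \<gamma>" using c langle_le_vangle order_trans by blast
    finally show ?thesis using theta_ex_less[OF s] by simp
  qed
qed

lemma copy_through_two_points:
  assumes "A \<in> copies" "v \<noteq> v'" "v \<in> cpts A" "v' \<in> cpts A"
  obtains \<gamma> where "mpath \<gamma>" "A = (pclass \<gamma>, 0)"
  using assms(1)
proof (cases rule: copies_cases)
  case (sgl x) then show ?thesis using assms(2-4) cpts_singleton by simp
next
  case (sgl1 x) then show ?thesis using assms(2-4) cpts_singleton by simp
qed

text \<open>Two copies through \<open>v\<close> and \<open>v'\<close> would both have directions at \<open>v\<close> within \<open>\<delta>\<close> of the line through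
  \<open>v\<close> and \<open>v'\<close>, contradicting \<open>dir_perp\<close>.\<close>

lemma copies_share_one_point:
  assumes "A \<in> copies" "B \<in> copies" "A \<noteq> B" "v \<noteq> v'" "v \<in> cpts A" "v' \<in> cpts A" "v \<in> cpts B" "v' \<in> cpts B"
  shows False
proof -
  obtain \<gamma> where ga: "mpath \<gamma>" "A = (pclass \<gamma>, 0)"
    using copy_through_two_points[OF assms(1,4,5,6)] .
  obtain \<gamma>' where gb: "mpath \<gamma>'" "B = (pclass \<gamma>', 0)"
    using copy_through_two_points[OF assms(2,4,7,8)] .
  obtain uA where uA: "dir A v uA" "uA \<noteq> 0" using obtain_dir assms by blast
  obtain uB where uB: "dir B v uB" "uB \<noteq> 0" using obtain_dir assms by blast
  have "langle (v' - v) uA < \<delta>" using langle_chord_dir[OF ga(1) uA(1)] ga assms cpts_path by simp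
  moreover have "langle (v' - v) uB < \<delta>" using langle_chord_dir[OF gb(1) uB(1)] gb assms cpts_path by simp
  moreover have "langle uA uB \<le> langle uA (v' - v) + langle (v' - v) uB"
    using langle_triangle uA(2) uB(2) assms(4) by simp
  ultimately have "langle uA uB < 2 * \<delta>" using langle_commute[of uA "v' - v"] by simp
  then show False using dir_perp[OF assms(1,2,3) uA(1) uB(1)] eps_bounds by simp
qed

section \<open>Vertical copies\<close>

definition vertical :: "complex list set \<times> nat \<Rightarrow> bool" where
  "vertical A \<longleftrightarrow> (\<forall>v u. dir A v u \<longrightarrow> langle u \<i> < \<delta> + 2 * \<epsilon>)"

lemma no_vertical_chain: assumes "A \<in> copies" "B \<in> copies" "C \<in> copies" "D \<in> copies" "A \<noteq> B" "B \<noteq> C" "C \<noteq> D"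
  "a \<in> cpts A" "a \<in> cpts B" "p \<in> cpts B" "p \<in> cpts C" "b \<in> cpts C" "b \<in> cpts D" "vertical A" "vertical D"
  shows False
proof -
  obtain u where u: "dir A a u" using obtain_dir assms by blast
  obtain uB where uB: "dir B p uB" using obtain_dir assms by blast
  obtain uC where uC: "dir C b uC" using obtain_dir assms by blast
  obtain uD where uD: "dir D b uD" "uD \<noteq> 0" using obtain_dir assms by blast
  have "langle u \<i> \<le> \<delta> + 2 * \<epsilon>" using assms(14) u unfolding vertical_def by force
  then have "langle uB (\<i> * \<i>) \<le> \<delta> + 2 * \<epsilon> + \<epsilon> + \<delta>"
    by (rule dir_cross_drift[OF assms(1,2,5) u assms(9) uB]) simp
  then have "langle uC (\<i> * (\<i> * \<i>)) \<le> \<delta> + 2 * \<epsilon> + \<epsilon> + \<delta> + \<epsilon> + \<delta>"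
    by (rule dir_cross_drift[OF assms(2,3,6) uB assms(11) uC]) simp
  then have "langle uD (\<i> * (\<i> * (\<i> * \<i>))) \<le> \<delta> + 2 * \<epsilon> + \<epsilon> + \<delta> + \<epsilon> + \<delta> + \<epsilon>"
    by (rule dir_cross[OF assms(3,4,7) uC uD(1)]) simp
  moreover have "langle uD \<i> < \<delta> + 2 * \<epsilon>" using assms(15) uD(1) unfolding vertical_def by force
  moreover have "langle 1 \<i> \<le> langle 1 uD + langle uD \<i>" using langle_triangle uD(2) by simp
  ultimately have "pi / 2 < 4 * \<delta> + 7 * \<epsilon>" using langle_commute[of 1 uD] langle_1_ii by simp
  then show False using eps_bounds by simp
qed

lemma vertical_disjoint:
  assumes "A \<in> copies" "B \<in> copies" "A \<noteq> B" "w \<in> cpts A" "w \<in> cpts B" "vertical A" "vertical B"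
  shows False
proof -
  obtain uA where uA: "dir A w uA" using obtain_dir assms by blast
  obtain uB where uB: "dir B w uB" "uB \<noteq> 0" using obtain_dir assms by blast
  have "langle uA \<i> \<le> \<delta> + 2 * \<epsilon>" using assms(6) uA unfolding vertical_def by force
  then have "langle uB (\<i> * \<i>) \<le> \<delta> + 2 * \<epsilon> + \<epsilon>" by (rule dir_cross[OF assms(1,2,3) uA uB(1)]) simp
  moreover have "langle uB \<i> < \<delta> + 2 * \<epsilon>" using assms(7) uB(1) unfolding vertical_def by force
  moreover have "langle (-1) \<i> \<le> langle (-1) uB + langle uB \<i>" using langle_triangle uB(2) by simp
  ultimately have "pi / 2 < 2 * \<delta> + 5 * \<epsilon>"
    using langle_commute[of "-1" uB] langle_uminus_left[of 1 "\<i>"] langle_1_ii by simp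
  then show False using eps_bounds by simp
qed

text \<open>The vertical copy of a vertex \<open>x\<close> bonded to the substrate continues that bond upwards: it is a
  maximal straight path leaving \<open>x\<close> in the direction \<open>x - foot x\<close>, or the stratum \<open>(x)\<close> if no bond of
  \<open>x\<close> points that way.\<close>

definition foot :: "complex \<Rightarrow> complex" where "foot x = (SOME z. z \<in> nbrL r0 x)"
definition up :: "complex \<Rightarrow> complex \<Rightarrow> bool" where "up x y \<longleftrightarrow> y \<in> nb x \<and> vangle (y - x) (x - foot x) \<le> \<epsilon>"
definition Vsub :: "complex set" where "Vsub = {x \<in> V. nbrL r0 x \<noteq> {}}"
definition vertical_copy :: "complex \<Rightarrow> complex list set \<times> nat" where
  "vertical_copy x = (if \<exists>y. up x y then (pclass (SOME \<gamma>. mpath \<gamma> \<and> \<gamma>!0 = x \<and> up x (\<gamma>!1)), 0) else (pclass [x], 0))"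

lemma foot: assumes "x \<in> Vsub" shows "foot x \<in> nbrL r0 x" "x \<in> V" "vangle (x - foot x) \<i> \<le> \<epsilon>" "x \<noteq> foot x"
proof -
  show z: "foot x \<in> nbrL r0 x"
    using assms unfolding Vsub_def foot_def by (metis (mono_tags, lifting) ex_in_conv mem_Collect_eq someI)
  show xV: "x \<in> V" using assms by (simp add: Vsub_def)
  show "vangle (x - foot x) \<i> \<le> \<epsilon>" using vangle_substrate_ii[OF xV z] .
  show "x \<noteq> foot x" using V_notin_substrate[OF xV] nbrL_substrate[OF z] by auto
qed

lemma up_mpath: assumes "x \<in> Vsub" "up x y" shows "\<exists>\<gamma>. mpath \<gamma> \<and> \<gamma>!0 = x \<and> up x (\<gamma>!1)"
proof -
  have y: "y \<in> nb x" "vangle (y - x) (x - foot x) \<le> \<epsilon>" using assms(2) by (auto simp: up_def)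
  obtain \<gamma> i where g: "mpath \<gamma>" "Suc i < length \<gamma>" "\<gamma>!i = x" "\<gamma>!Suc i = y"
    using mpath_through_edge nbD(4)[OF y(1)] by blast
  have s: "spath \<gamma>" using mpath_spath[OF g(1)] .
  have "i = 0"
  proof (rule ccontr)
    assume "i \<noteq> 0"
    then have i0: "0 < i" by simp
    let ?w = "\<gamma>!(i - 1)"
    have o: "opposite x y ?w" using spath_opposite[OF s i0 g(2)] g by simp
    have wn: "?w \<in> nb x" using spath_nb_prev[OF s, of "i - 1"] i0 g by simp
    have z: "foot x \<in> nbrL r0 x" "x \<noteq> foot x" using foot[OF assms(1)] by auto
    have nz: "?w - x \<noteq> 0" "y - x \<noteq> 0" "foot x - x \<noteq> 0"
      using nbD(3)[OF wn] nbD(3)[OF y(1)] z(2) by auto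
    have "vangle (?w - x) (foot x - x) \<le> vangle (?w - x) (- (y - x)) + vangle (- (y - x)) (foot x - x)"
      using vangle_triangle nz by simp
    also have "vangle (?w - x) (- (y - x)) = pi - vangle (?w - x) (y - x)"
      using vangle_uminus_right[of "?w - x" "y - x"] nz by simp
    also have "vangle (- (y - x)) (foot x - x) = vangle (y - x) (x - foot x)"
      using vangle_uminus_both[of "y - x" "x - foot x"] nz by simp
    finally have "vangle (?w - x) (foot x - x) \<le> 2 * \<epsilon>"
      using o y(2) vangle_commute[of "y - x" "?w - x"] by simp
    then show False using regular_angle_nbrL[OF wn z(1)] eps_bounds by (auto simp: regular_angle_def)
  qed
  then show ?thesis using g assms(2) by (intro exI[of _ \<gamma>]) auto
qed

lemma vertical_copy_path: assumes "x \<in> Vsub" "\<exists>y. up x y"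
  obtains \<gamma> where "mpath \<gamma>" "\<gamma>!0 = x" "up x (\<gamma>!1)" "vertical_copy x = (pclass \<gamma>, 0)"
proof -
  let ?P = "\<lambda>\<gamma>. mpath \<gamma> \<and> \<gamma>!0 = x \<and> up x (\<gamma>!1)"
  have "\<exists>\<gamma>. ?P \<gamma>" using up_mpath assms by blast
  then have "?P (SOME \<gamma>. ?P \<gamma>)" by (rule someI_ex)
  then show ?thesis using that assms(2) unfolding vertical_copy_def by auto
qed

lemma vangle_edge_vec_up: assumes "x \<in> Vsub" "mpath \<gamma>" "\<gamma>!0 = x" "up x (\<gamma>!1)" "Suc j < length \<gamma>"
  shows "vangle (edge_vec \<gamma> j) \<i> < \<delta> + 2 * \<epsilon>"
proof -
  have s: "spath \<gamma>" using mpath_spath[OF assms(2)] .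
  have n: "Suc 0 < length \<gamma>" using spath_length[OF s] by simp
  have e0: "edge_vec \<gamma> 0 = \<gamma>!1 - x" using assms(3) by (simp add: edge_vec_def)
  have nz: "edge_vec \<gamma> j \<noteq> 0" "edge_vec \<gamma> 0 \<noteq> 0" "x - foot x \<noteq> 0"
    using edge_vec_nonzero[OF s] assms(5) n foot[OF assms(1)] by auto
  have "vangle (edge_vec \<gamma> j) \<i> \<le> vangle (edge_vec \<gamma> j) (edge_vec \<gamma> 0) + vangle (edge_vec \<gamma> 0) \<i>"
    using vangle_triangle nz by simp
  also have "vangle (edge_vec \<gamma> 0) \<i> \<le> vangle (edge_vec \<gamma> 0) (x - foot x) + vangle (x - foot x) \<i>"
    using vangle_triangle nz by simp
  finally have "vangle (edge_vec \<gamma> j) \<i> \<le> vangle (edge_vec \<gamma> j) (edge_vec \<gamma> 0) + (vangle (edge_vec \<gamma> 0) (x - foot x) + vangle (x - foot x) \<i>)" by simp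
  moreover have "vangle (edge_vec \<gamma> j) (edge_vec \<gamma> 0) < \<delta>"
    using vangle_edge_vec_less[OF s assms(5) n] .
  moreover have "vangle (edge_vec \<gamma> 0) (x - foot x) \<le> \<epsilon>" using assms(4) e0 by (simp add: up_def)
  moreover have "vangle (x - foot x) \<i> \<le> \<epsilon>" using foot[OF assms(1)] by simp
  ultimately show ?thesis by simp
qed

lemma langle_not_up: assumes "x \<in> Vsub" "y \<in> nb x" "\<not> up x y" shows "langle (y - x) (\<i> * (foot x - x)) \<le> \<epsilon>"
proof -
  have z: "foot x \<in> nbrL r0 x" "x \<noteq> foot x" using foot[OF assms(1)] by auto
  have nz: "y - x \<noteq> 0" "foot x - x \<noteq> 0" using nbD(3)[OF assms(2)] z by auto
  have a: "vangle (y - x) (x - foot x) > \<epsilon>" using assms by (auto simp: up_def)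
  have "vangle (y - x) (foot x - x) = pi - vangle (y - x) (x - foot x)"
    using vangle_uminus_right[of "y - x" "x - foot x"] nz by simp
  then have "\<not> (pi - \<epsilon> \<le> vangle (y - x) (foot x - x))" using a by simp
  then have "\<bar>vangle (y - x) (foot x - x) - pi / 2\<bar> \<le> \<epsilon>"
    using regular_angle_nbrL[OF assms(2) z(1)] by (simp add: regular_angle_def)
  then have "pi / 2 - \<epsilon> \<le> langle (y - x) (foot x - x)" by (rule langle_ge_of_perp)
  then show ?thesis using langle_mult_ii_right[OF nz] by simp
qed

lemma not_up_Vsgl: assumes "x \<in> Vsub" "\<not> (\<exists>y. up x y)" shows "x \<in> Vsgl"
proof -
  have xV: "x \<in> V" using foot[OF assms(1)] by simp
  have w0: "\<i> * (foot x - x) \<noteq> 0" using foot[OF assms(1)] by auto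
  have pp: "\<And>a b. a \<in> nb x \<Longrightarrow> b \<in> nb x \<Longrightarrow> a \<noteq> b \<Longrightarrow> opposite x a b"
    using opposite_of_common_line langle_not_up assms w0 by blast
  have c3: "card (nb x) \<le> 2"
  proof (rule ccontr)
    assume "\<not> card (nb x) \<le> 2"
    then have "2 < card (nb x)" by simp
    then obtain T where T: "T \<subseteq> nb x" "card T = 3" using obtain_subset_with_card_n[of 3 "nb x"] by auto
    then obtain a b c where abc0: "T = {a, b, c}" "a \<noteq> b" "b \<noteq> c" "a \<noteq> c" using card_3_iff by metis
    then have abc: "a \<in> nb x" "b \<in> nb x" "c \<in> nb x" "a \<noteq> b" "a \<noteq> c" "b \<noteq> c"
      using T by auto
    show False using opposite_unique[OF abc(2,3,6)] pp abc by blast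
  qed
  consider "card (nb x) = 0" | "card (nb x) = 1" | "card (nb x) = 2" using c3 by linarith
  then show ?thesis
  proof cases
    case 1 then show ?thesis using xV by (simp add: Vdeg_def)
  next
    case 2 then show ?thesis using xV by (simp add: Vdeg_def)
  next
    case 3
    then obtain a b where ab: "nb x = {a, b}" "a \<noteq> b" by (meson card_2_iff)
    have "opposite x a b" using pp ab by auto
    then have "inwin \<epsilon> pi (ang a x b)" using inwin_pi_ang_iff[of \<epsilon> a x b] eps_pos by simp
    then have "x \<in> V2pi \<epsilon> V E" using 3 ab xV by (auto simp: V2pi_def Vdeg_def)
    then show ?thesis by simp
  qed
qed

lemma vertical_copy_in_copies: assumes "x \<in> Vsub"
  shows "vertical_copy x \<in> copies" "x \<in> cpts (vertical_copy x)"
proof -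
  have "vertical_copy x \<in> copies \<and> x \<in> cpts (vertical_copy x)"
  proof (cases "\<exists>y. up x y")
    case True
    then obtain \<gamma> where g: "mpath \<gamma>" "\<gamma>!0 = x" "vertical_copy x = (pclass \<gamma>, 0)"
      using vertical_copy_path[OF assms] by blast
    have "x \<in> set \<gamma>"
      using g spath_length[OF mpath_spath[OF g(1)]]
        by (metis length_greater_0_conv list.size(3) not_numeral_le_zero nth_mem)
    then show ?thesis using g path_in_copies cpts_path by simp
  next
    case False
    then have "vertical_copy x = (pclass [x], 0)" by (simp add: vertical_copy_def)
    then show ?thesis using singleton_in_copies[OF not_up_Vsgl[OF assms False]] cpts_singleton by simp
  qed
  then show "vertical_copy x \<in> copies" "x \<in> cpts (vertical_copy x)" by auto
qed

lemma langle_bond_not_up: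
  assumes "x \<in> Vsub" "\<not> (\<exists>y. up x y)" "y \<in> nb x"
  shows "langle (\<i> * (y - x)) \<i> < \<delta> + 2 * \<epsilon>"
proof -
  have z: "x - foot x \<noteq> 0" "vangle (x - foot x) \<i> \<le> \<epsilon>" using foot[OF assms(1)] by auto
  have nz: "y - x \<noteq> 0" "foot x - x \<noteq> 0" using nbD(3)[OF assms(3)] z by auto
  have p1: "langle (y - x) (\<i> * (foot x - x)) \<le> \<epsilon>" using langle_not_up[OF assms(1,3)] assms(2) by blast
  have "langle (foot x - x) \<i> = langle (x - foot x) \<i>" using langle_uminus_left[of "x - foot x" "\<i>"] z by simp
  also have "\<dots> \<le> \<epsilon>" using langle_le_vangle[of "x - foot x" "\<i>"] z by simp
  finally have p2: "langle (foot x - x) \<i> \<le> \<epsilon>" .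
  have "langle (\<i> * (y - x)) \<i> = langle (y - x) 1" using langle_mult_ii[of "y - x" 1] by simp
  also have "\<dots> \<le> langle (y - x) (\<i> * (foot x - x)) + langle (\<i> * (foot x - x)) 1"
    using langle_triangle nz by simp
  also have "langle (\<i> * (foot x - x)) 1 = langle (foot x - x) (- \<i>)"
    using langle_mult_ii[of "foot x - x" "- \<i>"] by simp
  also have "\<dots> = langle (foot x - x) \<i>" using langle_uminus_right nz by simp
  finally show ?thesis using p1 p2 eps_bounds by simp
qed

lemma vertical_vertical_copy: assumes "x \<in> Vsub" shows "vertical (vertical_copy x)"
  unfolding vertical_def
proof (intro allI impI)
  fix v u assume d: "dir (vertical_copy x) v u"
  show "langle u \<i> < \<delta> + 2 * \<epsilon>"
  proof (cases "\<exists>y. up x y")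
    case True
    then obtain \<gamma> where g: "mpath \<gamma>" "\<gamma>!0 = x" "up x (\<gamma>!1)" "vertical_copy x = (pclass \<gamma>, 0)"
      using vertical_copy_path[OF assms] by blast
    obtain j where j: "Suc j < length \<gamma>" "u = edge_vec \<gamma> j \<or> u = - edge_vec \<gamma> j"
      using dir_path[OF d g(1)] g(4) by auto
    have nz: "edge_vec \<gamma> j \<noteq> 0" using edge_vec_nonzero[OF mpath_spath[OF g(1)] j(1)] .
    have "langle u \<i> = langle (edge_vec \<gamma> j) \<i>"
      using langle_uminus_cases[of "edge_vec \<gamma> j" "\<i>" u "\<i>"] nz j(2) by simp
    also have "\<dots> \<le> vangle (edge_vec \<gamma> j) \<i>" by (rule langle_le_vangle)
    also have "\<dots> < \<delta> + 2 * \<epsilon>" using vangle_edge_vec_up[OF assms g(1,2,3) j(1)] .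
    finally show ?thesis .
  next
    case False
    then have "vertical_copy x = (pclass [x], 0)" by (simp add: vertical_copy_def)
    then have "u = \<i> \<or> (\<exists>y\<in>nb x. u = \<i> * (y - x))" using dir_singleton[OF d] by auto
    then show ?thesis using langle_self eps_bounds langle_bond_not_up[OF assms False] by auto
  qed
qed

text \<open>A maximal straight path cannot leave upwards from both of its ends, as it bends by less than \<open>\<delta>\<close>.\<close>

lemma not_up_rev:
  assumes "x \<in> Vsub" "mpath \<gamma>" "\<gamma>!0 = x" "up x (\<gamma>!1)" "x' \<in> Vsub" "rev \<gamma>!0 = x'"
  shows "\<not> up x' (rev \<gamma>!1)"
proof
  assume up': "up x' (rev \<gamma>!1)"
  have s: "spath \<gamma>" using mpath_spath[OF assms(2)] .
  let ?j = "length \<gamma> - 2"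
  have n: "2 \<le> length \<gamma>" using spath_length[OF s] .
  then have jl: "Suc ?j < length \<gamma>" by simp
  have rr: "rev \<gamma>!0 = \<gamma>!Suc ?j" "rev \<gamma>!1 = \<gamma>!?j" using edge_vec_rev[of 0 \<gamma>] n by auto
  have a1: "vangle (edge_vec \<gamma> ?j) \<i> < \<delta> + 2 * \<epsilon>" using vangle_edge_vec_up[OF assms(1-4) jl] .
  have up: "vangle (\<gamma>!?j - x') (x' - foot x') \<le> \<epsilon>" using up' assms(6) rr by (simp add: up_def)
  have z: "x' - foot x' \<noteq> 0" "vangle (x' - foot x') \<i> \<le> \<epsilon>" using foot[OF assms(5)] by auto
  have evj: "\<gamma>!?j - x' = - edge_vec \<gamma> ?j" using assms(6) rr by (simp add: edge_vec_def)
  have nz: "edge_vec \<gamma> ?j \<noteq> 0" using edge_vec_nonzero[OF s jl] .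
  have "vangle (- edge_vec \<gamma> ?j) \<i> \<le> vangle (- edge_vec \<gamma> ?j) (x' - foot x') + vangle (x' - foot x') \<i>"
    using vangle_triangle nz z by simp
  then have "vangle (- edge_vec \<gamma> ?j) \<i> \<le> 2 * \<epsilon>" using up evj z by simp
  moreover have "vangle (- edge_vec \<gamma> ?j) \<i> = pi - vangle (edge_vec \<gamma> ?j) \<i>"
    using vangle_uminus_left nz by simp
  ultimately show False using a1 eps_bounds by simp
qed

lemma vertical_copy_inj: assumes "x \<in> Vsub" "x' \<in> Vsub" "vertical_copy x = vertical_copy x'" shows "x = x'"
proof (cases "\<exists>y. up x y")
  case True
  obtain \<gamma> where g: "mpath \<gamma>" "\<gamma>!0 = x" "up x (\<gamma>!1)" "vertical_copy x = (pclass \<gamma>, 0)"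
    using vertical_copy_path[OF assms(1) True] by blast
  show ?thesis
  proof (cases "\<exists>y. up x' y")
    case True
    obtain \<gamma>' where g': "mpath \<gamma>'" "\<gamma>'!0 = x'" "up x' (\<gamma>'!1)" "vertical_copy x' = (pclass \<gamma>', 0)"
      using vertical_copy_path[OF assms(2) True] by blast
    have "pclass \<gamma> = pclass \<gamma>'" using g(4) g'(4) assms(3) by simp
    then have "\<gamma>' = \<gamma> \<or> \<gamma>' = rev \<gamma>" using pclass_eq_iff[of \<gamma> \<gamma>'] by simp
    then show ?thesis using g g' not_up_rev[OF assms(1) g(1-3) assms(2)] by auto
  next
    case False
    then have "vertical_copy x' = (pclass [x'], 0)" by (simp add: vertical_copy_def)
    then show ?thesis using g(4) assms(3) pclass_neq_singleton[OF g(1), of x'] by simp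
  qed
next
  case False
  then have vx: "vertical_copy x = (pclass [x], 0)" by (simp add: vertical_copy_def)
  show ?thesis
  proof (cases "\<exists>y. up x' y")
    case True
    obtain \<gamma>' where "mpath \<gamma>'" "vertical_copy x' = (pclass \<gamma>', 0)"
      using vertical_copy_path[OF assms(2) True] by blast
    then show ?thesis using vx assms(3) pclass_neq_singleton[of \<gamma>' x] by simp
  next
    case False
    then have "vertical_copy x' = (pclass [x'], 0)" by (simp add: vertical_copy_def)
    then show ?thesis using vx assms(3) pclass_singleton_eq_iff by simp
  qed
qed

abbreviation "vcopies \<equiv> vertical_copy ` Vsub"

lemma vertical_vcopies: "B \<in> vcopies \<Longrightarrow> vertical B"
  using vertical_vertical_copy by blast

section \<open>Counting free valences\<close>

lemma mpath_rev_neq: assumes "mpath \<gamma>" shows "\<gamma> \<noteq> rev \<gamma>"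
proof
  assume e: "\<gamma> = rev \<gamma>"
  have s: "spath \<gamma>" using mpath_spath[OF assms] .
  have n: "2 \<le> length \<gamma>" using spath_length[OF s] .
  have "rev \<gamma>!0 = \<gamma>!(length \<gamma> - 1)" using n by (subst rev_nth) auto
  then have "\<gamma>!0 = \<gamma>!(length \<gamma> - 1)" using e by simp
  moreover have "0 \<noteq> length \<gamma> - 1" using n by simp
  moreover have "\<gamma> \<noteq> []" using n by (cases \<gamma>) auto
  ultimately show False using nth_eq_iff_index_eq[OF spath_distinct[OF s], of 0 "length \<gamma> - 1"] n by simp
qed

lemma card_Mx: "card Mx = 2 * card SG"
proof -
  have U: "\<Union> SG = Mx"
  proof
    show "\<Union> SG \<subseteq> Mx" using mpath_rev by (auto simp: S_Gamma_def pclass_def)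
    show "Mx \<subseteq> \<Union> SG" by (auto simp: S_Gamma_def pclass_def)
  qed
  have pw: "pairwise disjnt SG"
    unfolding pairwise_def disjnt_def
  proof (intro ballI impI)
    fix c1 c2 assume h: "c1 \<in> SG" "c2 \<in> SG" "c1 \<noteq> c2"
    show "c1 \<inter> c2 = {}"
    proof (rule ccontr)
      assume "c1 \<inter> c2 \<noteq> {}"
      then obtain \<gamma> where g: "\<gamma> \<in> c1" "\<gamma> \<in> c2" by blast
      obtain \<gamma>1 where g1: "c1 = pclass \<gamma>1" using h SG_iff by blast
      obtain \<gamma>2 where g2: "c2 = pclass \<gamma>2" using h SG_iff by blast
      have "pclass \<gamma> = c1" using g(1) g1 by (auto simp: pclass_def)
      moreover have "pclass \<gamma> = c2" using g(2) g2 by (auto simp: pclass_def)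
      ultimately show False using h(3) by simp
    qed
  qed
  have c2: "\<And>c. c \<in> SG \<Longrightarrow> card c = 2"
  proof -
    fix c assume "c \<in> SG"
    then obtain \<gamma> where "mpath \<gamma>" "c = pclass \<gamma>" using SG_iff by blast
    then show "card c = 2" using mpath_rev_neq by (simp add: pclass_def)
  qed
  have "card (\<Union> SG) = sum card SG" by (rule card_Union_disjoint[OF pw]) (auto simp: S_Gamma_def pclass_def)
  also have "\<dots> = 2 * card SG" using c2 by simp
  finally show ?thesis using U by simp
qed

lemma card_Mx_le: "card Mx \<le> (\<Sum>x\<in>V. card (starts x))"
proof -
  let ?f = "\<lambda>\<gamma>. (\<gamma>!0, \<gamma>!1)"
  have inj: "inj_on ?f Mx"
  proof (rule inj_onI)
    fix \<gamma> \<gamma>' assume h: "\<gamma> \<in> Mx" "\<gamma>' \<in> Mx" "?f \<gamma> = ?f \<gamma>'"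
    have "Suc 0 < length \<gamma>" "Suc 0 < length \<gamma>'" using h spath_length mpath_spath by force+
    then show "\<gamma> = \<gamma>'" using mpath_determined_by_edge[of \<gamma> \<gamma>' 0 0] h by simp
  qed
  have sub: "?f ` Mx \<subseteq> Sigma V starts"
  proof
    fix p assume "p \<in> ?f ` Mx"
    then obtain \<gamma> where g: "mpath \<gamma>" "p = ?f \<gamma>" by blast
    have s: "spath \<gamma>" using mpath_spath[OF g(1)] .
    have n: "Suc 0 < length \<gamma>" using spath_length[OF s] by simp
    have "\<gamma>!0 \<in> V" using spath_set[OF s] n by (meson nth_mem order_less_trans subsetD zero_less_Suc)
    moreover have "\<gamma>!1 \<in> nb (\<gamma>!0)" using spath_nb_next[OF s n] by simp
    moreover have "\<not> (\<exists>z \<in> nb (\<gamma>!0). opposite (\<gamma>!0) (\<gamma>!1) z)"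
      using mpath_no_extend_hd[OF g(1)] by blast
    ultimately show "p \<in> Sigma V starts" using g by (simp add: starts_def)
  qed
  have fin: "finite (Sigma V starts)" using finite_V finite_nb by (auto simp: starts_def)
  have "card Mx = card (?f ` Mx)" using card_image[OF inj] by simp
  also have "\<dots> \<le> card (Sigma V starts)" using card_mono[OF fin sub] .
  also have "\<dots> = (\<Sum>x\<in>V. card (starts x))" using finite_V finite_nb by (auto simp: starts_def)
  finally show ?thesis .
qed

lemma sum_indicator_card: assumes "finite W" "A \<subseteq> W" shows "(\<Sum>x\<in>W. (if x \<in> A then 1 else 0::nat)) = card A"
proof -
  have e: "{x \<in> W. x \<in> A} = A" using assms(2) by blast
  have "(\<Sum>x\<in>{x \<in> W. x \<in> A}. (1::nat)) = (\<Sum>x\<in>W. (if x \<in> A then 1 else 0::nat))"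
    by (rule sum.inter_filter[OF assms(1)])
  then show ?thesis using e by simp
qed

lemma sum_singletons: "(\<Sum>x\<in>V. singletons x) = 2 * card V0 + card V12"
proof -
  have sub: "V0 \<subseteq> V" "V12 \<subseteq> V" by (auto simp: Vdeg_def V2pi_def)
  have "\<And>x. singletons x = 2 * (if x \<in> V0 then 1 else 0) + (if x \<in> V12 then 1 else 0)"
    using V0_notin_V12 by (auto simp: singletons_def)
  then have "(\<Sum>x\<in>V. singletons x)
      = 2 * (\<Sum>x\<in>V. if x \<in> V0 then 1 else 0) + (\<Sum>x\<in>V. if x \<in> V12 then 1 else 0)"
    by (simp add: sum.distrib sum_distrib_left)
  then show ?thesis using sum_indicator_card[OF finite_V sub(1)] sum_indicator_card[OF finite_V sub(2)]
    by simp
qed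

lemma card_copies_le_valence: "2 * real (card copies) \<le> (\<Sum>x\<in>V. 4 - real (card (nb x)))"
proof -
  have pv: "\<And>x. x \<in> V \<Longrightarrow> real (card (starts x)) + 2 * real (singletons x) \<le> 4 - real (card (nb x))"
    using vertex_budget
      by (metis (no_types, lifting) add.commute add_le_imp_le_diff of_nat_add of_nat_le_iff of_nat_mult of_nat_numeral)
  have "2 * real (card copies) = real (card Mx) + 2 * real (\<Sum>x\<in>V. singletons x)"
    using card_mcopies[of S] size_strata card_Mx sum_singletons by simp
  also have "\<dots> \<le> real (\<Sum>x\<in>V. card (starts x)) + 2 * real (\<Sum>x\<in>V. singletons x)"
    using card_Mx_le by (metis add_le_cancel_right of_nat_le_iff)
  also have "\<dots> = (\<Sum>x\<in>V. real (card (starts x)) + 2 * real (singletons x))"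
    by (simp add: sum.distrib sum_distrib_left)
  also have "\<dots> \<le> (\<Sum>x\<in>V. 4 - real (card (nb x)))"
    using pv by (intro sum_mono) auto
  finally show ?thesis .
qed

lemma sum_card_nbrL_le: "(\<Sum>x\<in>V. real (card (nbrL r0 x))) \<le> real (card Vsub)"
proof -
  have "(\<Sum>x\<in>V. real (card (nbrL r0 x))) \<le> (\<Sum>x\<in>V. (if x \<in> Vsub then 1 else 0::real))"
  proof (intro sum_mono)
    fix x assume x: "x \<in> V"
    show "real (card (nbrL r0 x)) \<le> (if x \<in> Vsub then 1 else 0)"
      using card_nbrL_le_1[OF x] x by (auto simp: Vsub_def)
  qed
  also have "\<dots> = real (card Vsub)"
  proof -
    have "Vsub \<subseteq> V" by (auto simp: Vsub_def)
    then have "Vsub = V \<inter> Vsub" by blast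
    then show ?thesis using sum.inter_restrict[OF finite_V, of "\<lambda>_. 1::real" Vsub] by simp
  qed
  finally show ?thesis .
qed

lemma F_bond_ge: assumes "0 \<le> \<beta>" shows "2 * real (card copies) - 2 * \<beta> * real (card Vsub) \<le> F_bond r0 \<beta> V E"
proof -
  have "F_bond r0 \<beta> V E = (\<Sum>x\<in>V. 4 - real (card (nb x))) - 2 * \<beta> * (\<Sum>x\<in>V. real (card (nbrL r0 x)))"
    unfolding F_bond_def by (simp add: sum_subtractf sum_distrib_left)
  moreover have "2 * \<beta> * (\<Sum>x\<in>V. real (card (nbrL r0 x))) \<le> 2 * \<beta> * real (card Vsub)"
    using sum_card_nbrL_le assms by (intro mult_left_mono) auto
  ultimately show ?thesis using card_copies_le_valence by simp
qed

text \<open>A vertical copy outside \<open>T\<close> costs \<open>2\<close> in the first term and saves \<open>2\<beta> \<le> 2\<close> in the second.\<close>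

lemma F_bond_ge_subset: assumes "T \<subseteq> copies" "0 \<le> \<beta>" "\<beta> \<le> 1"
  shows "2 * real (card T) - 2 * \<beta> * real (card (T \<inter> vertical_copy ` Vsub)) \<le> F_bond r0 \<beta> V E"
proof -
  let ?VL = "vertical_copy ` Vsub"
  have finL: "finite Vsub" using finite_V by (auto simp: Vsub_def)
  have VLsub: "?VL \<subseteq> copies" using vertical_copy_in_copies by auto
  have fT: "finite T" using finite_subset[OF assms(1) finite_mcopies] .
  have fVL: "finite ?VL" using finL by simp
  have inj: "inj_on vertical_copy Vsub" using vertical_copy_inj by (auto intro: inj_onI)
  have cL: "card Vsub = card ?VL" using card_image[OF inj] by simp
  have cVL: "card ?VL = card (T \<inter> ?VL) + card (?VL - T)"
    using card_Int_Diff[OF fVL, of T] by (simp add: Int_commute)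
  have cU: "card (T \<union> ?VL) = card T + card (?VL - T)"
    using card_Un_disjoint[OF fT, of "?VL - T"] fVL by (simp add: Un_Diff_cancel)
  have "card (T \<union> ?VL) \<le> card copies" by (intro card_mono finite_mcopies) (use assms(1) VLsub in auto)
  then have "2 * real (card T) + 2 * real (card (?VL - T)) \<le> 2 * real (card copies)" using cU by linarith
  moreover have "2 * \<beta> * real (card Vsub) = 2 * \<beta> * real (card (T \<inter> ?VL)) + 2 * \<beta> * real (card (?VL - T))"
    using cL cVL by (simp add: algebra_simps)
  moreover have "2 * \<beta> * real (card (?VL - T)) \<le> 2 * real (card (?VL - T))"
    using mult_left_le_one_le[of "real (card (?VL - T))" \<beta>] assms by simp
  ultimately show ?thesis using F_bond_ge[OF assms(2)] by linarith
qed

section \<open>Crossing families and the main estimate\<close>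

definition other_copy :: "complex list set \<times> nat \<Rightarrow> complex \<Rightarrow> complex list set \<times> nat" where
  "other_copy A v = (SOME B. B \<in> copies \<and> B \<noteq> A \<and> v \<in> cpts B)"

lemma other_copy: assumes "v \<in> V"
  shows "other_copy A v \<in> copies" "other_copy A v \<noteq> A" "v \<in> cpts (other_copy A v)"
proof -
  obtain B1 B2 where "B1 \<in> copies" "B2 \<in> copies" "B1 \<noteq> B2" "v \<in> cpts B1" "v \<in> cpts B2"
    using two_copies_through[OF assms] by blast
  then have "\<exists>B. B \<in> copies \<and> B \<noteq> A \<and> v \<in> cpts B" by metis
  then have "other_copy A v \<in> copies \<and> other_copy A v \<noteq> A \<and> v \<in> cpts (other_copy A v)"
    unfolding other_copy_def by (rule someI_ex)
  then show "other_copy A v \<in> copies" "other_copy A v \<noteq> A" "v \<in> cpts (other_copy A v)" by auto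
qed

definition crossing :: "complex list set \<times> nat \<Rightarrow> (complex list set \<times> nat) set" where
  "crossing A = other_copy A ` cpts A"

lemma crossing_subset_copies: "A \<in> copies \<Longrightarrow> crossing A \<subseteq> copies"
  using other_copy(1) cpts_subset_V unfolding crossing_def by blast

lemma self_notin_crossing: assumes "A \<in> copies" shows "A \<notin> crossing A"
proof
  assume "A \<in> crossing A"
  then obtain v where "v \<in> cpts A" "other_copy A v = A" unfolding crossing_def by (metis imageE)
  then show False using other_copy(2)[of v A] cpts_subset_V[OF assms] by blast
qed

lemma crossing_meets: assumes "A \<in> copies" "B \<in> crossing A" shows "cpts B \<inter> cpts A \<noteq> {}"
proof -
  obtain v where "v \<in> cpts A" "B = other_copy A v" using assms(2) unfolding crossing_def by blast
  then show ?thesis using other_copy(3) cpts_subset_V[OF assms(1)] by blast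
qed

lemma finite_crossing: "A \<in> copies \<Longrightarrow> finite (crossing A)"
  unfolding crossing_def using slen_copies(3) by simp

text \<open>Two copies through distinct points of \<open>A\<close> are different, as they would otherwise meet \<open>A\<close> twice.\<close>

lemma card_crossing: assumes "A \<in> copies" shows "card (crossing A) = slen (fst A)"
proof -
  have "inj_on (other_copy A) (cpts A)"
  proof (rule inj_onI, rule ccontr)
    fix v v' assume h: "v \<in> cpts A" "v' \<in> cpts A" "other_copy A v = other_copy A v'" "v \<noteq> v'"
    then have "v \<in> V" "v' \<in> V" using cpts_subset_V[OF assms] by auto
    then show False
      using copies_share_one_point[OF assms other_copy(1) _ h(4,1,2), of v] other_copy(2,3) h(3) by metis
  qed
  then show ?thesis unfolding crossing_def using card_image slen_copies(1)[OF assms] by simp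
qed

lemma crossing_subset_sspan: assumes "A \<in> copies" "B \<in> crossing A" shows "cpts B \<subseteq> sspan S (fst A)"
  using cpts_subset_sspan[OF assms(1)] crossing_subset_copies[OF assms(1)] self_notin_crossing[OF assms(1)]
    crossing_meets[OF assms] assms(2) by blast

lemma F_bond_ge_family:
  assumes "T \<subseteq> copies" "0 \<le> \<beta>" "\<beta> \<le> 1" "card (T \<inter> vcopies) \<le> m"
  shows "2 * real (card T) - 2 * \<beta> * real m \<le> F_bond r0 \<beta> V E"
proof -
  have "\<beta> * real (card (T \<inter> vcopies)) \<le> \<beta> * real m"
    using assms(2,4) by (simp add: mult_left_mono)
  then show ?thesis using F_bond_ge_subset[OF assms(1-3)] by linarith
qed

text \<open>\<open>X\<close> misses the crossing family of \<open>A\<close> because \<open>w\<close> lies outside the span of \<open>A\<close>, and that of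
  \<open>A'\<close> since otherwise \<open>X\<close>, \<open>L\<close> and \<open>A'\<close> would form a triangle.\<close>

lemma crossed_copy_notin_crossing:
  assumes "A \<in> copies" "A' \<in> copies" "A \<noteq> A'" "cpts A \<inter> cpts A' \<noteq> {}" "w \<notin> sspan S (fst A)"
    "L \<in> copies" "L \<noteq> A'" "w \<in> cpts L" "y \<in> cpts L" "y \<in> cpts A'" "X \<in> copies" "X \<noteq> L" "w \<in> cpts X"
  shows "X \<notin> crossing A \<union> crossing A'"
proof
  assume X: "X \<in> crossing A \<union> crossing A'"
  have "X \<noteq> A'" using cpts_subset_sspan[OF assms(1,2) assms(3)[symmetric]] assms(4,5,13) by blast
  show False
  proof (cases "X \<in> crossing A")
    case True
    then show False using crossing_subset_sspan[OF assms(1)] assms(5,13) by blast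
  next
    case False
    then obtain c where "c \<in> cpts A'" "c \<in> cpts X" using X crossing_meets[OF assms(2)] by blast
    then show False using no_triangle[of X L A' w y c] assms \<open>X \<noteq> A'\<close> by blast
  qed
qed

lemma crossed_copy_not_vertical:
  assumes "A \<in> copies" "L \<in> copies" "L \<noteq> A" "X \<in> copies" "X \<noteq> L" "w \<in> cpts X" "w \<in> cpts L"
    "x \<in> cpts L" "x \<in> cpts A" "B \<in> crossing A" "B \<in> vcopies"
  shows "X \<notin> vcopies"
proof
  assume "X \<in> vcopies"
  obtain a where "a \<in> cpts A" "a \<in> cpts B" using crossing_meets[OF assms(1,10)] by blast
  then show False
    using no_vertical_chain[of X L A B w x a] assms \<open>X \<in> vcopies\<close> crossing_subset_copies[OF assms(1)]
      self_notin_crossing[OF assms(1)] vertical_vcopies by blast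
qed

end

locale meeting_copies = regular_graph +
  fixes A1 A2 :: "complex list set \<times> nat" and p :: complex
  assumes A1: "A1 \<in> copies" and A2: "A2 \<in> copies" and A12: "A1 \<noteq> A2"
    and p1: "p \<in> cpts A1" and p2: "p \<in> cpts A2"
begin

abbreviation "n1 \<equiv> slen (fst A1)"
abbreviation "n2 \<equiv> slen (fst A2)"
abbreviation "T \<equiv> crossing A1 \<union> crossing A2"

lemma crossing_disjoint: "crossing A1 \<inter> crossing A2 = {}"
proof (rule ccontr)
  assume "crossing A1 \<inter> crossing A2 \<noteq> {}"
  then obtain B where B: "B \<in> crossing A1" "B \<in> crossing A2" by blast
  obtain b1 where "b1 \<in> cpts B" "b1 \<in> cpts A1" using crossing_meets[OF A1 B(1)] by blast
  moreover obtain b2 where "b2 \<in> cpts A2" "b2 \<in> cpts B" using crossing_meets[OF A2 B(2)] by blast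
  ultimately show False
    using no_triangle[of A1 A2 B p b2 b1] A1 A2 A12 p1 p2 B crossing_subset_copies[OF A2]
      self_notin_crossing[OF A1] self_notin_crossing[OF A2] by blast
qed

lemma crossing_vertical: "vcopies \<inter> crossing A1 = {} \<or> vcopies \<inter> crossing A2 = {}"
proof (rule ccontr)
  assume "\<not> ?thesis"
  then obtain B1 B2 where B: "B1 \<in> vcopies" "B1 \<in> crossing A1" "B2 \<in> vcopies" "B2 \<in> crossing A2" by blast
  obtain a where "a \<in> cpts B1" "a \<in> cpts A1" using crossing_meets[OF A1 B(2)] by blast
  moreover obtain b where "b \<in> cpts A2" "b \<in> cpts B2" using crossing_meets[OF A2 B(4)] by blast
  ultimately show False
    using no_vertical_chain[of B1 A1 A2 B2 a p b] A1 A2 A12 p1 p2 B crossing_subset_copies[OF A1]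
      crossing_subset_copies[OF A2] self_notin_crossing[OF A1] self_notin_crossing[OF A2] vertical_vcopies
    by blast
qed

lemma T_subset_copies: "T \<subseteq> copies"
  using crossing_subset_copies[OF A1] crossing_subset_copies[OF A2] by blast

lemma finite_T: "finite T"
  using finite_crossing[OF A1] finite_crossing[OF A2] by blast

lemma card_T: "card T = n1 + n2"
  using card_Un_disjoint[OF finite_crossing[OF A1] finite_crossing[OF A2] crossing_disjoint]
    card_crossing[OF A1] card_crossing[OF A2] by simp

lemma card_T_vertical: "card (T \<inter> vcopies) \<le> max n1 n2"
proof (cases "vcopies \<inter> crossing A1 = {}")
  case True
  then have "card (T \<inter> vcopies) \<le> card (crossing A2)"
    by (intro card_mono finite_crossing[OF A2]) auto
  then show ?thesis using card_crossing[OF A2] by simp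
next
  case False
  then have "card (T \<inter> vcopies) \<le> card (crossing A1)"
    using crossing_vertical by (intro card_mono finite_crossing[OF A1]) auto
  then show ?thesis using card_crossing[OF A1] by simp
qed

lemma extension_common_vertex:
  assumes "w \<in> V" "w \<notin> sspan S (fst A1)" "w \<notin> sspan S (fst A2)"
  obtains X Y where "X \<in> copies" "Y \<in> copies" "X \<noteq> Y" "X \<notin> T" "Y \<notin> T"
    "card (insert X (insert Y T) \<inter> vcopies) \<le> max n1 n2 + 1"
proof -
  obtain X Y where W: "X \<in> copies" "Y \<in> copies" "X \<noteq> Y" "w \<in> cpts X" "w \<in> cpts Y"
    using two_copies_through[OF assms(1)] by blast
  have notT: "X \<notin> T" "Y \<notin> T"
    using crossing_subset_sspan[OF A1] crossing_subset_sspan[OF A2] assms(2,3) W(4,5) by blast+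
  have "{X, Y} \<inter> vcopies \<subseteq> {X} \<or> {X, Y} \<inter> vcopies \<subseteq> {Y}"
    using vertical_disjoint[OF W] vertical_vcopies by blast
  then have XY_vertical: "card ({X, Y} \<inter> vcopies) \<le> 1"
    using card_mono[of "{X}" "{X, Y} \<inter> vcopies"] card_mono[of "{Y}" "{X, Y} \<inter> vcopies"] by auto
  have "insert X (insert Y T) \<inter> vcopies = (T \<inter> vcopies) \<union> ({X, Y} \<inter> vcopies)" by blast
  then have "card (insert X (insert Y T) \<inter> vcopies) \<le> card (T \<inter> vcopies) + card ({X, Y} \<inter> vcopies)"
    using card_Un_le by simp
  then have "card (insert X (insert Y T) \<inter> vcopies) \<le> max n1 n2 + 1"
    using card_T_vertical XY_vertical by linarith
  then show ?thesis using that W(1-3) notT by blast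
qed

lemma card_extension_vertical:
  assumes "vcopies \<inter> crossing A1 \<noteq> {} \<Longrightarrow> Y \<notin> vcopies" "vcopies \<inter> crossing A2 \<noteq> {} \<Longrightarrow> X \<notin> vcopies"
  shows "card (insert X (insert Y T) \<inter> vcopies) \<le> max n1 n2 + 1"
proof (cases "vcopies \<inter> crossing A1 = {}")
  case False
  then have "Y \<notin> vcopies" "vcopies \<inter> crossing A2 = {}" using assms(1) crossing_vertical by blast+
  then have "card (insert X (insert Y T) \<inter> vcopies) \<le> card (insert X (crossing A1))"
    using finite_crossing[OF A1] by (intro card_mono) auto
  also have "\<dots> \<le> n1 + 1" using card_insert_if[OF finite_crossing[OF A1]] card_crossing[OF A1] by simp
  finally show ?thesis by simp
next
  case none1: True
  show ?thesis
  proof (cases "vcopies \<inter> crossing A2 = {}")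
    case False
    then have "card (insert X (insert Y T) \<inter> vcopies) \<le> card (insert Y (crossing A2))"
      using none1 assms(2) finite_crossing[OF A2] by (intro card_mono) auto
    also have "\<dots> \<le> n2 + 1" using card_insert_if[OF finite_crossing[OF A2]] card_crossing[OF A2] by simp
    finally show ?thesis by simp
  next
    case True
    then have "card (insert X (insert Y T) \<inter> vcopies) \<le> card {X, Y}"
      using none1 by (intro card_mono) auto
    also have "\<dots> \<le> n1 + 1" using slen_copies(1,2)[OF A1] by (simp add: card_insert_if)
    finally show ?thesis by simp
  qed
qed

text \<open>
  The extra copies are second copies through \<open>w\<^sub>1\<close> and \<open>w\<^sub>2\<close>, besides the copies joining them to
  \<open>A\<^sub>2\<close> and \<open>A\<^sub>1\<close>; they differ since otherwise they would close a pentagon.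
\<close>

lemma extension_crossed_vertices:
  assumes "w1 \<in> V" "w1 \<notin> sspan S (fst A1)" "w1 \<in> sspan S (fst A2)"
    "w2 \<in> V" "w2 \<notin> sspan S (fst A2)" "w2 \<in> sspan S (fst A1)"
  obtains X Y where "X \<in> copies" "Y \<in> copies" "X \<noteq> Y" "X \<notin> T" "Y \<notin> T"
    "card (insert X (insert Y T) \<inter> vcopies) \<le> max n1 n2 + 1"
proof -
  obtain L where L: "L \<in> copies" "L \<noteq> A2" "w1 \<in> cpts L" "cpts L \<inter> cpts A2 \<noteq> {}"
    using sspan_obtain_copy[OF A2 assms(3)] by blast
  obtain y where y: "y \<in> cpts L" "y \<in> cpts A2" using L(4) by blast
  obtain L' where L': "L' \<in> copies" "L' \<noteq> A1" "w2 \<in> cpts L'" "cpts L' \<inter> cpts A1 \<noteq> {}"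
    using sspan_obtain_copy[OF A1 assms(6)] by blast
  obtain x where x: "x \<in> cpts L'" "x \<in> cpts A1" using L'(4) by blast
  define X where "X = other_copy L w1"
  define Y where "Y = other_copy L' w2"
  have X: "X \<in> copies" "X \<noteq> L" "w1 \<in> cpts X" using other_copy[OF assms(1)] by (auto simp: X_def)
  have Y: "Y \<in> copies" "Y \<noteq> L'" "w2 \<in> cpts Y" using other_copy[OF assms(4)] by (auto simp: Y_def)
  have XT: "X \<notin> T"
    using crossed_copy_notin_crossing[OF A1 A2 A12 _ assms(2) L(1-3) y X] p1 p2 by blast
  have YT: "Y \<notin> T"
    using crossed_copy_notin_crossing[OF A2 A1 A12[symmetric] _ assms(5) L'(1-3) x Y] p1 p2 by blast
  have XY: "X \<noteq> Y"
  proof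
    assume "X = Y"
    then show False
      using no_pentagon[OF X(1) L(1) A2 A1 L'(1) X(2) L(2) A12[symmetric] L'(2)[symmetric] _ X(3) L(3) y p2 p1
          x(2) x(1) L'(3)] Y by auto
  qed
  have "card (insert X (insert Y T) \<inter> vcopies) \<le> max n1 n2 + 1"
  proof (rule card_extension_vertical)
    show "Y \<notin> vcopies" if "vcopies \<inter> crossing A1 \<noteq> {}"
      using crossed_copy_not_vertical[OF A1 L'(1,2) Y(1,2,3) L'(3) x] that by blast
    show "X \<notin> vcopies" if "vcopies \<inter> crossing A2 \<noteq> {}"
      using crossed_copy_not_vertical[OF A2 L(1,2) X(1,2,3) L(3) y] that by blast
  qed
  then show ?thesis using that X(1) Y(1) XY XT YT by blast
qed

lemma extension:
  assumes "sspan S (fst A1) \<subset> V" "sspan S (fst A2) \<subset> V"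
  obtains X Y where "X \<in> copies" "Y \<in> copies" "X \<noteq> Y" "X \<notin> T" "Y \<notin> T"
    "card (insert X (insert Y T) \<inter> vcopies) \<le> max n1 n2 + 1"
proof (cases "\<exists>w \<in> V. w \<notin> sspan S (fst A1) \<and> w \<notin> sspan S (fst A2)")
  case True
  then show ?thesis using extension_common_vertex that by blast
next
  case False
  obtain w1 where "w1 \<in> V" "w1 \<notin> sspan S (fst A1)" using assms(1) by blast
  moreover obtain w2 where "w2 \<in> V" "w2 \<notin> sspan S (fst A2)" using assms(2) by blast
  ultimately show ?thesis using extension_crossed_vertices[of w1 w2] False that by blast
qed

lemma main_copies:
  assumes "0 \<le> \<beta>" "\<beta> \<le> 1"
  shows "F_bond r0 \<beta> V E \<ge> 2 * (1 - \<beta>) * real (max n1 n2) + 2 * real (min n1 n2)"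
    and "sspan S (fst A1) \<subset> V \<Longrightarrow> sspan S (fst A2) \<subset> V \<Longrightarrow>
      F_bond r0 \<beta> V E \<ge> 2 * (1 - \<beta>) * real (max n1 n2) + 2 * real (min n1 n2) + (4 - 2 * \<beta>)"
proof -
  have maxmin: "real (max n1 n2) + real (min n1 n2) = real n1 + real n2" by (simp add: max_def min_def)
  have "2 * real (card T) - 2 * \<beta> * real (max n1 n2) \<le> F_bond r0 \<beta> V E"
    using F_bond_ge_family[OF T_subset_copies assms card_T_vertical] .
  then show "F_bond r0 \<beta> V E \<ge> 2 * (1 - \<beta>) * real (max n1 n2) + 2 * real (min n1 n2)"
    using card_T maxmin by (simp add: algebra_simps)
  show "F_bond r0 \<beta> V E \<ge> 2 * (1 - \<beta>) * real (max n1 n2) + 2 * real (min n1 n2) + (4 - 2 * \<beta>)"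
    if spans: "sspan S (fst A1) \<subset> V" "sspan S (fst A2) \<subset> V"
  proof -
    obtain X Y where XY: "X \<in> copies" "Y \<in> copies" "X \<noteq> Y" "X \<notin> T" "Y \<notin> T"
      and vert: "card (insert X (insert Y T) \<inter> vcopies) \<le> max n1 n2 + 1"
      using extension[OF spans] by blast
    have "insert X (insert Y T) \<subseteq> copies" using XY T_subset_copies by blast
    from F_bond_ge_family[OF this assms vert]
    have "2 * real (card (insert X (insert Y T))) - 2 * \<beta> * real (max n1 n2 + 1) \<le> F_bond r0 \<beta> V E" .
    moreover have "card (insert X (insert Y T)) = n1 + n2 + 2" using XY finite_T card_T by simp
    ultimately show ?thesis using maxmin by (simp add: algebra_simps)
  qed
qed

end


theorem lemma3p9:
  fixes r0 \<beta> \<epsilon> :: real and V :: "complex set" and E :: "complex set set"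
    and s1 s2 :: "complex list set"
  assumes "1 < r0" and "r0 < sqrt 2"
    and "0 < \<beta>" and "\<beta> < 1"
    and "0 < \<epsilon>" and "\<epsilon> \<le> pi / 39"
    and "admissible_graph V E"
    and "eps_regular r0 \<epsilon> V E"
    and "\<forall>\<gamma>. straight \<epsilon> V E \<gamma> \<longrightarrow> theta_ex \<gamma> < pi / 10 - 7 / 5 * \<epsilon>"
    and "s1 \<in># strata \<epsilon> V E"
    and "s2 \<in># sperp (strata \<epsilon> V E) s1"
  shows "F_bond r0 \<beta> V E \<ge> 2 * (1 - \<beta>) * real (max (slen s1) (slen s2)) + 2 * real (min (slen s1) (slen s2))
    \<and> (sspan (strata \<epsilon> V E) s1 \<subset> V \<and> sspan (strata \<epsilon> V E) s2 \<subset> V \<longrightarrow>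
         F_bond r0 \<beta> V E \<ge> 2 * (1 - \<beta>) * real (max (slen s1) (slen s2)) + 2 * real (min (slen s1) (slen s2)) + (4 - 2 * \<beta>))"
proof -
  interpret regular_graph r0 \<epsilon> V E
    by unfold_locales (use assms in auto)
  have s2: "s2 \<in># strata \<epsilon> V E - {#s1#}" "spoints s2 \<inter> spoints s1 \<noteq> {}"
    using assms(11) in_sperp_iff by auto
  have A1: "(s1, 0) \<in> mcopies (strata \<epsilon> V E)" using assms(10) by (simp add: mcopies_def)
  obtain A2 where A2: "A2 \<in> mcopies (strata \<epsilon> V E)" "A2 \<noteq> (s1, 0)" "fst A2 = s2"
    using mcopies_obtain_other[OF A1] s2(1) by auto
  obtain p where "p \<in> cpts (s1, 0)" "p \<in> cpts A2" using s2(2) A2(3) by (auto simp: cpts_def)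
  then interpret pair: meeting_copies r0 \<epsilon> V E "(s1, 0)" A2 p
    using A1 A2 regular_graph_axioms by (simp add: meeting_copies_def meeting_copies_axioms_def)
  show ?thesis using pair.main_copies assms(3,4) A2(3) by simp
qed

end
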